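(* A road map $(\{H^\alpha_p\},\{V^\beta_q\})$ is straight if and only if all of the following hold: (a) for each arrow $h_k$ and all $1\le p\le u_{\mathrm{t}(h_k)}$, $1\le q\le u_{\mathrm{s}(h_k)}$, the intersection $H^{\mathrm{t}(h_k)}_p|_k\cap V^{\mathrm{s}(h_k)}_q|_k$ is a (nonempty) connected path $P^k_{pq}\rightsquigarrow Q^k_{pq}$, with SW endpoint $P^k_{pq}$ and NE endpoint $Q^k_{pq}$; (b) for each $\alpha\in V_{\rm target}$, with $r_1<\dots<r_s$ the indices of the arrows with target $\alpha$, and each $p$, the path $H^\alpha_p$ is the unique path obtained by joining, from SW to NE, by straight horizontal segments, the following in order: the point $(a_\alpha-u_\alpha+p,1)$; the subpaths $P^{r_1}_{p,1}\rightsquigarrow Q^{r_1}_{p,1},\dots,P^{r_1}_{p,u_{\mathrm{s}(h_{r_1})}}\rightsquigarrow Q^{r_1}_{p,u_{\mathrm{s}(h_{r_1})}}$; then the analogous subpaths for $r_2$, ..., for $r_s$ (all regarded in $A_\alpha$); and the point $(p,b_\alpha)$; (c) for each $\beta\in V_{\rm source}$, with $r'_1<\dots<r'_t$ the indices of the arrows with source $\beta$, and each $q$, the path $V^\beta_q$ is the unique path obtained by joining, from NE to SW, by straight vertical segments, the following in order: the point $(1,b_\beta-u_\beta+q)$; the subpaths $Q^{r'_1}_{1,q}\rightsquigarrow P^{r'_1}_{1,q},\dots,Q^{r'_1}_{u_{\mathrm{t}(h_{r'_1})},q}\rightsquigarrow P^{r'_1}_{u_{\mathrm{t}(h_{r'_1})},q}$;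 then the analogous subpaths for $r'_2$, ..., for $r'_t$ (all regarded in $A_\beta$); and the point $(a_\beta,q)$.
   Context: Let $\mathcal{Q}$ be a bipartite quiver with vertex set $V_{\mathcal{Q}}=V_{\rm source}\sqcup V_{\rm target}$ and arrows $h_1,\dots,h_r$, each $h_k$ from $\mathrm{s}(h_k)\in V_{\rm source}$ to $\mathrm{t}(h_k)\in V_{\rm target}$. Let $\mathbf{m}=(m_\gamma)$, $\mathbf{u}=(u_\gamma)$ be tuples of nonnegative integers indexed by $V_{\mathcal{Q}}$. For $k=1,\dots,r$ let $X^{(k)}$ be an $m_{\mathrm{t}(h_k)}\times m_{\mathrm{s}(h_k)}$ matrix of variables $x^{(k)}_{ij}$; page $k$ is the grid $[1,m_{\mathrm{t}(h_k)}]\times[1,m_{\mathrm{s}(h_k)}]$. For $\alpha\in V_{\rm target}$ with $r_1<\dots<r_s$ the indices of arrows with target $\alpha$, $A_\alpha=[X^{(r_1)}|\cdots|X^{(r_s)}]$; for $\beta\in V_{\rm source}$ with $r'_1<\dots<r'_t$ the indices of arrows with source $\beta$, $A_\beta$ is the stack of $X^{(r'_1)},\dots,X^{(r'_t)}$ top to bottom. $a_\gamma\times b_\gamma$ is the size of $A_\gamma$; $v_\alpha=\sum_{k:\mathrm{t}(h_k)=\alpha}u_{\mathrm{s}(h_k)}$, $v_\beta=\sum_{k:\mathrm{s}(h_k)=\beta}u_{\mathrm{t}(h_k)}$. Standing assumption: $0<u_\gamma\le\min(a_\gamma,b_\gamma)$, $u_\alpha\le v_\alpha$, $u_\beta\le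 v_\beta$. $L=\{(i,j,k):1\le k\le r,(i,j)\text{ in page }k\}$; $\phi_\gamma$ sends a position $(p,q)$ of $A_\gamma$ to $(i,j,k)$ if that entry is $x^{(k)}_{ij}$ (so each page is a block of $A_{\mathrm{t}(h_k)}$ and a block of $A_{\mathrm{s}(h_k)}$). Coordinates $(i,j)$: $i$ row index (increasing downward; north = decreasing $i$), $j$ column index (increasing eastward). A path is a lattice path with unit steps going east $(0,1)$ or north $(-1,0)$ from its SW endpoint to its NE endpoint; nonintersecting = no shared vertex; a path is straight horizontal (vertical) if it has no vertical (horizontal) edge. A corner of a path is a vertex adjacent to both a horizontal and a vertical edge of it. A road map consists of, for each $\alpha\in V_{\rm target}$, nonintersecting paths $H^\alpha_1,\dots,H^\alpha_{u_\alpha}$ in the grid of $A_\alpha$, $H^\alpha_p$ with endpoints $(a_\alpha-u_\alpha+p,1)$ and $(p,b_\alpha)$, and for each $\beta\in V_{\rm source}$ nonintersecting paths $V^\beta_1,\dots,V^\beta_{u_\beta}$ in the grid of $A_\beta$, $V^\beta_q$ with endpoints $(1,b_\beta-u_\beta+q)$ and $(a_\beta,q)$. $H|_k$ denotes the restriction of a path $H$ to the block of page $k$, regarded in page-$k$ coordinates. The road map is straight if every corner of a horizontal path lies (via the $\phi_\gamma$, as a point of $L$) on some vertical path and every corner of a vertical path lies on some horizontal path. *)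

theory Defs
  imports Main
begin

text \<open>Points of a grid are pairs (i,j) of integers: i = row index (increasing
downward, north = decreasing i), j = column index (increasing eastward).
A lattice path is represented by the list of its vertices from its SW endpoint
to its NE endpoint; every step goes east (0,1) or north (-1,0).\<close>

type_synonym pt = "int \<times> int"

definition lattice_path :: "pt list \<Rightarrow> bool" where
  "lattice_path P \<longleftrightarrow> P \<noteq> [] \<and>
     (\<forall>n. Suc n < length P \<longrightarrow>
        P ! Suc n = (fst (P ! n), snd (P ! n) + 1) \<or> P ! Suc n = (fst (P ! n) - 1, snd (P ! n)))"

definition in_grid :: "nat \<Rightarrow> nat \<Rightarrow> pt list \<Rightarrow> bool" where
  "in_grid a b P \<longleftrightarrow> (\<forall>x\<in>set P. 1 \<le> fst x \<and> fst x \<le> int a \<and> 1 \<le> snd x \<and> snd x \<le> int b)"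

text \<open>Corners: vertices adjacent to both a horizontal and a vertical edge of the path.\<close>
definition corners :: "pt list \<Rightarrow> pt set" where
  "corners P = {P ! n | n. 0 < n \<and> Suc n < length P \<and>
      ((fst (P ! (n - 1)) = fst (P ! n)) \<noteq> (fst (P ! n) = fst (P ! Suc n)))}"

definition arrows_into :: "nat \<Rightarrow> (nat \<Rightarrow> 'v) \<Rightarrow> 'v \<Rightarrow> nat list" where
  "arrows_into r tgt \<alpha> = filter (\<lambda>k. tgt k = \<alpha>) [1..<Suc r]"

definition arrows_from :: "nat \<Rightarrow> (nat \<Rightarrow> 'v) \<Rightarrow> 'v \<Rightarrow> nat list" where
  "arrows_from r src \<beta> = filter (\<lambda>k. src k = \<beta>) [1..<Suc r]"

definition aT :: "('v \<Rightarrow> nat) \<Rightarrow> 'v \<Rightarrow> nat" where "aT m \<alpha> = m \<alpha>"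
definition bT :: "nat \<Rightarrow> (nat \<Rightarrow> 'v) \<Rightarrow> (nat \<Rightarrow> 'v) \<Rightarrow> ('v \<Rightarrow> nat) \<Rightarrow> 'v \<Rightarrow> nat" where
  "bT r src tgt m \<alpha> = (\<Sum>k\<in>{k\<in>{1..r}. tgt k = \<alpha>}. m (src k))"
definition aS :: "nat \<Rightarrow> (nat \<Rightarrow> 'v) \<Rightarrow> (nat \<Rightarrow> 'v) \<Rightarrow> ('v \<Rightarrow> nat) \<Rightarrow> 'v \<Rightarrow> nat" where
  "aS r src tgt m \<beta> = (\<Sum>k\<in>{k\<in>{1..r}. src k = \<beta>}. m (tgt k))"
definition bS :: "('v \<Rightarrow> nat) \<Rightarrow> 'v \<Rightarrow> nat" where "bS m \<beta> = m \<beta>"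

definition vT :: "nat \<Rightarrow> (nat \<Rightarrow> 'v) \<Rightarrow> (nat \<Rightarrow> 'v) \<Rightarrow> ('v \<Rightarrow> nat) \<Rightarrow> 'v \<Rightarrow> nat" where
  "vT r src tgt u \<alpha> = (\<Sum>k\<in>{k\<in>{1..r}. tgt k = \<alpha>}. u (src k))"
definition vS :: "nat \<Rightarrow> (nat \<Rightarrow> 'v) \<Rightarrow> (nat \<Rightarrow> 'v) \<Rightarrow> ('v \<Rightarrow> nat) \<Rightarrow> 'v \<Rightarrow> nat" where
  "vS r src tgt u \<beta> = (\<Sum>k\<in>{k\<in>{1..r}. src k = \<beta>}. u (tgt k))"

text \<open>Offsets of page k: column offset inside A_(tgt k) (pages placed side by side in
increasing arrow order) and row offset inside A_(src k) (pages stacked top to bottom).\<close>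
definition colOff :: "(nat \<Rightarrow> 'v) \<Rightarrow> (nat \<Rightarrow> 'v) \<Rightarrow> ('v \<Rightarrow> nat) \<Rightarrow> nat \<Rightarrow> int" where
  "colOff src tgt m k = int (\<Sum>k'\<in>{k'\<in>{1..<k}. tgt k' = tgt k}. m (src k'))"
definition rowOff :: "(nat \<Rightarrow> 'v) \<Rightarrow> (nat \<Rightarrow> 'v) \<Rightarrow> ('v \<Rightarrow> nat) \<Rightarrow> nat \<Rightarrow> int" where
  "rowOff src tgt m k = int (\<Sum>k'\<in>{k'\<in>{1..<k}. src k' = src k}. m (tgt k'))"

definition embT :: "(nat \<Rightarrow> 'v) \<Rightarrow> (nat \<Rightarrow> 'v) \<Rightarrow> ('v \<Rightarrow> nat) \<Rightarrow> nat \<Rightarrow> pt \<Rightarrow> pt" where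
  "embT src tgt m k x = (fst x, colOff src tgt m k + snd x)"
definition embS :: "(nat \<Rightarrow> 'v) \<Rightarrow> (nat \<Rightarrow> 'v) \<Rightarrow> ('v \<Rightarrow> nat) \<Rightarrow> nat \<Rightarrow> pt \<Rightarrow> pt" where
  "embS src tgt m k x = (rowOff src tgt m k + fst x, snd x)"

text \<open>Restriction H|_k of a path in A_(tgt k) (resp. V|_k of a path in A_(src k)) to the
block of page k, in page-k coordinates.\<close>
definition restrT :: "(nat \<Rightarrow> 'v) \<Rightarrow> (nat \<Rightarrow> 'v) \<Rightarrow> ('v \<Rightarrow> nat) \<Rightarrow> nat \<Rightarrow> pt list \<Rightarrow> pt list" where
  "restrT src tgt m k P =
     map (\<lambda>x. (fst x, snd x - colOff src tgt m k))
       (filter (\<lambda>x. colOff src tgt m k < snd x \<and> snd x \<le> colOff src tgt m k + int (m (src k))) P)"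
definition restrS :: "(nat \<Rightarrow> 'v) \<Rightarrow> (nat \<Rightarrow> 'v) \<Rightarrow> ('v \<Rightarrow> nat) \<Rightarrow> nat \<Rightarrow> pt list \<Rightarrow> pt list" where
  "restrS src tgt m k P =
     map (\<lambda>x. (fst x - rowOff src tgt m k, snd x))
       (filter (\<lambda>x. rowOff src tgt m k < fst x \<and> fst x \<le> rowOff src tgt m k + int (m (tgt k))) P)"

definition road_map ::
  "'v set \<Rightarrow> 'v set \<Rightarrow> nat \<Rightarrow> (nat \<Rightarrow> 'v) \<Rightarrow> (nat \<Rightarrow> 'v) \<Rightarrow> ('v \<Rightarrow> nat) \<Rightarrow> ('v \<Rightarrow> nat)
   \<Rightarrow> ('v \<Rightarrow> nat \<Rightarrow> pt list) \<Rightarrow> ('v \<Rightarrow> nat \<Rightarrow> pt list) \<Rightarrow> bool" where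
  "road_map Vs Vt r src tgt m u H V \<longleftrightarrow>
     (\<forall>\<alpha>\<in>Vt. (\<forall>p\<in>{1..u \<alpha>}.
          lattice_path (H \<alpha> p) \<and> in_grid (aT m \<alpha>) (bT r src tgt m \<alpha>) (H \<alpha> p) \<and>
          hd (H \<alpha> p) = (int (aT m \<alpha>) - int (u \<alpha>) + int p, 1) \<and>
          last (H \<alpha> p) = (int p, int (bT r src tgt m \<alpha>))) \<and>
        (\<forall>p\<in>{1..u \<alpha>}. \<forall>p'\<in>{1..u \<alpha>}. p \<noteq> p' \<longrightarrow> set (H \<alpha> p) \<inter> set (H \<alpha> p') = {})) \<and>
     (\<forall>\<beta>\<in>Vs. (\<forall>q\<in>{1..u \<beta>}.
          lattice_path (V \<beta> q) \<and> in_grid (aS r src tgt m \<beta>) (bS m \<beta>) (V \<beta> q) \<and>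
          last (V \<beta> q) = (1, int (bS m \<beta>) - int (u \<beta>) + int q) \<and>
          hd (V \<beta> q) = (int (aS r src tgt m \<beta>), int q)) \<and>
        (\<forall>q\<in>{1..u \<beta>}. \<forall>q'\<in>{1..u \<beta>}. q \<noteq> q' \<longrightarrow> set (V \<beta> q) \<inter> set (V \<beta> q') = {}))"

text \<open>A position c of A_alpha corresponds to the point (i,j,k) of L
iff tgt k = alpha, (i,j) lies in page k and c = embT k (i,j); similarly for A_beta.\<close>
definition straight_road_map ::
  "'v set \<Rightarrow> 'v set \<Rightarrow> nat \<Rightarrow> (nat \<Rightarrow> 'v) \<Rightarrow> (nat \<Rightarrow> 'v) \<Rightarrow> ('v \<Rightarrow> nat) \<Rightarrow> ('v \<Rightarrow> nat)
   \<Rightarrow> ('v \<Rightarrow> nat \<Rightarrow> pt list) \<Rightarrow> ('v \<Rightarrow> nat \<Rightarrow> pt list) \<Rightarrow> bool" where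
  "straight_road_map Vs Vt r src tgt m u H V \<longleftrightarrow>
     (\<forall>\<alpha>\<in>Vt. \<forall>p\<in>{1..u \<alpha>}. \<forall>c\<in>corners (H \<alpha> p).
        \<exists>k\<in>{1..r}. \<exists>x. tgt k = \<alpha> \<and>
          1 \<le> fst x \<and> fst x \<le> int (m (tgt k)) \<and> 1 \<le> snd x \<and> snd x \<le> int (m (src k)) \<and>
          c = embT src tgt m k x \<and>
          (\<exists>q\<in>{1..u (src k)}. embS src tgt m k x \<in> set (V (src k) q))) \<and>
     (\<forall>\<beta>\<in>Vs. \<forall>q\<in>{1..u \<beta>}. \<forall>c\<in>corners (V \<beta> q).
        \<exists>k\<in>{1..r}. \<exists>x. src k = \<beta> \<and>
          1 \<le> fst x \<and> fst x \<le> int (m (tgt k)) \<and> 1 \<le> snd x \<and> snd x \<le> int (m (src k)) \<and>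
          c = embS src tgt m k x \<and>
          (\<exists>p\<in>{1..u (tgt k)}. embT src tgt m k x \<in> set (H (tgt k) p)))"

definition segH :: "(nat \<Rightarrow> 'v) \<Rightarrow> (nat \<Rightarrow> 'v) \<Rightarrow> ('v \<Rightarrow> nat)
   \<Rightarrow> ('v \<Rightarrow> nat \<Rightarrow> pt list) \<Rightarrow> ('v \<Rightarrow> nat \<Rightarrow> pt list) \<Rightarrow> nat \<Rightarrow> nat \<Rightarrow> nat \<Rightarrow> pt list" where
  "segH src tgt m H V k p q =
     filter (\<lambda>x. x \<in> set (restrS src tgt m k (V (src k) q))) (restrT src tgt m k (H (tgt k) p))"
definition segV :: "(nat \<Rightarrow> 'v) \<Rightarrow> (nat \<Rightarrow> 'v) \<Rightarrow> ('v \<Rightarrow> nat)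
   \<Rightarrow> ('v \<Rightarrow> nat \<Rightarrow> pt list) \<Rightarrow> ('v \<Rightarrow> nat \<Rightarrow> pt list) \<Rightarrow> nat \<Rightarrow> nat \<Rightarrow> nat \<Rightarrow> pt list" where
  "segV src tgt m H V k p q =
     filter (\<lambda>x. x \<in> set (restrT src tgt m k (H (tgt k) p))) (restrS src tgt m k (V (src k) q))"

text \<open>Condition (a) for a triple (k,p,q): the intersection is nonempty and forms a connected
(contiguous) subpath of both restricted paths; it is then the path P^k_pq ~> Q^k_pq with
P^k_pq = hd, Q^k_pq = last of segH.\<close>
definition connected_inter :: "(nat \<Rightarrow> 'v) \<Rightarrow> (nat \<Rightarrow> 'v) \<Rightarrow> ('v \<Rightarrow> nat)
   \<Rightarrow> ('v \<Rightarrow> nat \<Rightarrow> pt list) \<Rightarrow> ('v \<Rightarrow> nat \<Rightarrow> pt list) \<Rightarrow> nat \<Rightarrow> nat \<Rightarrow> nat \<Rightarrow> bool" where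
  "connected_inter src tgt m H V k p q \<longleftrightarrow>
     segH src tgt m H V k p q \<noteq> [] \<and>
     lattice_path (segH src tgt m H V k p q) \<and>
     (\<exists>xs ys. restrT src tgt m k (H (tgt k) p) = xs @ segH src tgt m H V k p q @ ys) \<and>
     (\<exists>xs ys. restrS src tgt m k (V (src k) q) = xs @ segV src tgt m H V k p q @ ys)"

fun hjoin :: "pt list \<Rightarrow> pt list list \<Rightarrow> pt list option" where
  "hjoin acc [] = Some acc"
| "hjoin acc (Y # Ys) =
     (if acc \<noteq> [] \<and> Y \<noteq> [] \<and> fst (last acc) = fst (hd Y) \<and> snd (last acc) \<le> snd (hd Y)
      then hjoin (acc @ map (\<lambda>j. (fst (last acc), j)) [snd (last acc) + 1 .. snd (hd Y) - 1]
                      @ (if last acc = hd Y then tl Y else Y)) Ys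
      else None)"

fun vjoin :: "pt list \<Rightarrow> pt list list \<Rightarrow> pt list option" where
  "vjoin acc [] = Some acc"
| "vjoin acc (Y # Ys) =
     (if acc \<noteq> [] \<and> Y \<noteq> [] \<and> snd (last acc) = snd (hd Y) \<and> fst (last acc) \<le> fst (hd Y)
      then vjoin (acc @ map (\<lambda>i. (i, snd (last acc))) [fst (last acc) + 1 .. fst (hd Y) - 1]
                      @ (if last acc = hd Y then tl Y else Y)) Ys
      else None)"

text \<open>Pieces for (b): for alpha and p, the subpaths P^k_{p,q} ~> Q^k_{p,q} regarded in A_alpha,
for the arrows k into alpha in increasing order and q = 1..u(src k).\<close>
definition pieces_H :: "nat \<Rightarrow> (nat \<Rightarrow> 'v) \<Rightarrow> (nat \<Rightarrow> 'v) \<Rightarrow> ('v \<Rightarrow> nat) \<Rightarrow> ('v \<Rightarrow> nat)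
   \<Rightarrow> ('v \<Rightarrow> nat \<Rightarrow> pt list) \<Rightarrow> ('v \<Rightarrow> nat \<Rightarrow> pt list) \<Rightarrow> 'v \<Rightarrow> nat \<Rightarrow> pt list list" where
  "pieces_H r src tgt m u H V \<alpha> p =
     concat (map (\<lambda>k. map (\<lambda>q. map (embT src tgt m k) (segH src tgt m H V k p q)) [1..<Suc (u (src k))])
                 (arrows_into r tgt \<alpha>))"

text \<open>Pieces for (c): for beta and q, the subpaths Q^k_{p,q} ~> P^k_{p,q} (traversed from NE to SW)
regarded in A_beta, for the arrows k out of beta in increasing order and p = 1..u(tgt k).\<close>
definition pieces_V :: "nat \<Rightarrow> (nat \<Rightarrow> 'v) \<Rightarrow> (nat \<Rightarrow> 'v) \<Rightarrow> ('v \<Rightarrow> nat) \<Rightarrow> ('v \<Rightarrow> nat)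
   \<Rightarrow> ('v \<Rightarrow> nat \<Rightarrow> pt list) \<Rightarrow> ('v \<Rightarrow> nat \<Rightarrow> pt list) \<Rightarrow> 'v \<Rightarrow> nat \<Rightarrow> pt list list" where
  "pieces_V r src tgt m u H V \<beta> q =
     concat (map (\<lambda>k. map (\<lambda>p. rev (map (embS src tgt m k) (segV src tgt m H V k p q))) [1..<Suc (u (tgt k))])
                 (arrows_from r src \<beta>))"

end

(* On the page of an arrow, a road map restricts to horizontal paths h_p and vertical paths v_q
   which are again straight inside the page.  There an induction over the rows, starting at the
   north boundary, shows that every vertical edge of an h_p is an edge of some v_q, and by the
   anti-diagonal symmetry every horizontal edge of a v_q is an edge of some h_p.  Hence h_p and
   v_q, after separating, can never meet again, so their intersection is one common subpath; it
   is nonempty because v_q crosses the page from south to north and h_p from west to east, and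
   along h_p these subpaths appear in the order of q.  They contain every vertical edge of H_p,
   so joining them by straight horizontal segments gives H_p back, which is (b); (c) is
   symmetric.  Conversely, a join by straight segments creates no turn outside the pieces, so
   every corner lies in a piece, that is, on a path of the other family. *)

theory Submission
  imports Defs "HOL-Library.Sublist"
begin

section \<open>Lattice paths\<close>

text \<open>Every step of a lattice path raises the level by one, so along a path the level of a
vertex is its index up to a shift; most arguments below compare vertices by their level.\<close>

definition level :: "pt \<Rightarrow> int" where "level z = snd z - fst z"

definition east :: "pt \<Rightarrow> pt" where "east z = (fst z, snd z + 1)"
definition north :: "pt \<Rightarrow> pt" where "north z = (fst z - 1, snd z)"
definition west :: "pt \<Rightarrow> pt" where "west z = (fst z, snd z - 1)"
definition south :: "pt \<Rightarrow> pt" where "south z = (fst z + 1, snd z)"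

lemma level_neighbours [simp]:
  "level (east z) = level z + 1" "level (north z) = level z + 1"
  "level (west z) = level z - 1" "level (south z) = level z - 1"
  by (simp_all add: level_def east_def north_def west_def south_def)

lemma lattice_path_nonempty: "lattice_path P \<Longrightarrow> P \<noteq> []"
  unfolding lattice_path_def by blast

lemma lattice_path_hd_in: "lattice_path P \<Longrightarrow> hd P \<in> set P"
  using lattice_path_nonempty by auto

lemma lattice_path_last_in: "lattice_path P \<Longrightarrow> last P \<in> set P"
  using lattice_path_nonempty by auto

lemma lattice_path_step:
  "lattice_path P \<Longrightarrow> Suc n < length P \<Longrightarrow> P ! Suc n = east (P ! n) \<or> P ! Suc n = north (P ! n)"
  unfolding lattice_path_def east_def north_def by blast

lemma lattice_path_map:
  assumes "lattice_path P" "\<And>z. f (east z) = east (f z)" "\<And>z. f (north z) = north (f z)"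
  shows "lattice_path (map f P)"
  unfolding lattice_path_def
proof (intro conjI allI impI)
  show "map f P \<noteq> []" using lattice_path_nonempty[OF assms(1)] by simp
  fix n assume n: "Suc n < length (map f P)"
  have "P ! Suc n = east (P ! n) \<or> P ! Suc n = north (P ! n)"
    using lattice_path_step[OF assms(1)] n by simp
  then have "f (P ! Suc n) = east (f (P ! n)) \<or> f (P ! Suc n) = north (f (P ! n))"
    using assms(2,3) by metis
  then show "map f P ! Suc n = (fst (map f P ! n), snd (map f P ! n) + 1) \<or>
      map f P ! Suc n = (fst (map f P ! n) - 1, snd (map f P ! n))"
    using n by (simp add: east_def north_def)
qed

lemma lattice_path_sublist:
  assumes "lattice_path L" "sublist Y L" "Y \<noteq> []"
  shows "lattice_path Y"
proof -
  obtain ps ss where L: "L = ps @ Y @ ss" using assms(2) by (auto simp: sublist_def)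
  have "Y ! Suc n = east (Y ! n) \<or> Y ! Suc n = north (Y ! n)" if "Suc n < length Y" for n
    using lattice_path_step[OF assms(1), of "length ps + n"] that by (simp add: L nth_append)
  with assms(3) show ?thesis unfolding lattice_path_def east_def north_def by blast
qed

lemma level_nth:
  assumes "lattice_path P" "n < length P"
  shows "level (P ! n) = level (hd P) + int n"
  using assms(2)
proof (induction n)
  case 0
  then show ?case using lattice_path_nonempty[OF assms(1)] by (simp add: hd_conv_nth)
next
  case (Suc n)
  with lattice_path_step[OF assms(1) Suc.prems] show ?case by auto
qed

lemma lattice_path_nth_mono:
  assumes "lattice_path P" "i \<le> j" "j < length P"
  shows "fst (P ! j) \<le> fst (P ! i) \<and> snd (P ! i) \<le> snd (P ! j)"
  using assms(2,3)
proof (induction j)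
  case (Suc j)
  show ?case
  proof (cases "i = Suc j")
    case False
    with Suc have "fst (P ! j) \<le> fst (P ! i) \<and> snd (P ! i) \<le> snd (P ! j)" by simp
    with lattice_path_step[OF assms(1) Suc.prems(2)] show ?thesis
      by (auto simp: east_def north_def)
  qed simp
qed simp

lemma lattice_path_index:
  assumes "lattice_path P" "z \<in> set P"
  obtains n where "n < length P" "P ! n = z" "int n = level z - level (hd P)"
proof -
  from assms(2) obtain n where "n < length P" "P ! n = z" by (auto simp: in_set_conv_nth)
  with level_nth[OF assms(1)] that show ?thesis by force
qed

lemma lattice_path_level_inj:
  assumes "lattice_path P" "z \<in> set P" "w \<in> set P" "level z = level w"
  shows "z = w"
proof -
  obtain i where i: "P ! i = z" "int i = level z - level (hd P)"
    using lattice_path_index[OF assms(1,2)] by blast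
  obtain j where j: "P ! j = w" "int j = level w - level (hd P)"
    using lattice_path_index[OF assms(1,3)] by blast
  from i(2) j(2) assms(4) have "i = j" by simp
  with i j show ?thesis by simp
qed

lemma lattice_path_mono:
  assumes "lattice_path P" "z \<in> set P" "w \<in> set P" "level z \<le> level w"
  shows "fst w \<le> fst z \<and> snd z \<le> snd w"
proof -
  obtain i where i: "i < length P" "P ! i = z" "int i = level z - level (hd P)"
    using lattice_path_index[OF assms(1,2)] by blast
  obtain j where j: "j < length P" "P ! j = w" "int j = level w - level (hd P)"
    using lattice_path_index[OF assms(1,3)] by blast
  from i j assms(4) have "i \<le> j" by simp
  from lattice_path_nth_mono[OF assms(1) this j(1)] i j show ?thesis by simp
qed

lemma level_hd_le: "lattice_path P \<Longrightarrow> z \<in> set P \<Longrightarrow> level (hd P) \<le> level z"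
  by (metis lattice_path_index of_nat_0_le_iff diff_ge_0_iff_ge)

lemma level_le_last: "lattice_path P \<Longrightarrow> z \<in> set P \<Longrightarrow> level z \<le> level (last P)"
proof -
  assume P: "lattice_path P" and z: "z \<in> set P"
  obtain n where "n < length P" "P ! n = z" "int n = level z - level (hd P)"
    using lattice_path_index[OF P z] by blast
  moreover have "level (last P) = level (hd P) + int (length P - 1)"
    using level_nth[OF P, of "length P - 1"] lattice_path_nonempty[OF P]
      by (simp add: last_conv_nth)
  ultimately show ?thesis by linarith
qed

lemma lattice_path_succ:
  assumes "lattice_path P" "z \<in> set P" "z \<noteq> last P"
  shows "east z \<in> set P \<or> north z \<in> set P"
proof -
  obtain n where n: "n < length P" "P ! n = z" using assms(2) by (auto simp: in_set_conv_nth)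
  with assms(3) lattice_path_nonempty[OF assms(1)] have "Suc n < length P"
    by (metis Suc_lessI diff_Suc_1 last_conv_nth)
  with lattice_path_step[OF assms(1) this] n show ?thesis by (metis nth_mem)
qed

lemma lattice_path_pred:
  assumes "lattice_path P" "z \<in> set P" "z \<noteq> hd P"
  shows "west z \<in> set P \<or> south z \<in> set P"
proof -
  obtain n where n: "n < length P" "P ! n = z" using assms(2) by (auto simp: in_set_conv_nth)
  with assms(3) lattice_path_nonempty[OF assms(1)] obtain k where k: "n = Suc k"
    by (metis hd_conv_nth not0_implies_Suc)
  from lattice_path_step[OF assms(1), of k] n k have "P ! k = west z \<or> P ! k = south z"
    by (auto simp: east_def north_def west_def south_def)
  with n k show ?thesis by (metis Suc_lessD nth_mem)
qed

lemma not_east_and_north: "lattice_path P \<Longrightarrow> east z \<in> set P \<Longrightarrow> north z \<in> set P \<Longrightarrow> False"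
  using lattice_path_level_inj[of P "east z" "north z"] by (auto simp: east_def north_def level_def)

lemma not_west_and_south: "lattice_path P \<Longrightarrow> west z \<in> set P \<Longrightarrow> south z \<in> set P \<Longrightarrow> False"
  using lattice_path_level_inj[of P "west z" "south z"] by (auto simp: west_def south_def level_def)

lemma lattice_path_next:
  assumes "lattice_path P" "n < length P" "w \<in> set P" "level w = level (P ! n) + 1"
  shows "Suc n < length P \<and> P ! Suc n = w"
proof -
  obtain k where k: "k < length P" "P ! k = w" "int k = level w - level (hd P)"
    using lattice_path_index[OF assms(1,3)] by blast
  with level_nth[OF assms(1,2)] assms(4) have "k = Suc n" by simp
  with k show ?thesis by simp
qed

lemma corner_of_neighbours:
  assumes P: "lattice_path P" and z: "z \<in> set P" and y: "y \<in> set P" "level y = level z - 1"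
    and x: "x \<in> set P" "level x = level z + 1" and turn: "(fst y = fst z) \<noteq> (fst z = fst x)"
  shows "z \<in> corners P"
proof -
  obtain k where k: "k < length P" "P ! k = y" using y(1) by (auto simp: in_set_conv_nth)
  from lattice_path_next[OF P k(1) z] k y(2) have n: "Suc k < length P" "P ! Suc k = z" by auto
  from lattice_path_next[OF P n(1) x(1)] n x(2) have "Suc (Suc k) < length P" "P ! Suc (Suc k) = x"
    by auto
  with n k turn show ?thesis unfolding corners_def
    by (intro CollectI exI[of _ "Suc k"]) auto
qed

lemma corner_west_north:
  "lattice_path P \<Longrightarrow> z \<in> set P \<Longrightarrow> west z \<in> set P \<Longrightarrow> north z \<in> set P \<Longrightarrow> z \<in> corners P"
  by (rule corner_of_neighbours[of P z "west z" "north z"])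
    (simp_all add: west_def north_def level_def)

lemma corner_south_east:
  "lattice_path P \<Longrightarrow> z \<in> set P \<Longrightarrow> south z \<in> set P \<Longrightarrow> east z \<in> set P \<Longrightarrow> z \<in> corners P"
  by (rule corner_of_neighbours[of P z "south z" "east z"])
    (simp_all add: south_def east_def level_def)

lemma lattice_path_value_after:
  fixes g :: "pt \<Rightarrow> int"
  assumes P: "lattice_path P"
    and g: "\<And>n. Suc n < length P \<Longrightarrow> g (P ! n) \<le> g (P ! Suc n) \<and> g (P ! Suc n) \<le> g (P ! n) + 1"
    and z: "z \<in> set P" and c: "g z \<le> c" "c \<le> g (last P)"
  shows "\<exists>w\<in>set P. g w = c \<and> level z \<le> level w"
proof -
  obtain n where n: "n < length P" "P ! n = z" using z by (auto simp: in_set_conv_nth)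
  have "g (P ! (length P - 1)) = g (last P)"
    using lattice_path_nonempty[OF P] by (simp add: last_conv_nth)
  moreover have "\<bar>g (P ! Suc i) - g (P ! i)\<bar> \<le> 1" if "i < length P - 1" for i
    using g[of i] that by (simp add: abs_le_iff less_diff_conv)
  moreover have "n \<le> length P - 1" using n(1) by simp
  ultimately obtain i where i: "n \<le> i" "i \<le> length P - 1" "g (P ! i) = c"
    using nat_intermed_int_val[of n "length P - 1" "\<lambda>i. g (P ! i)" c] n c by auto
  then have "i < length P" "level z \<le> level (P ! i)"
    using n level_nth[OF P] by auto
  with i(3) show ?thesis by (metis nth_mem)
qed

lemma lattice_path_value_before:
  fixes g :: "pt \<Rightarrow> int"
  assumes P: "lattice_path P"
    and g: "\<And>n. Suc n < length P \<Longrightarrow> g (P ! n) \<le> g (P ! Suc n) \<and> g (P ! Suc n) \<le> g (P ! n) + 1"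
    and z: "z \<in> set P" and c: "g (hd P) \<le> c" "c \<le> g z"
  shows "\<exists>w\<in>set P. g w = c \<and> level w \<le> level z"
proof -
  obtain n where n: "n < length P" "P ! n = z" using z by (auto simp: in_set_conv_nth)
  have "g (P ! 0) = g (hd P)"
    using lattice_path_nonempty[OF P] by (simp add: hd_conv_nth)
  moreover have "\<bar>g (P ! Suc i) - g (P ! i)\<bar> \<le> 1" if "i < n" for i
    using g[of i] that n by (simp add: abs_le_iff)
  ultimately obtain i where i: "i \<le> n" "g (P ! i) = c"
    using nat_intermed_int_val[of 0 n "\<lambda>i. g (P ! i)" c] n c by auto
  then have "i < length P" "level (P ! i) \<le> level z"
    using n level_nth[OF P] by auto
  with i(2) show ?thesis by (metis nth_mem)
qed

lemma lattice_path_column_step: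
  "lattice_path P \<Longrightarrow> Suc n < length P \<Longrightarrow> snd (P ! n) \<le> snd (P ! Suc n) \<and>
      snd (P ! Suc n) \<le> snd (P ! n) + 1"
  using lattice_path_step[of P n] by (auto simp: east_def north_def)

lemma lattice_path_row_step:
  "lattice_path P \<Longrightarrow> Suc n < length P \<Longrightarrow> - fst (P ! n) \<le> - fst (P ! Suc n) \<and>
      - fst (P ! Suc n) \<le> - fst (P ! n) + 1"
  using lattice_path_step[of P n] by (auto simp: east_def north_def)

lemma column_after:
  "lattice_path P \<Longrightarrow> z \<in> set P \<Longrightarrow> snd z \<le> c \<Longrightarrow> c \<le> snd (last P) \<Longrightarrow>
    \<exists>w\<in>set P. snd w = c \<and> level z \<le> level w"
  by (rule lattice_path_value_after[where g = snd]) (auto dest: lattice_path_column_step)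

lemma column_before:
  "lattice_path P \<Longrightarrow> z \<in> set P \<Longrightarrow> snd (hd P) \<le> c \<Longrightarrow> c \<le> snd z \<Longrightarrow>
    \<exists>w\<in>set P. snd w = c \<and> level w \<le> level z"
  by (rule lattice_path_value_before[where g = snd]) (auto dest: lattice_path_column_step)

lemma row_after:
  assumes "lattice_path P" "z \<in> set P" "fst (last P) \<le> r" "r \<le> fst z"
  shows "\<exists>w\<in>set P. fst w = r \<and> level z \<le> level w"
  using lattice_path_value_after[where g = "\<lambda>x. - fst x" and c = "- r"] assms
    lattice_path_row_step[OF assms(1)] by auto

lemma row_before:
  assumes "lattice_path P" "z \<in> set P" "fst z \<le> r" "r \<le> fst (hd P)"
  shows "\<exists>w\<in>set P. fst w = r \<and> level w \<le> level z"
  using lattice_path_value_before[where g = "\<lambda>x. - fst x" and c = "- r"] assms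
    lattice_path_row_step[OF assms(1)] by auto

lemma lattice_path_level_between:
  assumes P: "lattice_path P" and "z1 \<in> set P" "z2 \<in> set P" "level z1 \<le> l" "l \<le> level z2"
  obtains w where "w \<in> set P" "level w = l"
proof -
  obtain n2 where n2: "n2 < length P" "int n2 = level z2 - level (hd P)"
    using lattice_path_index[OF P assms(3)] by blast
  define n where "n = nat (l - level (hd P))"
  have "level (hd P) \<le> l" using level_hd_le[OF P assms(2)] assms(4) by simp
  then have "n < length P" "level (P ! n) = l"
    using n2 assms(5) level_nth[OF P, of n] by (simp_all add: n_def)
  with that show ?thesis by (metis nth_mem)
qed

lemma column_segment:
  assumes P: "lattice_path P" and "(r1, c) \<in> set P" "(r2, c) \<in> set P" "r2 \<le> r" "r \<le> r1"
  shows "(r, c) \<in> set P"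
proof -
  have "level (r1, c) \<le> level (r, c)" "level (r, c) \<le> level (r2, c)"
    using assms(4,5) by (simp_all add: level_def)
  then obtain w where w: "w \<in> set P" "level w = level (r, c)"
    by (rule lattice_path_level_between[OF P assms(2,3)])
  have "c \<le> snd w" using lattice_path_mono[OF P assms(2) w(1)] w(2) assms(5)
    by (simp add: level_def)
  moreover have "snd w \<le> c" using lattice_path_mono[OF P w(1) assms(3)] w(2) assms(4)
    by (simp add: level_def)
  ultimately have "w = (r, c)" using w(2) by (simp add: level_def prod_eq_iff)
  with w(1) show ?thesis by simp
qed

lemma path_stays_north:
  assumes P: "lattice_path P" and Q: "lattice_path Q"
    and cols: "\<forall>y\<in>set Q. snd y \<le> snd (last P)"
    and start: "\<exists>p\<in>set P. snd p = snd (hd Q) \<and> fst p \<le> fst (hd Q)"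
    and z: "z \<in> set Q" and avoid: "\<forall>y\<in>set Q. level y \<le> level z \<longrightarrow> y \<notin> set P"
  shows "\<exists>p\<in>set P. snd p = snd z \<and> fst p < fst z"
proof -
  obtain n where n: "n < length Q" "Q ! n = z" "int n = level z - level (hd Q)"
    using lattice_path_index[OF Q z] by blast
  have "\<exists>p\<in>set P. snd p = snd (Q ! k) \<and> fst p < fst (Q ! k)" if "k \<le> n" for k
    using that
  proof (induction k)
    case 0
    have "Q ! 0 = hd Q" using lattice_path_nonempty[OF Q] by (simp add: hd_conv_nth)
    moreover have "hd Q \<notin> set P"
      using avoid lattice_path_hd_in[OF Q] level_hd_le[OF Q z] by blast
    moreover obtain p where p: "p \<in> set P" "snd p = snd (hd Q)" "fst p \<le> fst (hd Q)"
      using start by blast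
    ultimately have "p \<noteq> Q ! 0" by auto
    with p \<open>Q ! 0 = hd Q\<close> have "fst p < fst (Q ! 0)" by (metis prod.collapse order.order_iff_strict)
    with p \<open>Q ! 0 = hd Q\<close> show ?case by auto
  next
    case (Suc k)
    then obtain p where p: "p \<in> set P" "snd p = snd (Q ! k)" "fst p < fst (Q ! k)" by auto
    have k: "Suc k < length Q" using Suc.prems n(1) by simp
    have "Q ! Suc k \<notin> set P"
      using avoid nth_mem[OF k] level_nth[OF Q k] n Suc.prems by simp
    from lattice_path_step[OF Q k] show ?case
    proof
      assume e: "Q ! Suc k = east (Q ! k)"
      have "snd p \<le> snd p + 1" "snd p + 1 \<le> snd (last P)"
        using cols nth_mem[OF k] e p(2) by (auto simp: east_def)
      from column_after[OF P p(1) this] obtain w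
        where w: "w \<in> set P" "snd w = snd p + 1" "level p \<le> level w"
        by blast
      have "fst w \<le> fst p" using lattice_path_mono[OF P p(1) w(1) w(3)] by simp
      with w p e show ?case by (intro bexI[of _ w]) (auto simp: east_def)
    next
      assume "Q ! Suc k = north (Q ! k)"
      then have "snd p = snd (Q ! Suc k)" "fst p \<le> fst (Q ! Suc k)" using p
        by (auto simp: north_def)
      moreover have "p \<noteq> Q ! Suc k" using p(1) \<open>Q ! Suc k \<notin> set P\<close> by blast
      ultimately have "fst p < fst (Q ! Suc k)" by (metis prod.collapse order.order_iff_strict)
      with p(1) \<open>snd p = snd (Q ! Suc k)\<close> show ?case by blast
    qed
  qed
  with n show ?thesis by blast
qed

lemma paths_meet_before:
  assumes P: "lattice_path P" and Q: "lattice_path Q"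
    and cols: "\<forall>y\<in>set Q. snd y \<le> snd (last P)"
    and start: "\<exists>p\<in>set P. snd p = snd (hd Q) \<and> fst p \<le> fst (hd Q)"
    and z: "z \<in> set Q" and stop: "\<exists>p\<in>set P. snd p = snd z \<and> fst z \<le> fst p"
  shows "\<exists>u\<in>set Q. u \<in> set P \<and> level u \<le> level z"
proof (rule ccontr)
  assume "\<not> ?thesis"
  then obtain p where p: "p \<in> set P" "snd p = snd z" "fst p < fst z"
    using path_stays_north[OF P Q cols start z] by blast
  from stop obtain p' where p': "p' \<in> set P" "snd p' = snd z" "fst z \<le> fst p'" by blast
  have "(fst p', snd z) \<in> set P" "(fst p, snd z) \<in> set P" using p p' by (metis prod.collapse)+
  from column_segment[OF P this, of "fst z"] p p' have "z \<in> set P" by simp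
  with z \<open>\<not> ?thesis\<close> show False by blast
qed

text \<open>Walking along two paths level by level, the row difference grows by at most one per step.
Once the second path has left the first towards the north, it can only rejoin it along a vertical
edge of the first path; excluding such edges makes intersections contiguous.\<close>

lemma int_walk_stays_negative:
  fixes d :: "nat \<Rightarrow> int"
  assumes d0: "d 0 \<le> 0"
    and up: "\<And>k. k < n \<Longrightarrow> d (Suc k) \<le> d k + 1"
    and stay: "\<And>k. k < n \<Longrightarrow> d k = 0 \<Longrightarrow> d (Suc k) \<le> 0"
    and return: "\<And>k. k < n \<Longrightarrow> d (Suc k) = 0 \<Longrightarrow> 0 \<le> d k"
    and c: "c \<le> n" "d c \<noteq> 0"
  shows "d n < 0"
proof -
  have nonpos: "d k \<le> 0" if "k \<le> n" for k
    using that
  proof (induction k)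
    case (Suc k)
    with up[of k] stay[of k] show ?case by (cases "d k = 0") auto
  qed (use d0 in simp)
  have "d k < 0" if "c \<le> k" "k \<le> n" for k
    using that
  proof (induction k)
    case 0
    with c nonpos[of 0] show ?case by simp
  next
    case (Suc k)
    show ?case
    proof (cases "c = Suc k")
      case True
      with c nonpos[OF Suc.prems(2)] show ?thesis by simp
    next
      case False
      with Suc have "d k < 0" by simp
      with nonpos[OF Suc.prems(2)] return[of k] Suc.prems show ?thesis by fastforce
    qed
  qed
  with c show ?thesis by simp
qed

definition vertical_edges_shared :: "pt list \<Rightarrow> pt list \<Rightarrow> bool" where
  "vertical_edges_shared P Q \<longleftrightarrow>
     (\<forall>z. z \<in> set P \<longrightarrow> north z \<in> set P \<longrightarrow> z \<in> set Q \<or> north z \<in> set Q \<longrightarrow>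
          z \<in> set Q \<and> north z \<in> set Q)"

lemma row_gap_step:
  assumes A: "vertical_edges_shared P Q" and Q: "lattice_path Q"
    and x: "x \<in> set P" "x' \<in> set P" "x' = east x \<or> x' = north x"
    and y: "y \<in> set Q" "y' \<in> set Q" "y' = east y \<or> y' = north y" and lev: "level y = level x"
  shows "fst y' - fst x' \<le> fst y - fst x + 1"
    and "y = x \<Longrightarrow> fst y' \<le> fst x'"
    and "y' = x' \<Longrightarrow> fst x \<le> fst y"
proof -
  have edge: "z \<in> set Q \<and> north z \<in> set Q"
    if "z \<in> set P" "north z \<in> set P" "z \<in> set Q \<or> north z \<in> set Q" for z
    using A that unfolding vertical_edges_shared_def by blast
  have y'x': "level y' = level x'" using x(3) y(3) lev by auto
  show "fst y' - fst x' \<le> fst y - fst x + 1" using x(3) y(3) by (auto simp: east_def north_def)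
  show "fst y' \<le> fst x'" if "y = x"
  proof (cases "x' = north x")
    case True
    with edge[OF x(1)] x(2) y(1) that have "x' \<in> set Q" by simp
    with lattice_path_level_inj[OF Q y(2) this y'x'] show ?thesis by simp
  next
    case False
    with x(3) y(3) that show ?thesis by (auto simp: east_def north_def)
  qed
  show "fst x \<le> fst y" if "y' = x'"
  proof (cases "x' = north x")
    case True
    with edge[OF x(1)] x(2) y(2) that have "x \<in> set Q" by simp
    with lattice_path_level_inj[OF Q y(1) this lev] show ?thesis by simp
  next
    case False
    with x(3) y(3) that show ?thesis by (auto simp: east_def north_def)
  qed
qed

lemma inter_convex_on_first:
  assumes P: "lattice_path P" and Q: "lattice_path Q" and A: "vertical_edges_shared P Q"
    and z1: "z1 \<in> set P" "z1 \<in> set Q" and z2: "z2 \<in> set P" "z2 \<in> set Q"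
    and w: "w \<in> set P" "level z1 \<le> level w" "level w \<le> level z2"
  shows "w \<in> set Q"
proof (rule ccontr)
  assume wQ: "w \<notin> set Q"
  obtain a where a: "a < length P" "P ! a = z1" "int a = level z1 - level (hd P)"
    using lattice_path_index[OF P z1(1)] by blast
  obtain b where b: "b < length P" "P ! b = z2" "int b = level z2 - level (hd P)"
    using lattice_path_index[OF P z2(1)] by blast
  obtain c where c: "P ! c = w" "int c = level w - level (hd P)"
    using lattice_path_index[OF P w(1)] by blast
  obtain a' where a': "a' < length Q" "Q ! a' = z1" "int a' = level z1 - level (hd Q)"
    using lattice_path_index[OF Q z1(2)] by blast
  obtain b' where b': "b' < length Q" "Q ! b' = z2" "int b' = level z2 - level (hd Q)"
    using lattice_path_index[OF Q z2(2)] by blast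
  have ab: "a \<le> c" "c \<le> b" and b'_eq: "b' = a' + (b - a)" using a b c a' b' w by linarith+
  define d where "d k = fst (Q ! (a' + k)) - fst (P ! (a + k))" for k
  have len: "a + k < length P" "a' + k < length Q" if "k \<le> b - a" for k
    using that b b' b'_eq ab by linarith+
  have lev: "level (Q ! (a' + k)) = level (P ! (a + k))" if "k \<le> b - a" for k
    using level_nth[OF P len(1)[OF that]] level_nth[OF Q len(2)[OF that]] a a' by simp
  have same: "Q ! (a' + k) = P ! (a + k) \<longleftrightarrow> d k = 0" if "k \<le> b - a" for k
    using lev[OF that] by (auto simp: d_def level_def prod_eq_iff)
  have "d (b - a) < 0"
  proof (rule int_walk_stays_negative[where c = "c - a"])
    show "d 0 \<le> 0" using a a' by (simp add: d_def)
    show "c - a \<le> b - a" using ab by simp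
    show "d (c - a) \<noteq> 0"
    proof
      assume "d (c - a) = 0"
      then have "Q ! (a' + (c - a)) = w" using same[of "c - a"] ab c(1) by simp
      moreover have "a' + (c - a) < length Q" using len[of "c - a"] ab by simp
      ultimately show False using wQ nth_mem by metis
    qed
    fix k assume k: "k < b - a"
    have x: "P ! (a + k) \<in> set P" "P ! (a + Suc k) \<in> set P"
      "P ! (a + Suc k) = east (P ! (a + k)) \<or> P ! (a + Suc k) = north (P ! (a + k))"
      using len[of k] len[of "Suc k"] k lattice_path_step[OF P, of "a + k"] by simp_all
    have y: "Q ! (a' + k) \<in> set Q" "Q ! (a' + Suc k) \<in> set Q"
      "Q ! (a' + Suc k) = east (Q ! (a' + k)) \<or> Q ! (a' + Suc k) = north (Q ! (a' + k))"
      using len[of k] len[of "Suc k"] k lattice_path_step[OF Q, of "a' + k"] by simp_all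
    note step = row_gap_step[OF A Q x y lev[of k]]
    show "d (Suc k) \<le> d k + 1" using step(1) k by (simp add: d_def)
    show "d (Suc k) \<le> 0" if "d k = 0" using step(2) same[of k] that k by (simp add: d_def)
    show "0 \<le> d k" if "d (Suc k) = 0" using step(3) same[of "Suc k"] that k by (simp add: d_def)
  qed
  moreover have "d (b - a) = 0" using same[of "b - a"] ab b b' b'_eq by simp
  ultimately show False by simp
qed

lemma inter_convex_on_second:
  assumes P: "lattice_path P" and Q: "lattice_path Q" and A: "vertical_edges_shared P Q"
    and z1: "z1 \<in> set P" "z1 \<in> set Q" and z2: "z2 \<in> set P" "z2 \<in> set Q"
    and w: "w \<in> set Q" "level z1 \<le> level w" "level w \<le> level z2"
  shows "w \<in> set P"
proof -
  obtain w' where w': "w' \<in> set P" "level w' = level w"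
    by (rule lattice_path_level_between[OF P z1(1) z2(1) w(2,3)])
  with inter_convex_on_first[OF P Q A z1 z2 w'(1)] w have "w' \<in> set Q" by simp
  with lattice_path_level_inj[OF Q _ w(1) w'(2)] w' show ?thesis by simp
qed

lemma disjoint_paths_column_order:
  assumes P: "lattice_path P" and Q: "lattice_path Q"
    and hdP: "snd (hd P) = 1" and hdQ: "snd (hd Q) = 1" and lastP: "snd (last P) = B"
    and Qcols: "\<forall>z\<in>set Q. 1 \<le> snd z \<and> snd z \<le> B"
    and start: "fst (hd P) < fst (hd Q)" and disj: "set P \<inter> set Q = {}"
  shows "\<forall>z\<in>set P. \<forall>z'\<in>set Q. snd z = snd z' \<longrightarrow> fst z < fst z'"
proof (intro ballI impI, rule ccontr)
  fix z z' assume z: "z \<in> set P" and z': "z' \<in> set Q" and c: "snd z = snd z'" and n: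
    "\<not> fst z < fst z'"
  have "\<exists>p\<in>set P. snd p = snd (hd Q) \<and> fst p \<le> fst (hd Q)"
    using lattice_path_hd_in[OF P] hdP hdQ start by (intro bexI[of _ "hd P"]) auto
  moreover have "\<exists>p\<in>set P. snd p = snd z' \<and> fst z' \<le> fst p" using z c n by auto
  ultimately obtain u where "u \<in> set Q" "u \<in> set P"
    using paths_meet_before[OF P Q _ _ z'] Qcols lastP by blast
  with disj show False by blast
qed

text \<open>The reflection in the anti-diagonal exchanges the steps east and north, hence the roles of
horizontal and vertical paths.\<close>

definition antitranspose :: "int \<Rightarrow> int \<Rightarrow> pt \<Rightarrow> pt" where
  "antitranspose M N z = (N + 1 - snd z, M + 1 - fst z)"

lemma antitranspose_antitranspose [simp]: "antitranspose N M (antitranspose M N z) = z"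
  by (simp add: antitranspose_def)

lemma antitranspose_eq_iff: "antitranspose M N z = antitranspose M N w \<longleftrightarrow> z = w"
  by (auto simp: antitranspose_def prod_eq_iff)

lemma neighbours_antitranspose:
  "east (antitranspose M N z) = antitranspose M N (north z)"
  "north (antitranspose M N z) = antitranspose M N (east z)"
  "west (antitranspose M N z) = antitranspose M N (south z)"
  "south (antitranspose M N z) = antitranspose M N (west z)"
  by (simp_all add: antitranspose_def east_def north_def west_def south_def)

lemma level_antitranspose: "level (antitranspose M N z) = level z + M - N"
  by (simp add: antitranspose_def level_def)

lemma antitranspose_in_map_iff: "antitranspose M N z \<in> set (map (antitranspose M N) P) \<longleftrightarrow> z \<in> set P"
  by (auto simp: antitranspose_eq_iff)

lemma in_map_antitranspose_iff: "y \<in> set (map (antitranspose M N) P) \<longleftrightarrow> antitranspose N M y \<in> set P"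
  by (metis antitranspose_antitranspose antitranspose_in_map_iff)

lemma lattice_path_antitranspose: "lattice_path P \<Longrightarrow> lattice_path (map (antitranspose M N) P)"
  unfolding lattice_path_def by (auto simp: antitranspose_def)

section \<open>A single page\<close>

locale straight_page =
  fixes M N :: int and I J :: "nat set" and h v :: "nat \<Rightarrow> pt list"
  assumes h_path: "i \<in> I \<Longrightarrow> lattice_path (h i)"
    and v_path: "j \<in> J \<Longrightarrow> lattice_path (v j)"
    and h_in_page: "i \<in> I \<Longrightarrow> z \<in> set (h i) \<Longrightarrow> 1 \<le> fst z \<and> fst z \<le> M \<and> 1 \<le> snd z \<and> snd z \<le> N"
    and v_in_page: "j \<in> J \<Longrightarrow> z \<in> set (v j) \<Longrightarrow> 1 \<le> fst z \<and> fst z \<le> M \<and> 1 \<le> snd z \<and> snd z \<le> N"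
    and h_hd: "i \<in> I \<Longrightarrow> snd (hd (h i)) = 1" and h_last: "i \<in> I \<Longrightarrow> snd (last (h i)) = N"
    and v_hd: "j \<in> J \<Longrightarrow> fst (hd (v j)) = M" and v_last: "j \<in> J \<Longrightarrow> fst (last (v j)) = 1"
    and h_disjoint: "i \<in> I \<Longrightarrow> i' \<in> I \<Longrightarrow> z \<in> set (h i) \<Longrightarrow> z \<in> set (h i') \<Longrightarrow> i = i'"
    and v_disjoint: "j \<in> J \<Longrightarrow> j' \<in> J \<Longrightarrow> z \<in> set (v j) \<Longrightarrow> z \<in> set (v j') \<Longrightarrow> j = j'"
    and h_corner: "i \<in> I \<Longrightarrow> z \<in> set (h i) \<Longrightarrow>
       (west z \<in> set (h i) \<and> north z \<in> set (h i)) \<or> (south z \<in> set (h i) \<and> east z \<in> set (h i)) \<Longrightarrow>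
       \<exists>j\<in>J. z \<in> set (v j)"
    and v_corner: "j \<in> J \<Longrightarrow> z \<in> set (v j) \<Longrightarrow>
       (west z \<in> set (v j) \<and> north z \<in> set (v j)) \<or> (south z \<in> set (v j) \<and> east z \<in> set (v j)) \<Longrightarrow>
       \<exists>i\<in>I. z \<in> set (h i)"
    and J_nonempty: "J \<noteq> {}"
begin

definition on_v_edge :: "pt \<Rightarrow> bool" where
  "on_v_edge z \<longleftrightarrow> (\<exists>j\<in>J. z \<in> set (v j) \<and> north z \<in> set (v j))"

definition on_h_edge :: "pt \<Rightarrow> bool" where
  "on_h_edge x \<longleftrightarrow> (\<exists>i\<in>I. x \<in> set (h i) \<and> east x \<in> set (h i))"

abbreviation vertical_edges_of_h_on_v_in_row :: "int \<Rightarrow> bool" where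
  "vertical_edges_of_h_on_v_in_row r \<equiv>
     \<forall>i\<in>I. \<forall>z. fst z = r \<longrightarrow> snd z < N \<longrightarrow> z \<in> set (h i) \<longrightarrow> north z \<in> set (h i) \<longrightarrow> on_v_edge z"

lemma h_not_last: "i \<in> I \<Longrightarrow> z \<in> set (h i) \<Longrightarrow> snd z < N \<Longrightarrow> z \<noteq> last (h i)"
  using h_last by auto
lemma v_not_hd: "j \<in> J \<Longrightarrow> z \<in> set (v j) \<Longrightarrow> fst z < M \<Longrightarrow> z \<noteq> hd (v j)"
  using v_hd by auto
lemma v_not_last: "j \<in> J \<Longrightarrow> z \<in> set (v j) \<Longrightarrow> 1 < fst z \<Longrightarrow> z \<noteq> last (v j)"
  using v_last by auto
lemma h_not_hd: "i \<in> I \<Longrightarrow> z \<in> set (h i) \<Longrightarrow> 1 < snd z \<Longrightarrow> z \<noteq> hd (h i)"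
  using h_hd by auto

text \<open>That every vertical edge of a horizontal path is an edge of a vertical path is proved by
induction on the row, starting at the north boundary; inside a row, the horizontal edges of the
vertical paths are treated by induction on the column, starting at the west boundary.  The east
boundary column, where a horizontal path may run north without turning, is treated separately by
induction from the south.\<close>

lemma horizontal_edge_of_v_at_h:
  assumes IH: "vertical_edges_of_h_on_v_in_row (t + 1)"
    and i: "i \<in> I" "x \<in> set (h i)" and j: "j \<in> J" "x \<in> set (v j)" "east x \<in> set (v j)"
    and bad: "\<not> on_h_edge x" and fx: "fst x = t + 1"
  shows False
proof -
  have "snd (east x) \<le> N" using v_in_page[OF j(1) j(3)] by simp
  then have xN: "snd x < N" by (simp add: east_def)
  from lattice_path_succ[OF h_path[OF i(1)] i(2) h_not_last[OF i xN]]
  show False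
  proof
    assume "east x \<in> set (h i)" with i bad show False by (auto simp: on_h_edge_def)
  next
    assume "north x \<in> set (h i)"
    with IH i fx xN have "on_v_edge x" by blast
    then obtain j' where j': "j' \<in> J" "x \<in> set (v j')" "north x \<in> set (v j')"
      by (auto simp: on_v_edge_def)
    with v_disjoint[OF j(1) j'(1) j(2)] have "j' = j" by simp
    with j' have "north x \<in> set (v j)" by simp
    from not_east_and_north[OF v_path[OF j(1)] j(3) this] show False .
  qed
qed

lemma horizontal_edges_of_v_in_row:
  assumes IH: "vertical_edges_of_h_on_v_in_row (t + 1)"
    and t: "t + 1 < M"
  shows "\<forall>j\<in>J. \<forall>x. fst x = t + 1 \<longrightarrow> snd x = c \<longrightarrow> x \<in> set (v j) \<longrightarrow> east x \<in> set (v j) \<longrightarrow> \<not> on_h_edge x \<longrightarrow>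
      False"
proof (cases "c \<ge> 1")
  case False
  show ?thesis
  proof (intro ballI allI impI)
    fix j x assume "j \<in> J" "fst x = t + 1" "snd x = c" "x \<in> set (v j)"
    then show False using v_in_page[of j x] False by simp
  qed
next
  case True
  then show ?thesis
  proof (induction c rule: int_ge_induct)
    case base
    show ?case
    proof (intro ballI allI impI)
      fix j x assume j: "j \<in> J" and x: "fst x = t + 1" "snd x = 1" "x \<in> set (v j)"
        "east x \<in> set (v j)" "\<not> on_h_edge x"
      have "x \<noteq> hd (v j)" using v_not_hd[OF j x(3)] x t by simp
      moreover have "west x \<notin> set (v j)"
      proof
        assume "west x \<in> set (v j)" from v_in_page[OF j this] x show False by (simp add: west_def)
      qed
      ultimately have "south x \<in> set (v j)" using lattice_path_pred[OF v_path[OF j] x(3)] by blast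
      with corner_south_east[OF v_path[OF j] x(3) _ x(4)] v_corner[OF j x(3)] x(4) obtain i
        where "i \<in> I" "x \<in> set (h i)"
        by blast
      from horizontal_edge_of_v_at_h[OF IH this j x(3,4,5,1)] show False .
    qed
  next
    case (step c)
    show ?case
    proof (intro ballI allI impI)
      fix j x assume j: "j \<in> J" and x: "fst x = t + 1" "snd x = c + 1" "x \<in> set (v j)"
        "east x \<in> set (v j)" "\<not> on_h_edge x"
      have "x \<noteq> hd (v j)" using v_not_hd[OF j x(3)] x t by simp
      from lattice_path_pred[OF v_path[OF j] x(3) this] show False
      proof
        assume W: "west x \<in> set (v j)"
        have EW: "east (west x) = x" by (simp add: east_def west_def)
        show False
        proof (cases "on_h_edge (west x)")
          case False
          have "fst (west x) = t + 1" "snd (west x) = c" using x by (simp_all add: west_def)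
          from step.IH[rule_format, OF j this W] EW x(3) False show False by simp
        next
          case True
          then obtain i where i: "i \<in> I" "west x \<in> set (h i)" "x \<in> set (h i)" using EW
            by (auto simp: on_h_edge_def)
          from horizontal_edge_of_v_at_h[OF IH i(1,3) j x(3,4,5,1)] show False .
        qed
      next
        assume "south x \<in> set (v j)"
        with corner_south_east[OF v_path[OF j] x(3) _ x(4)] v_corner[OF j x(3)] x(4) obtain i
          where "i \<in> I" "x \<in> set (h i)"
          by blast
        from horizontal_edge_of_v_at_h[OF IH this j x(3,4,5,1)] show False .
      qed
    qed
  qed
qed

lemma north_end_of_vertical_edge_on_v:
  assumes IH: "vertical_edges_of_h_on_v_in_row (fst y)"
    and i: "i \<in> I" "south y \<in> set (h i)" "y \<in> set (h i)" and y: "snd y < N"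
  shows "\<exists>j\<in>J. y \<in> set (v j)"
  using lattice_path_succ[OF h_path[OF i(1)] i(3) h_not_last[OF i(1,3) y]]
proof
  assume "east y \<in> set (h i)"
  with h_corner[OF i(1,3)] i(2) show ?thesis by blast
next
  assume "north y \<in> set (h i)"
  with IH i y have "on_v_edge y" by blast
  then show ?thesis by (auto simp: on_v_edge_def)
qed

lemma vertical_edges_of_h_in_row:
  assumes "0 \<le> t"
  shows "vertical_edges_of_h_on_v_in_row (t + 1)"
  using assms
proof (induction t rule: int_ge_induct)
  case base
  show ?case
  proof (intro ballI allI impI)
    fix i z assume "i \<in> I" "fst z = 0 + 1" "north z \<in> set (h i)"
    then show "on_v_edge z" using h_in_page[of i "north z"] by (simp add: north_def)
  qed
next
  case (step t)
  show ?case
  proof (intro ballI allI impI, rule ccontr)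
    fix i z assume i: "i \<in> I" and z: "fst z = t + 1 + 1" "snd z < N" "z \<in> set (h i)"
      "north z \<in> set (h i)" and bad: "\<not> on_v_edge z"
    define y where "y = north z"
    have zy: "south y = z" by (simp add: y_def north_def south_def)
    have y: "fst y = t + 1" "snd y < N" "y \<in> set (h i)" "south y \<in> set (h i)"
      using z zy by (simp_all add: y_def north_def)
    have tM: "t + 1 < M" using h_in_page[OF i z(3)] z by simp
    obtain j where j: "j \<in> J" "y \<in> set (v j)"
      using north_end_of_vertical_edge_on_v[of y i] step.IH y(1,2,3,4) i by auto
    have "y \<noteq> hd (v j)" using v_not_hd[OF j] y(1) tM by simp
    moreover have "south y \<notin> set (v j)" using bad j zy y_def unfolding on_v_edge_def by auto
    ultimately have W: "west y \<in> set (v j)" using lattice_path_pred[OF v_path[OF j(1)] j(2)]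
      by blast
    have EW: "east (west y) = y" by (simp add: east_def west_def)
    have hb: "\<not> on_h_edge (west y)"
    proof
      assume "on_h_edge (west y)"
      then obtain i' where i': "i' \<in> I" "west y \<in> set (h i')" "y \<in> set (h i')" using EW
        by (auto simp: on_h_edge_def)
      with h_disjoint[OF i i'(1) y(3)] have "west y \<in> set (h i)" by simp
      with y(4) show False using not_west_and_south[OF h_path[OF i]] by blast
    qed
    have "fst (west y) = t + 1" using y(1) by (simp add: west_def)
    from horizontal_edges_of_v_in_row[OF step.IH tM, of "snd (west y)", rule_format,
        OF j(1) this refl W]
    show False using EW j(2) hb by simp
  qed
qed

lemma vertical_edge_of_h_single_column:
  assumes "N = 1" "i \<in> I" "z \<in> set (h i)" "north z \<in> set (h i)"
  shows "on_v_edge z"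
proof -
  obtain j where j: "j \<in> J" using J_nonempty by blast
  have l: "lattice_path (v j)" using v_path[OF j] .
  have c1: "snd (hd (v j)) = 1" "snd (last (v j)) = 1"
    using v_in_page[OF j lattice_path_hd_in[OF l]] v_in_page[OF j lattice_path_last_in[OF l]]
      assms(1) by auto
  have "hd (v j) = (M, 1)" "last (v j) = (1, 1)" using v_hd[OF j] v_last[OF j] c1
    by (simp_all add: prod_eq_iff)
  then have "(M, 1) \<in> set (v j)" "(1, 1) \<in> set (v j)"
    using lattice_path_hd_in[OF l] lattice_path_last_in[OF l] by metis+
  moreover have "1 \<le> fst z" "fst z \<le> M" "snd z = 1" "1 \<le> fst (north z)"
    using h_in_page[OF assms(2) assms(3)] h_in_page[OF assms(2) assms(4)] assms(1) by auto
  ultimately have "(fst z, 1) \<in> set (v j)" "(fst z - 1, 1) \<in> set (v j)"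
    using column_segment[OF l \<open>(M, 1) \<in> set (v j)\<close> \<open>(1, 1) \<in> set (v j)\<close>, of "fst z"]
      column_segment[OF l \<open>(M, 1) \<in> set (v j)\<close> \<open>(1, 1) \<in> set (v j)\<close>, of "fst z - 1"]
    by (simp_all add: north_def)
  moreover have "z = (fst z, 1)" "north z = (fst z - 1, 1)" using \<open>snd z = 1\<close>
    by (simp_all add: north_def prod_eq_iff)
  ultimately show ?thesis using j unfolding on_v_edge_def by metis
qed

lemma east_column_vertical_edge_of_v:
  assumes j: "j \<in> J" "z \<in> set (v j)" and z: "snd z = N" "1 < fst z"
  shows "on_v_edge z"
proof -
  have "east z \<notin> set (v j)" using v_in_page[OF j(1), of "east z"] z(1) by (auto simp: east_def)
  with lattice_path_succ[OF v_path[OF j(1)] j(2) v_not_last[OF j z(2)]]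
  have "north z \<in> set (v j)" by blast
  with j show ?thesis unfolding on_v_edge_def by blast
qed

lemma east_column_on_v:
  assumes i: "i \<in> I" "z \<in> set (h i)" "north z \<in> set (h i)" and z: "snd z = N" "1 < N"
    and below: "south z \<in> set (h i) \<Longrightarrow> on_v_edge (south z)"
  shows "\<exists>j\<in>J. z \<in> set (v j)"
proof -
  have "z \<noteq> hd (h i)" using h_not_hd[OF i(1,2)] z by simp
  from lattice_path_pred[OF h_path[OF i(1)] i(2) this] show ?thesis
  proof
    assume "west z \<in> set (h i)"
    with h_corner[OF i(1,2)] i(3) show ?thesis by blast
  next
    assume "south z \<in> set (h i)"
    with below have "on_v_edge (south z)" by blast
    moreover have "north (south z) = z" by (simp add: north_def south_def)
    ultimately show ?thesis by (auto simp: on_v_edge_def)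
  qed
qed

lemma vertical_edge_of_h_east_column:
  assumes "i \<in> I" "z \<in> set (h i)" "north z \<in> set (h i)" "snd z = N"
  shows "on_v_edge z"
proof (cases "N = 1")
  case True then show ?thesis using vertical_edge_of_h_single_column assms by blast
next
  case False
  then have N: "1 < N" using h_in_page[OF assms(1,2)] by simp
  have "\<forall>i\<in>I. \<forall>z. fst z = M - int n \<longrightarrow> snd z = N \<longrightarrow> z \<in> set (h i) \<longrightarrow> north z \<in> set (h i) \<longrightarrow>
      on_v_edge z" for n
  proof (induction n)
    case 0
    show ?case
    proof (intro ballI allI impI)
      fix i z assume i: "i \<in> I" and z: "fst z = M - int 0" "snd z = N" "z \<in> set (h i)"
        "north z \<in> set (h i)"
      have "south z \<notin> set (h i)" using h_in_page[OF i, of "south z"] z(1) by (auto simp: south_def)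
      then obtain j where "j \<in> J" "z \<in> set (v j)" using east_column_on_v[OF i z(3,4) z(2) N]
        by blast
      moreover have "1 < fst z" using h_in_page[OF i z(4)] by (simp add: north_def)
      ultimately show "on_v_edge z" using east_column_vertical_edge_of_v z(2) by blast
    qed
  next
    case (Suc n)
    show ?case
    proof (intro ballI allI impI)
      fix i z assume i: "i \<in> I" and z: "fst z = M - int (Suc n)" "snd z = N" "z \<in> set (h i)"
        "north z \<in> set (h i)"
      have "on_v_edge (south z)" if "south z \<in> set (h i)"
      proof -
        have "fst (south z) = M - int n" "snd (south z) = N" using z(1,2)
          by (simp_all add: south_def)
        moreover have "north (south z) \<in> set (h i)" using z(3) by (simp add: north_def south_def)
        ultimately show ?thesis using Suc.IH i that by blast
      qed
      then obtain j where "j \<in> J" "z \<in> set (v j)" using east_column_on_v[OF i z(3,4) z(2) N]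
        by blast
      moreover have "1 < fst z" using h_in_page[OF i z(4)] by (simp add: north_def)
      ultimately show "on_v_edge z" using east_column_vertical_edge_of_v z(2) by blast
    qed
  qed
  moreover have "fst z = M - int (nat (M - fst z))" using h_in_page[OF assms(1,2)] by simp
  ultimately show ?thesis using assms by blast
qed

lemma vertical_edge_of_h_on_v:
  assumes "i \<in> I" "z \<in> set (h i)" "north z \<in> set (h i)"
  shows "\<exists>j\<in>J. z \<in> set (v j) \<and> north z \<in> set (v j)"
proof -
  have "snd z \<le> N" "1 \<le> fst (north z)" using h_in_page assms by auto
  show ?thesis
  proof (cases "snd z = N")
    case True then show ?thesis using vertical_edge_of_h_east_column assms
      by (auto simp: on_v_edge_def)
  next
    case False
    have "0 \<le> fst z - 1" using \<open>1 \<le> fst (north z)\<close> by (simp add: north_def)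
    with vertical_edges_of_h_in_row[of "fst z - 1", rule_format, OF _ assms(1) _ _ assms(2,3)] False
      \<open>snd z \<le> N\<close>
    have "on_v_edge z" by simp
    then show ?thesis by (simp add: on_v_edge_def)
  qed
qed

lemma h_north_of_v_start:
  assumes i: "i \<in> I" and j: "j \<in> J"
  shows "\<exists>p\<in>set (h i). snd p = snd (hd (v j)) \<and> fst p \<le> fst (hd (v j))"
proof -
  have P: "lattice_path (h i)" and Q: "lattice_path (v j)" using i j h_path v_path by auto
  have "1 \<le> snd (hd (v j))" "snd (hd (v j)) \<le> N" using v_in_page[OF j lattice_path_hd_in[OF Q]]
    by auto
  with column_after[OF P lattice_path_hd_in[OF P], of "snd (hd (v j))"] h_hd[OF i] h_last[OF i]
  obtain p where "p \<in> set (h i)" "snd p = snd (hd (v j))" by auto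
  with h_in_page[OF i] v_hd[OF j] show ?thesis by fastforce
qed

lemma v_within_h_columns: "i \<in> I \<Longrightarrow> j \<in> J \<Longrightarrow> \<forall>y\<in>set (v j). snd y \<le> snd (last (h i))"
  using v_in_page h_last by auto

lemma h_meets_v:
  assumes i: "i \<in> I" and j: "j \<in> J"
  shows "\<exists>z. z \<in> set (h i) \<and> z \<in> set (v j)"
proof -
  have P: "lattice_path (h i)" and Q: "lattice_path (v j)" using i j h_path v_path by auto
  have "1 \<le> snd (last (v j))" "snd (last (v j)) \<le> N"
    using v_in_page[OF j lattice_path_last_in[OF Q]] by auto
  with column_after[OF P lattice_path_hd_in[OF P], of "snd (last (v j))"] h_hd[OF i] h_last[OF i]
  obtain p where "p \<in> set (h i)" "snd p = snd (last (v j))" by auto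
  with h_in_page[OF i] v_last[OF j] have "\<exists>p\<in>set (h i). snd p = snd (last (v j)) \<and>
      fst (last (v j)) \<le> fst p"
    by fastforce
  from paths_meet_before[OF P Q v_within_h_columns[OF i j] h_north_of_v_start[OF i j]
      lattice_path_last_in[OF Q] this]
  show ?thesis by blast
qed

lemma vertical_edges_shared_h_v:
  assumes "i \<in> I" "j \<in> J"
  shows "vertical_edges_shared (h i) (v j)"
  unfolding vertical_edges_shared_def
proof (intro allI impI)
  fix z assume z: "z \<in> set (h i)" "north z \<in> set (h i)" "z \<in> set (v j) \<or> north z \<in> set (v j)"
  from vertical_edge_of_h_on_v[OF assms(1) z(1,2)] obtain j'
    where j': "j' \<in> J" "z \<in> set (v j')" "north z \<in> set (v j')" by blast
  with z(3) v_disjoint[OF assms(2) j'(1)] have "j' = j" by blast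
  with j' show "z \<in> set (v j) \<and> north z \<in> set (v j)" by simp
qed

lemma h_between_in_v:
  assumes "i \<in> I" "j \<in> J" "z1 \<in> set (h i)" "z1 \<in> set (v j)" "z2 \<in> set (h i)" "z2 \<in> set (v j)"
    "w \<in> set (h i)" "level z1 \<le> level w" "level w \<le> level z2"
  shows "w \<in> set (v j)"
  using inter_convex_on_first[OF h_path[OF assms(1)] v_path[OF assms(2)]
      vertical_edges_shared_h_v[OF assms(1,2)]] assms
  by blast

lemma v_between_in_h:
  assumes "i \<in> I" "j \<in> J" "z1 \<in> set (h i)" "z1 \<in> set (v j)" "z2 \<in> set (h i)" "z2 \<in> set (v j)"
    "w \<in> set (v j)" "level z1 \<le> level w" "level w \<le> level z2"
  shows "w \<in> set (h i)"
  using inter_convex_on_second[OF h_path[OF assms(1)] v_path[OF assms(2)]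
      vertical_edges_shared_h_v[OF assms(1,2)]] assms
  by blast

lemma h_meets_west_v_first:
  assumes i: "i \<in> I" and j: "j \<in> J" "j' \<in> J"
    and ord: "\<forall>z\<in>set (v j). \<forall>z'\<in>set (v j'). fst z = fst z' \<longrightarrow> snd z < snd z'"
    and z: "z \<in> set (h i)" "z \<in> set (v j)" and z': "z' \<in> set (h i)" "z' \<in> set (v j')"
  shows "level z < level z'"
proof (rule ccontr)
  assume "\<not> ?thesis"
  then have le: "level z' \<le> level z" by simp
  have P: "lattice_path (h i)" and Q: "lattice_path (v j)" using h_path v_path i j by auto
  have jj: "j \<noteq> j'" using ord z(2) by auto
  have "z \<noteq> z'" using v_disjoint[OF j] z z' jj by blast
  then have "level z' \<noteq> level z" using lattice_path_level_inj[OF P z(1) z'(1)] by metis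
  with le have lt: "level z' < level z" by simp
  from lattice_path_mono[OF P z'(1) z(1) le] have o1: "fst z \<le> fst z'" "snd z' \<le> snd z" by auto
  have "fst z' \<le> M" using h_in_page[OF i z'(1)] by simp
  from row_before[OF Q z(2) o1(1)] this v_hd[OF j(1)]
  obtain w where w: "w \<in> set (v j)" "fst w = fst z'" "level w \<le> level z" by auto
  have wz': "snd w < snd z'" using ord w z'(2) by auto
  have "1 \<le> snd w" using v_in_page[OF j(1) w(1)] by simp
  from column_before[OF P z'(1), of "snd w"] this h_hd[OF i] wz'
  obtain p where p: "p \<in> set (h i)" "snd p = snd w" "level p \<le> level z'" by auto
  have "fst z' \<le> fst p" using lattice_path_mono[OF P p(1) z'(1) p(3)] by simp
  with p w(2) have "\<exists>p\<in>set (h i). snd p = snd w \<and> fst w \<le> fst p" by auto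
  from paths_meet_before[OF P Q v_within_h_columns[OF i j(1)] h_north_of_v_start[OF i j(1)]
      w(1) this]
  obtain u where u: "u \<in> set (v j)" "u \<in> set (h i)" "level u \<le> level w" by blast
  then have "snd u \<le> snd w" using lattice_path_mono[OF Q u(1) w(1)] by simp
  then have "snd u < snd z'" using wz' by simp
  have "level u < level z'"
  proof (rule ccontr)
    assume "\<not> ?thesis"
    then have "level z' \<le> level u" by simp
    from lattice_path_mono[OF P z'(1) u(2) this] \<open>snd u < snd z'\<close> show False by simp
  qed
  have "z' \<in> set (v j)" using h_between_in_v[OF i j(1) u(2) u(1) z(1) z(2) z'(1)] \<open>level u < level
    z'\<close> lt by simp
  with v_disjoint[OF j(1) j(2) _ z'(2)] jj show False by simp
qed
end

lemma straight_page_antitranspose: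
  assumes "straight_page M N I J h v" "I \<noteq> {}"
  shows "straight_page N M J I (\<lambda>j. map (antitranspose M N) (v j))
    (\<lambda>i. map (antitranspose M N) (h i))"
proof -
  interpret straight_page M N I J h v by fact
  show ?thesis
  proof
    show "lattice_path (map (antitranspose M N) (v j))" if "j \<in> J" for j
      using lattice_path_antitranspose v_path that by blast
    show "lattice_path (map (antitranspose M N) (h i))" if "i \<in> I" for i
      using lattice_path_antitranspose h_path that by blast
    show "1 \<le> fst z \<and> fst z \<le> N \<and> 1 \<le> snd z \<and> snd z \<le> M"
      if "j \<in> J" "z \<in> set (map (antitranspose M N) (v j))" for j z
      using that v_in_page[OF that(1)] by (auto simp: antitranspose_def)
    show "1 \<le> fst z \<and> fst z \<le> N \<and> 1 \<le> snd z \<and> snd z \<le> M"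
      if "i \<in> I" "z \<in> set (map (antitranspose M N) (h i))" for i z
      using that h_in_page[OF that(1)] by (auto simp: antitranspose_def)
    show "snd (hd (map (antitranspose M N) (v j))) = 1" if "j \<in> J" for j
      using v_hd[OF that] lattice_path_nonempty[OF v_path[OF that]]
        by (simp add: hd_map antitranspose_def)
    show "snd (last (map (antitranspose M N) (v j))) = M" if "j \<in> J" for j
      using v_last[OF that] lattice_path_nonempty[OF v_path[OF that]]
        by (simp add: last_map antitranspose_def)
    show "fst (hd (map (antitranspose M N) (h i))) = N" if "i \<in> I" for i
      using h_hd[OF that] lattice_path_nonempty[OF h_path[OF that]]
        by (simp add: hd_map antitranspose_def)
    show "fst (last (map (antitranspose M N) (h i))) = 1" if "i \<in> I" for i
      using h_last[OF that] lattice_path_nonempty[OF h_path[OF that]]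
        by (simp add: last_map antitranspose_def)
    show "j = j'" if "j \<in> J" "j' \<in> J" "z \<in> set (map (antitranspose M N) (v j))"
      "z \<in> set (map (antitranspose M N) (v j'))" for j j' z
      using that(3,4) unfolding in_map_antitranspose_iff by (rule v_disjoint[OF that(1,2)])
    show "i = i'" if "i \<in> I" "i' \<in> I" "z \<in> set (map (antitranspose M N) (h i))"
      "z \<in> set (map (antitranspose M N) (h i'))" for i i' z
      using that(3,4) unfolding in_map_antitranspose_iff by (rule h_disjoint[OF that(1,2)])
    show "\<exists>i\<in>I. z \<in> set (map (antitranspose M N) (h i))"
      if a: "j \<in> J" "z \<in> set (map (antitranspose M N) (v j))"
        "west z \<in> set (map (antitranspose M N) (v j)) \<and>
            north z \<in> set (map (antitranspose M N) (v j)) \<or>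
         south z \<in> set (map (antitranspose M N) (v j)) \<and>
           east z \<in> set (map (antitranspose M N) (v j))" for j z
    proof -
      obtain x where x: "z = antitranspose M N x" by (metis antitranspose_antitranspose)
      have "x \<in> set (v j)" using a(2) unfolding x antitranspose_in_map_iff .
      moreover have "south x \<in> set (v j) \<and> east x \<in> set (v j) \<or> west x \<in> set (v j) \<and>
          north x \<in> set (v j)"
        using a(3) unfolding x neighbours_antitranspose antitranspose_in_map_iff by blast
      ultimately obtain i where "i \<in> I" "x \<in> set (h i)" using v_corner[OF a(1)] by blast
      then show ?thesis unfolding x antitranspose_in_map_iff by blast
    qed
    show "\<exists>j\<in>J. z \<in> set (map (antitranspose M N) (v j))"
      if a: "i \<in> I" "z \<in> set (map (antitranspose M N) (h i))"
        "west z \<in> set (map (antitranspose M N) (h i)) \<and>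
            north z \<in> set (map (antitranspose M N) (h i)) \<or>
         south z \<in> set (map (antitranspose M N) (h i)) \<and>
           east z \<in> set (map (antitranspose M N) (h i))" for i z
    proof -
      obtain x where x: "z = antitranspose M N x" by (metis antitranspose_antitranspose)
      have "x \<in> set (h i)" using a(2) unfolding x antitranspose_in_map_iff .
      moreover have "south x \<in> set (h i) \<and> east x \<in> set (h i) \<or> west x \<in> set (h i) \<and>
          north x \<in> set (h i)"
        using a(3) unfolding x neighbours_antitranspose antitranspose_in_map_iff by blast
      ultimately obtain j where "j \<in> J" "x \<in> set (v j)" using h_corner[OF a(1)] by blast
      then show ?thesis unfolding x antitranspose_in_map_iff by blast
    qed
    show "I \<noteq> {}" by fact
  qed
qed

context straight_page begin

lemma horizontal_edge_of_v_on_h: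
  assumes I: "I \<noteq> {}" and j: "j \<in> J" "z \<in> set (v j)" "east z \<in> set (v j)"
  shows "\<exists>i\<in>I. z \<in> set (h i) \<and> east z \<in> set (h i)"
proof -
  interpret T: straight_page N M J I "\<lambda>j. map (antitranspose M N) (v j)"
    "\<lambda>i. map (antitranspose M N) (h i)"
    by (rule straight_page_antitranspose[OF straight_page_axioms I])
  have "antitranspose M N z \<in> set (map (antitranspose M N) (v j))"
    "north (antitranspose M N z) \<in> set (map (antitranspose M N) (v j))"
    using j unfolding neighbours_antitranspose(2) antitranspose_in_map_iff by simp_all
  from T.vertical_edge_of_h_on_v[OF j(1) this] obtain i
    where "i \<in> I" "antitranspose M N z \<in> set (map (antitranspose M N) (h i))"
    "north (antitranspose M N z) \<in> set (map (antitranspose M N) (h i))" by blast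
  then show ?thesis unfolding neighbours_antitranspose(2) antitranspose_in_map_iff by blast
qed

lemma v_meets_south_h_first:
  assumes I: "I \<noteq> {}" and i: "i \<in> I" "i' \<in> I" and j: "j \<in> J"
    and ord: "\<forall>z\<in>set (h i). \<forall>z'\<in>set (h i'). snd z = snd z' \<longrightarrow> fst z' < fst z"
    and z: "z \<in> set (v j)" "z \<in> set (h i)" and z': "z' \<in> set (v j)" "z' \<in> set (h i')"
  shows "level z < level z'"
proof -
  interpret T: straight_page N M J I "\<lambda>j. map (antitranspose M N) (v j)"
    "\<lambda>i. map (antitranspose M N) (h i)"
    by (rule straight_page_antitranspose[OF straight_page_axioms I])
  have ord': "\<forall>y\<in>set (map (antitranspose M N) (h i)). \<forall>y'\<in>set (map (antitranspose M N) (h i')).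
      fst y = fst y' \<longrightarrow> snd y < snd y'"
    using ord by (auto simp: antitranspose_def)
  have "antitranspose M N z \<in> set (map (antitranspose M N) (v j))"
    "antitranspose M N z \<in> set (map (antitranspose M N) (h i))"
    "antitranspose M N z' \<in> set (map (antitranspose M N) (v j))"
    "antitranspose M N z' \<in> set (map (antitranspose M N) (h i'))"
    using z z' unfolding antitranspose_in_map_iff by simp_all
  from T.h_meets_west_v_first[OF j i ord' this] show ?thesis by (simp add: level_antitranspose)
qed

end

section \<open>Joining pieces of a path\<close>

lemma sublist_filter_convex:
  assumes "\<And>i j k. i \<le> j \<Longrightarrow> j \<le> k \<Longrightarrow> k < length L \<Longrightarrow> f (L ! i) \<Longrightarrow> f (L ! k) \<Longrightarrow> f (L ! j)"
  shows "sublist (filter f L) L"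
  using assms
proof (induction L)
  case (Cons x L)
  show ?case
  proof (cases "f x")
    case False
    have "sublist (filter f L) L"
      by (rule Cons.IH) (use Cons.prems[of "Suc _" "Suc _" "Suc _"] in auto)
    with False show ?thesis by (simp add: sublist_Cons_right)
  next
    case True
    define n where "n = length (takeWhile f (x # L))"
    have "\<not> f y" if "y \<in> set (dropWhile f (x # L))" for y
    proof
      assume "f y"
      from that obtain i where "i < length (drop n (x # L))" "drop n (x # L) ! i = y"
        by (auto simp: dropWhile_eq_drop n_def in_set_conv_nth)
      then have k: "n \<le> n + i" "n + i < length (x # L)" "(x # L) ! (n + i) = y" by auto
      then have "n < length (x # L)" by simp
      then have "\<not> f ((x # L) ! n)" unfolding n_def by (rule nth_length_takeWhile)
      with Cons.prems[of 0 n "n + i"] k True \<open>f y\<close> show False by simp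
    qed
    then have "filter f (x # L) = takeWhile f (x # L)"
      by (metis filter_False filter_True takeWhile_dropWhile_id filter_append append_Nil2
          set_takeWhileD)
    then show ?thesis by (metis sublist_def takeWhile_dropWhile_id append_Nil)
  qed
qed simp

lemma lattice_path_filter_sublist:
  assumes L: "lattice_path L"
    and conv: "\<And>z1 z2 w. z1 \<in> set L \<Longrightarrow> z2 \<in> set L \<Longrightarrow> w \<in> set L \<Longrightarrow> f z1 \<Longrightarrow> f z2 \<Longrightarrow>
                 level z1 \<le> level w \<Longrightarrow> level w \<le> level z2 \<Longrightarrow> f w"
  shows "sublist (filter f L) L"
proof (rule sublist_filter_convex)
  fix i j k assume ijk: "i \<le> j" "j \<le> k" "k < length L" "f (L ! i)" "f (L ! k)"
  then have "level (L ! i) \<le> level (L ! j)" "level (L ! j) \<le> level (L ! k)"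
    using level_nth[OF L] by simp_all
  with ijk show "f (L ! j)" using conv[of "L ! i" "L ! k" "L ! j"] by simp
qed

lemma lattice_path_filter:
  assumes L: "lattice_path L"
    and conv: "\<And>z1 z2 w. z1 \<in> set L \<Longrightarrow> z2 \<in> set L \<Longrightarrow> w \<in> set L \<Longrightarrow> f z1 \<Longrightarrow> f z2 \<Longrightarrow>
                 level z1 \<le> level w \<Longrightarrow> level w \<le> level z2 \<Longrightarrow> f w"
    and ex: "\<exists>z\<in>set L. f z"
  shows "lattice_path (filter f L)" "sublist (filter f L) L"
proof -
  show "sublist (filter f L) L" by (rule lattice_path_filter_sublist[OF L conv])
  moreover have "filter f L \<noteq> []" using ex by (simp add: filter_empty_conv)
  ultimately show "lattice_path (filter f L)" by (rule lattice_path_sublist[OF L])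
qed

lemma nonempty_sublist_slice:
  assumes "sublist Y L" "Y \<noteq> []"
  obtains a b where "a < b" "b \<le> length L" "Y = take (b - a) (drop a L)"
proof -
  obtain ps ss where "L = ps @ Y @ ss" using assms(1) by (auto simp: sublist_def)
  with assms(2) that[of "length ps" "length ps + length Y"] show ?thesis by simp
qed

lemma horizontal_run:
  assumes L: "lattice_path L" and sa: "s \<le> a" "a < length L"
    and nov: "\<forall>n. s \<le> n \<longrightarrow> n < a \<longrightarrow> fst (L ! Suc n) = fst (L ! n)"
  shows "\<forall>d. s + d \<le> a \<longrightarrow> L ! (s + d) = (fst (L ! s), snd (L ! s) + int d)"
proof (intro allI impI)
  fix d assume "s + d \<le> a"
  then show "L ! (s + d) = (fst (L ! s), snd (L ! s) + int d)"
  proof (induction d)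
    case 0 then show ?case by simp
  next
    case (Suc d)
    then have IH: "L ! (s + d) = (fst (L ! s), snd (L ! s) + int d)" by simp
    have lt: "Suc (s + d) < length L" using Suc.prems sa by simp
    have "fst (L ! Suc (s + d)) = fst (L ! (s + d))" using nov Suc.prems by simp
    with lattice_path_step[OF L lt] have "L ! Suc (s + d) = east (L ! (s + d))"
      by (auto simp: north_def)
    with IH show ?case by (simp add: east_def)
  qed
qed

lemma horizontal_run_segment:
  assumes L: "lattice_path L" and sa: "s < a" "a < length L"
    and nov: "\<forall>n. s \<le> n \<longrightarrow> n < a \<longrightarrow> fst (L ! Suc n) = fst (L ! n)"
  shows "map (\<lambda>j. (fst (L ! s), j)) [snd (L ! s) + 1 .. snd (L ! a) - 1] =
    take (a - Suc s) (drop (Suc s) L)"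
proof -
  have run: "\<forall>d. s + d \<le> a \<longrightarrow> L ! (s + d) = (fst (L ! s), snd (L ! s) + int d)"
    using horizontal_run[OF L less_imp_le[OF sa(1)] sa(2) nov] .
  then have La: "snd (L ! a) = snd (L ! s) + int (a - s)" using sa(1) by (metis le_add_diff_inverse
        less_imp_le order_refl snd_conv)
  show ?thesis
  proof (rule nth_equalityI)
    show "length (map (\<lambda>j. (fst (L ! s), j)) [snd (L ! s) + 1 .. snd (L ! a) - 1]) =
        length (take (a - Suc s) (drop (Suc s) L))"
      using La sa by simp
    fix i assume "i < length (map (\<lambda>j. (fst (L ! s), j)) [snd (L ! s) + 1 .. snd (L ! a) - 1])"
    then have i: "i < a - Suc s" using La sa by simp
    then have "s + Suc i \<le> a" by simp
    with run have "L ! (s + Suc i) = (fst (L ! s), snd (L ! s) + int (Suc i))" by blast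
    then show "map (\<lambda>j. (fst (L ! s), j)) [snd (L ! s) + 1 .. snd (L ! a) - 1] ! i =
        take (a - Suc s) (drop (Suc s) L) ! i"
      using i La sa by (simp add: add.commute)
  qed
qed

lemma hjoin_step:
  assumes L: "lattice_path L" and sa: "s \<le> a" "a < b" "b \<le> length L"
    and nov: "\<forall>n. s \<le> n \<longrightarrow> n < a \<longrightarrow> fst (L ! Suc n) = fst (L ! n)"
  shows "hjoin (take (Suc s) L) (take (b - a) (drop a L) # Ys) = hjoin (take b L) Ys"
proof -
  define Y where "Y = take (b - a) (drop a L)"
  have al: "a < length L" using sa by simp
  have gap: "\<forall>d. s + d \<le> a \<longrightarrow> L ! (s + d) = (fst (L ! s), snd (L ! s) + int d)"
    using horizontal_run[OF L sa(1) al nov] .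
  have La: "L ! a = (fst (L ! s), snd (L ! s) + int (a - s))" using gap[rule_format, of "a - s"] sa
    by simp
  have lt: "length (take (Suc s) L) = Suc s" using sa by simp
  have acc: "take (Suc s) L \<noteq> []" "last (take (Suc s) L) = L ! s"
  proof -
    show "take (Suc s) L \<noteq> []" using lt by auto
    then have "last (take (Suc s) L) = take (Suc s) L ! s" using lt by (simp add: last_conv_nth)
    then show "last (take (Suc s) L) = L ! s" by simp
  qed
  have Yne: "Y \<noteq> []" "hd Y = L ! a" using sa by (auto simp: Y_def hd_drop_conv_nth)
  have cond: "fst (last (take (Suc s) L)) = fst (hd Y) \<and> snd (last (take (Suc s) L)) \<le> snd (hd Y)"
    using acc Yne La by simp
  have "take (Suc s) L @ map (\<lambda>j. (fst (L ! s), j)) [snd (L ! s) + 1 .. snd (L ! a) - 1]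
          @ (if L ! s = L ! a then tl Y else Y) = take b L"
  proof (cases "a = s")
    case True
    then have "[snd (L ! s) + 1 .. snd (L ! a) - 1] = []" by simp
    moreover have "tl Y = take (b - Suc s) (drop (Suc s) L)" using True
      by (simp add: Y_def drop_Suc tl_take tl_drop)
    moreover have "take (Suc s) L @ take (b - Suc s) (drop (Suc s) L) = take b L"
      using True sa by (metis Suc_leI le_add_diff_inverse take_add)
    ultimately show ?thesis using True by simp
  next
    case False
    then have sa': "s < a" using sa by simp
    have neq: "L ! s \<noteq> L ! a" using La sa' by (auto simp: prod_eq_iff)
    have seg: "map (\<lambda>j. (fst (L ! s), j)) [snd (L ! s) + 1 .. snd (L ! a) - 1] =
        take (a - Suc s) (drop (Suc s) L)"
      by (rule horizontal_run_segment[OF L sa' al nov])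
    have "take (Suc s) L @ take (a - Suc s) (drop (Suc s) L) = take a L"
      using sa' by (metis Suc_leI le_add_diff_inverse take_add)
    moreover have "take a L @ Y = take b L" using sa
      by (metis Y_def le_add_diff_inverse less_imp_le take_add)
    ultimately show ?thesis using seg neq by (metis append.assoc)
  qed
  then show ?thesis using acc Yne cond by (simp add: Y_def[symmetric] Let_def)
qed

lemma slice_mem:
  assumes "a < b" "b \<le> length L" "Y = take (b - a) (drop a L)"
  shows "L ! a \<in> set Y" "L ! (b - 1) \<in> set Y" "z \<in> set Y \<Longrightarrow> \<exists>n. a \<le> n \<and> n < b \<and> L ! n = z"
proof -
  have "Y ! 0 = L ! a" "Y ! (b - 1 - a) = L ! (b - 1)" "0 < length Y" "b - 1 - a < length Y"
    using assms by auto
  then show "L ! a \<in> set Y" "L ! (b - 1) \<in> set Y" by (metis nth_mem)+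
  assume "z \<in> set Y"
  then obtain i where "i < length Y" "Y ! i = z" by (auto simp: in_set_conv_nth)
  then show "\<exists>n. a \<le> n \<and> n < b \<and> L ! n = z" using assms by (intro exI[of _ "a + i"]) auto
qed

lemma horizontal_before_next_piece:
  assumes L: "lattice_path L" and s: "s < length L"
    and ab: "a < b" "b \<le> length L" "Y = take (b - a) (drop a L)"
    and after: "\<forall>Y'\<in>set (Y # Ys). \<forall>z\<in>set Y'. level (L ! s) \<le> level z"
    and cover: "\<forall>n. s \<le> n \<longrightarrow> Suc n < length L \<longrightarrow> fst (L ! Suc n) \<noteq> fst (L ! n) \<longrightarrow>
                   (\<exists>Y'\<in>set (Y # Ys). L ! n \<in> set Y' \<and> L ! Suc n \<in> set Y')"
    and sorted: "sorted_wrt (\<lambda>Y Y'. \<forall>z\<in>set Y. \<forall>z'\<in>set Y'. level z \<le> level z') (Y # Ys)"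
  shows "s \<le> a" "\<forall>n. s \<le> n \<longrightarrow> n < a \<longrightarrow> fst (L ! Suc n) = fst (L ! n)"
proof -
  note hdY = slice_mem(1)[OF ab] and memY = slice_mem(3)[OF ab]
  have lvlL: "level (L ! n) = level (hd L) + int n" if "n < length L" for n
    using level_nth[OF L that] .
  have "level (L ! s) \<le> level (L ! a)" using after hdY by simp
  then show "s \<le> a" using lvlL[OF s] lvlL[of a] ab by simp
  show "\<forall>n. s \<le> n \<longrightarrow> n < a \<longrightarrow> fst (L ! Suc n) = fst (L ! n)"
  proof (intro allI impI, rule ccontr)
    fix n assume n: "s \<le> n" "n < a" "fst (L ! Suc n) \<noteq> fst (L ! n)"
    have "Suc n < length L" using n ab by simp
    with cover n obtain Y' where Y': "Y' \<in> set (Y # Ys)" "L ! n \<in> set Y'" by blast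
    have lvn: "level (L ! n) < level (L ! a)" using lvlL[of n] lvlL[of a] n ab by simp
    show False
    proof (cases "Y' = Y")
      case True
      then obtain k where "a \<le> k" "k < b" "L ! k = L ! n" using memY Y' by blast
      then show False using lvlL[of k] lvlL[of n] n ab by simp
    next
      case False
      then have "Y' \<in> set Ys" using Y' by simp
      with sorted hdY Y' have "level (L ! a) \<le> level (L ! n)" by simp
      with lvn show False by simp
    qed
  qed
qed

lemma hjoin_from_index:
  assumes L: "lattice_path L" and s: "s < length L"
    and blocks: "\<forall>Y\<in>set Ys. sublist Y L \<and> Y \<noteq> []"
    and sorted: "sorted_wrt (\<lambda>Y Y'. \<forall>z\<in>set Y. \<forall>z'\<in>set Y'. level z \<le> level z') Ys"
    and after: "\<forall>Y\<in>set Ys. \<forall>z\<in>set Y. level (L ! s) \<le> level z"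
    and cover: "\<forall>n. s \<le> n \<longrightarrow> Suc n < length L \<longrightarrow> fst (L ! Suc n) \<noteq> fst (L ! n) \<longrightarrow>
                   (\<exists>Y\<in>set Ys. L ! n \<in> set Y \<and> L ! Suc n \<in> set Y)"
  shows "hjoin (take (Suc s) L) (Ys @ [[last L]]) = Some L"
  using s after cover blocks sorted
proof (induction Ys arbitrary: s)
  case Nil
  have ne: "L \<noteq> []" using lattice_path_nonempty[OF L] .
  let ?n = "length L - 1"
  have "[last L] = take (length L - ?n) (drop ?n L)"
    using ne by (cases L rule: rev_cases) auto
  moreover have "hjoin (take (Suc s) L) [take (length L - ?n) (drop ?n L)] =
      hjoin (take (length L) L) []"
    by (rule hjoin_step[OF L]) (use Nil ne in auto)
  ultimately show ?case by simp
next
  case (Cons Y Ys)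
  obtain a b where ab: "a < b" "b \<le> length L" "Y = take (b - a) (drop a L)"
    using Cons.prems(4) nonempty_sublist_slice by (metis list.set_intros(1))
  note lastY = slice_mem(2)[OF ab] and memY = slice_mem(3)[OF ab]
  have lvlL: "level (L ! n) = level (hd L) + int n" if "n < length L" for n
    using level_nth[OF L that] .
  have sa: "s \<le> a" and nov: "\<forall>n. s \<le> n \<longrightarrow> n < a \<longrightarrow> fst (L ! Suc n) = fst (L ! n)"
    using horizontal_before_next_piece[OF L Cons.prems(1) ab Cons.prems(2,3,5)] by blast+
  have step: "hjoin (take (Suc s) L) (Y # (Ys @ [[last L]])) = hjoin (take b L) (Ys @ [[last L]])"
    using hjoin_step[OF L sa ab(1,2) nov] ab(3) by simp
  have b1: "b - 1 < length L" using ab by simp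
  have IH: "hjoin (take (Suc (b - 1)) L) (Ys @ [[last L]]) = Some L"
  proof (rule Cons.IH[OF b1])
    show "\<forall>Y\<in>set Ys. \<forall>z\<in>set Y. level (L ! (b - 1)) \<le> level z" using Cons.prems(5) lastY by simp
    show "\<forall>n. b - 1 \<le> n \<longrightarrow> Suc n < length L \<longrightarrow> fst (L ! Suc n) \<noteq> fst (L ! n) \<longrightarrow>
              (\<exists>Y\<in>set Ys. L ! n \<in> set Y \<and> L ! Suc n \<in> set Y)"
    proof (intro allI impI)
      fix n assume n: "b - 1 \<le> n" "Suc n < length L" "fst (L ! Suc n) \<noteq> fst (L ! n)"
      have "s \<le> n" using sa ab n by simp
      with Cons.prems(3) n obtain Y' where Y': "Y' \<in> set (Y # Ys)" "L ! n \<in> set Y'"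
        "L ! Suc n \<in> set Y'" by blast
      have "Y' \<noteq> Y"
      proof
        assume "Y' = Y"
        then obtain k where "a \<le> k" "k < b" "L ! k = L ! Suc n" using memY Y' by blast
        with lvlL[of k] lvlL[of "Suc n"] n ab show False by simp
      qed
      with Y' show "\<exists>Y\<in>set Ys. L ! n \<in> set Y \<and> L ! Suc n \<in> set Y" by auto
    qed
    show "\<forall>Y\<in>set Ys. sublist Y L \<and> Y \<noteq> []" using Cons.prems(4) by simp
    show "sorted_wrt (\<lambda>Y Y'. \<forall>z\<in>set Y. \<forall>z'\<in>set Y'. level z \<le> level z') Ys" using Cons.prems(5)
      by simp
  qed
  have "Suc (b - 1) = b" using ab by simp
  with step IH show ?case by simp
qed

lemma hjoin_reassembles:
  assumes L: "lattice_path L"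
    and blocks: "\<forall>Y\<in>set Ys. sublist Y L \<and> Y \<noteq> []"
    and sorted: "sorted_wrt (\<lambda>Y Y'. \<forall>z\<in>set Y. \<forall>z'\<in>set Y'. level z \<le> level z') Ys"
    and cover: "\<And>z. z \<in> set L \<Longrightarrow> north z \<in> set L \<Longrightarrow> \<exists>Y\<in>set Ys. z \<in> set Y \<and> north z \<in> set Y"
  shows "hjoin [hd L] (Ys @ [[last L]]) = Some L"
proof -
  have ne: "L \<noteq> []" using lattice_path_nonempty[OF L] .
  have "hjoin (take (Suc 0) L) (Ys @ [[last L]]) = Some L"
  proof (rule hjoin_from_index[OF L _ blocks sorted])
    show "0 < length L" using ne by simp
    show "\<forall>Y\<in>set Ys. \<forall>z\<in>set Y. level (L ! 0) \<le> level z"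
      using blocks level_hd_le[OF L] ne by (force simp: hd_conv_nth dest: set_mono_sublist)
    show "\<forall>n. 0 \<le> n \<longrightarrow> Suc n < length L \<longrightarrow> fst (L ! Suc n) \<noteq> fst (L ! n) \<longrightarrow>
        (\<exists>Y\<in>set Ys. L ! n \<in> set Y \<and> L ! Suc n \<in> set Y)"
    proof (intro allI impI)
      fix n assume n: "0 \<le> n" "Suc n < length L" "fst (L ! Suc n) \<noteq> fst (L ! n)"
      then have "L ! Suc n = north (L ! n)" using lattice_path_step[OF L n(2)]
        by (auto simp: east_def)
      with cover[of "L ! n"] n(2) show "\<exists>Y\<in>set Ys. L ! n \<in> set Y \<and> L ! Suc n \<in> set Y"
        by (metis Suc_lessD nth_mem)
    qed
  qed
  moreover have "take (Suc 0) L = [hd L]" using ne by (cases L) auto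
  ultimately show ?thesis by simp
qed

lemma vjoin_swap:
  "vjoin acc Ys = map_option (map prod.swap) (hjoin (map prod.swap acc) (map (map prod.swap) Ys))"
proof (induction acc Ys rule: vjoin.induct)
  case (1 acc) then show ?case by simp
next
  case (2 acc Y Ys)
  show ?case
  proof (cases "acc \<noteq> [] \<and> Y \<noteq> [] \<and> snd (last acc) = snd (hd Y) \<and> fst (last acc) \<le> fst (hd Y)")
    case c: True
    have lm: "last (map prod.swap acc) = prod.swap (last acc)"
      "hd (map prod.swap Y) = prod.swap (hd Y)" using c by (simp_all add: last_map hd_map)
    have eq: "map prod.swap (acc @ map (\<lambda>i. (i, snd (last acc)))
        [fst (last acc) + 1 .. fst (hd Y) - 1] @ (if last acc = hd Y then tl Y else Y)) =
      map prod.swap acc @ map (\<lambda>j. (fst (last (map prod.swap acc)), j))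
        [snd (last (map prod.swap acc)) + 1 .. snd (hd (map prod.swap Y)) - 1]
        @ (if last (map prod.swap acc) = hd (map prod.swap Y) then tl (map prod.swap Y)
           else map prod.swap Y)"
    proof -
      have i: "(if last (map prod.swap acc) = hd (map prod.swap Y) then tl (map prod.swap Y)
          else map prod.swap Y) = map prod.swap (if last acc = hd Y then tl Y else Y)"
        using lm by (simp add: map_tl inj_eq[OF inj_swap])
      have m: "map prod.swap (map (\<lambda>i. (i, snd (last acc))) [fst (last acc) + 1 .. fst (hd Y) - 1])
          = map (\<lambda>j. (fst (last (map prod.swap acc)), j))
            [snd (last (map prod.swap acc)) + 1 .. snd (hd (map prod.swap Y)) - 1]"
        using lm by (simp add: prod.swap_def)
      show ?thesis using i m by simp
    qed
    define A where "A = acc @ map (\<lambda>i. (i, snd (last acc))) [fst (last acc) + 1 .. fst (hd Y) - 1] @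
        (if last acc = hd Y then tl Y else Y)"
    have L: "vjoin acc (Y # Ys) = vjoin A Ys"
      by (subst vjoin.simps, subst if_P[OF c]) (simp only: A_def)
    have hcond: "map prod.swap acc \<noteq> [] \<and> map prod.swap Y \<noteq> [] \<and>
        fst (last (map prod.swap acc)) = fst (hd (map prod.swap Y)) \<and>
          snd (last (map prod.swap acc)) \<le> snd (hd (map prod.swap Y))"
      using c lm by simp
    have R: "hjoin (map prod.swap acc) (map (map prod.swap) (Y # Ys)) =
        hjoin (map prod.swap A) (map (map prod.swap) Ys)"
      by (subst list.map(2), subst hjoin.simps, subst if_P[OF hcond])
        (simp only: eq[folded A_def, symmetric])
    have IH: "vjoin A Ys =
        map_option (map prod.swap) (hjoin (map prod.swap A) (map (map prod.swap) Ys))"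
      using "2.IH"[OF c] by (simp only: A_def)
    show ?thesis using L R IH by simp
  next
    case nc: False
    then have hnc: "\<not> (map prod.swap acc \<noteq> [] \<and> map prod.swap Y \<noteq> [] \<and>
        fst (last (map prod.swap acc)) = fst (hd (map prod.swap Y)) \<and>
          snd (last (map prod.swap acc)) \<le> snd (hd (map prod.swap Y)))"
      by (auto simp: last_map hd_map)
    have "vjoin acc (Y # Ys) = None" by (subst vjoin.simps, subst if_not_P[OF nc]) (rule refl)
    moreover have "hjoin (map prod.swap acc) (map (map prod.swap) (Y # Ys)) = None"
      by (subst list.map(2), subst hjoin.simps, subst if_not_P[OF hnc]) (rule refl)
    ultimately show ?thesis by simp
  qed
qed

lemma hjoin_successively:
  assumes "hjoin acc Ys = Some R" "successively Rel acc" "\<forall>Y\<in>set Ys. successively Rel Y"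
    and rowrel: "\<And>x y. fst x = fst y \<Longrightarrow> Rel x y"
  shows "successively Rel R"
  using assms(1-3)
proof (induction acc Ys rule: hjoin.induct)
  case (1 acc) then show ?case by simp
next
  case (2 acc Y Ys)
  define c where "c = (acc \<noteq> [] \<and> Y \<noteq> [] \<and> fst (last acc) = fst (hd Y) \<and>
      snd (last acc) \<le> snd (hd Y))"
  have c: c using "2.prems"(1) by (simp add: c_def split: if_splits)
  define seg where "seg = map (\<lambda>j. (fst (last acc), j)) [snd (last acc) + 1 .. snd (hd Y) - 1]"
  define Y' where "Y' = (if last acc = hd Y then tl Y else Y)"
  have rec: "hjoin (acc @ seg @ Y') Ys = Some R" using "2.prems"(1) c
    by (simp add: c_def seg_def Y'_def)
  have sY: "successively Rel Y" using "2.prems"(3) by simp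
  have sseg: "successively Rel seg" unfolding seg_def successively_map
    by (rule successively_mono[OF _ ]) (auto intro: rowrel simp: successively_conv_nth)
  have sY': "successively Rel Y'" using sY by (cases Y) (auto simp: Y'_def successively_Cons)
  have j1: "acc = [] \<or> seg = [] \<or> Rel (last acc) (hd seg)"
  proof (cases "seg = []")
    case False
    then have "fst (hd seg) = fst (last acc)" by (simp add: seg_def hd_map)
    then show ?thesis by (simp add: rowrel)
  qed simp
  have j2: "seg = [] \<or> Y' = [] \<or> Rel (last seg) (hd Y')"
  proof (cases "seg = [] \<or> Y' = []")
    case False
    then have ne: "seg \<noteq> []" "Y' \<noteq> []" by auto
    have "last acc \<noteq> hd Y"
    proof
      assume "last acc = hd Y"
      then have "[snd (last acc) + 1 .. snd (hd Y) - 1] = []" by simp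
      with ne show False by (simp add: seg_def)
    qed
    then have "Y' = Y" by (simp add: Y'_def)
    have "fst (last seg) = fst (last acc)" using ne by (simp add: seg_def last_map)
    then have "fst (last seg) = fst (hd Y')" using c \<open>Y' = Y\<close> by (simp add: c_def)
    then show ?thesis by (simp add: rowrel)
  qed blast
  have j3: "acc = [] \<or> Y' = [] \<or> Rel (last acc) (hd Y')"
  proof (cases "acc = [] \<or> Y' = []")
    case False
    show ?thesis
    proof (cases "last acc = hd Y")
      case True
      then have "Y' = tl Y" by (simp add: Y'_def)
      with False obtain y1 y2 ys where "Y = y1 # y2 # ys" by (cases Y; cases "tl Y") auto
      with sY True \<open>Y' = tl Y\<close> show ?thesis by (simp add: successively_Cons)
    next
      case F: False
      then have "Y' = Y" by (simp add: Y'_def)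
      then show ?thesis using c by (simp add: c_def rowrel)
    qed
  qed blast
  have s2: "successively Rel (seg @ Y')" using sseg sY' j2 by (simp add: successively_append_iff)
  have j4: "acc = [] \<or> seg @ Y' = [] \<or> Rel (last acc) (hd (seg @ Y'))"
    using j1 j3 by (cases seg) auto
  have sacc: "successively Rel (acc @ seg @ Y')"
    using "2.prems"(2) s2 j4 by (simp add: successively_append_iff)
  have c': "acc \<noteq> [] \<and> Y \<noteq> [] \<and> fst (last acc) = fst (hd Y) \<and> snd (last acc) \<le> snd (hd Y)" using c
    by (simp add: c_def)
  have "\<forall>Y\<in>set Ys. successively Rel Y" using "2.prems"(3) by simp
  from "2.IH"[OF c' rec[unfolded seg_def Y'_def] sacc[unfolded seg_def Y'_def] this] show ?case .
qed

lemma lattice_path_swap_rev: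
  assumes "lattice_path V"
  shows "lattice_path (map prod.swap (rev V))"
proof -
  have "map prod.swap (rev V) ! Suc n = east (map prod.swap (rev V) ! n) \<or>
      map prod.swap (rev V) ! Suc n = north (map prod.swap (rev V) ! n)"
    if n: "Suc n < length (map prod.swap (rev V))" for n
  proof -
    define k where "k = length V - Suc (Suc n)"
    have k: "Suc k < length V" "length V - Suc n = Suc k" using n by (auto simp: k_def)
    have "map prod.swap (rev V) ! n = prod.swap (V ! Suc k)"
      "map prod.swap (rev V) ! Suc n = prod.swap (V ! k)"
      using n k by (simp_all add: rev_nth k_def)
    with lattice_path_step[OF assms k(1)] show ?thesis
      by (auto simp: east_def north_def prod.swap_def)
  qed
  moreover have "map prod.swap (rev V) \<noteq> []" using lattice_path_nonempty[OF assms] by simp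
  ultimately show ?thesis unfolding lattice_path_def east_def north_def by blast
qed

lemma vjoin_swap_rev:
  assumes "vjoin acc Ys = Some (rev P)"
  obtains R where "hjoin (map prod.swap acc) (map (map prod.swap) Ys) = Some R"
    "R = map prod.swap (rev P)"
proof -
  from assms obtain R where "hjoin (map prod.swap acc) (map (map prod.swap) Ys) = Some R"
    "map prod.swap R = rev P"
    unfolding vjoin_swap by blast
  moreover from this(2) have "R = map prod.swap (rev P)"
    by (metis map_map swap_comp_swap list.map_id)
  ultimately show ?thesis using that by blast
qed

text \<open>Only the pieces contribute turns to a join: the inserted segments are straight and
continue straight into the neighbouring pieces.\<close>

lemma corners_hjoin:
  assumes "hjoin [x] (Ys @ [[y]]) = Some L"
  shows "corners L \<subseteq> \<Union> (set ` set Ys)"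
proof
  fix c assume c: "c \<in> corners L"
  define S where "S = \<Union> (set ` set Ys)"
  define Rel where "Rel a b \<longleftrightarrow> fst a = fst b \<or> (a \<in> S \<and> b \<in> S)" for a b :: pt
  have "successively Rel Y" if "Y \<in> set (Ys @ [[y]])" for Y
  proof (cases "Y \<in> set Ys")
    case True
    then have "set Y \<subseteq> S" by (auto simp: S_def)
    then show ?thesis unfolding successively_conv_nth Rel_def by auto
  qed (use that in auto)
  then have sL: "successively Rel L"
    using hjoin_successively[OF assms] by (simp add: Rel_def)
  from c obtain n where n: "0 < n" "Suc n < length L" "L ! n = c"
    "(fst (L ! (n - 1)) = fst (L ! n)) \<noteq> (fst (L ! n) = fst (L ! Suc n))"
    unfolding corners_def by blast
  have "Rel (L ! (n - 1)) (L ! n)" "Rel (L ! n) (L ! Suc n)"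
    using successively_nth[OF sL, of "n - 1"] successively_nth[OF sL, of n] n by simp_all
  moreover have "fst (L ! (n - 1)) \<noteq> fst (L ! n) \<or> fst (L ! n) \<noteq> fst (L ! Suc n)"
    using n(4) by blast
  ultimately have "L ! n \<in> S" unfolding Rel_def by blast
  with n(3) show "c \<in> S" by simp
qed

lemma corners_vjoin:
  assumes "vjoin [x] (Ys @ [[y]]) = Some (rev P)" and P: "lattice_path P"
  shows "corners P \<subseteq> \<Union> (set ` set Ys)"
proof
  fix c assume c: "c \<in> corners P"
  define S where "S = \<Union> (set ` set Ys)"
  define Rel where "Rel a b \<longleftrightarrow> fst a = fst b \<or> (prod.swap a \<in> S \<and> prod.swap b \<in> S)" for a b :: pt
  obtain R where R: "hjoin (map prod.swap [x]) (map (map prod.swap) (Ys @ [[y]])) = Some R"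
    "R = map prod.swap (rev P)"
    using vjoin_swap_rev[OF assms(1)] by blast
  have "successively Rel Y" if "Y \<in> set (map (map prod.swap) (Ys @ [[y]]))" for Y
  proof -
    from that obtain Y0 where Y0: "Y0 \<in> set (Ys @ [[y]])" "Y = map prod.swap Y0"
      by (simp only: set_map) blast
    show ?thesis
    proof (cases "Y0 \<in> set Ys")
      case True
      then have "set Y0 \<subseteq> S" by (auto simp: S_def)
      then show ?thesis unfolding Y0(2) successively_map successively_conv_nth Rel_def by auto
    qed (use Y0 in auto)
  qed
  then have "successively Rel R"
    using hjoin_successively[OF R(1)] by (simp add: Rel_def)
  then have sP: "successively (\<lambda>a b. snd a = snd b \<or> (a \<in> S \<and> b \<in> S)) P"
    unfolding R(2) successively_map successively_rev Rel_def by (simp add: eq_commute conj_commute)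
  from c obtain n where n: "0 < n" "Suc n < length P" "P ! n = c"
    "(fst (P ! (n - 1)) = fst (P ! n)) \<noteq> (fst (P ! n) = fst (P ! Suc n))"
    unfolding corners_def by blast
  have steps: "P ! n = east (P ! (n - 1)) \<or> P ! n = north (P ! (n - 1))"
    "P ! Suc n = east (P ! n) \<or> P ! Suc n = north (P ! n)"
    using lattice_path_step[OF P, of "n - 1"] lattice_path_step[OF P, of n] n by simp_all
  have rel: "snd (P ! (n - 1)) = snd (P ! n) \<or> P ! (n - 1) \<in> S \<and> P ! n \<in> S"
    "snd (P ! n) = snd (P ! Suc n) \<or> P ! n \<in> S \<and> P ! Suc n \<in> S"
    using successively_nth[OF sP, of "n - 1"] successively_nth[OF sP, of n] n by simp_all
  have "snd (P ! (n - 1)) \<noteq> snd (P ! n) \<or> snd (P ! n) \<noteq> snd (P ! Suc n)"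
  proof (cases "fst (P ! (n - 1)) = fst (P ! n)")
    case True
    then have "P ! n \<noteq> north (P ! (n - 1))" by (auto simp: north_def prod_eq_iff)
    with steps(1) have "P ! n = east (P ! (n - 1))" by blast
    then show ?thesis by (simp add: east_def)
  next
    case False
    with n(4) have "P ! Suc n \<noteq> north (P ! n)" by (auto simp: north_def prod_eq_iff)
    with steps(2) have "P ! Suc n = east (P ! n)" by blast
    then show ?thesis by (simp add: east_def)
  qed
  with rel have "P ! n \<in> S" by blast
  with n(3) show "c \<in> S" by simp
qed

lemma level_swap: "level (prod.swap z) = - level z" by (simp add: prod.swap_def level_def)

section \<open>Pages as blocks of the matrices A\<close>

text \<open>The blocks k with equal colour c k are placed side by side in increasing order of k, block k
having width w k; colOff and rowOff are the two instances.\<close>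

definition block_offset :: "(nat \<Rightarrow> 'v) \<Rightarrow> (nat \<Rightarrow> nat) \<Rightarrow> nat \<Rightarrow> nat" where
  "block_offset c w k = (\<Sum>k'\<in>{k'\<in>{1..<k}. c k' = c k}. w k')"

definition block_total :: "nat \<Rightarrow> (nat \<Rightarrow> 'v) \<Rightarrow> (nat \<Rightarrow> nat) \<Rightarrow> 'v \<Rightarrow> nat" where
  "block_total r c w x = (\<Sum>k'\<in>{k'\<in>{1..r}. c k' = x}. w k')"

lemma block_offset_add_le_total:
  assumes "1 \<le> k" "k \<le> r"
  shows "block_offset c w k + w k \<le> block_total r c w (c k)"
proof -
  have "insert k {k'\<in>{1..<k}. c k' = c k} \<subseteq> {k'\<in>{1..r}. c k' = c k}" using assms by auto
  moreover have "k \<notin> {k'\<in>{1..<k}. c k' = c k}" by simp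
  ultimately have "(\<Sum>k'\<in>insert k {k'\<in>{1..<k}. c k' = c k}. w k') \<le>
      (\<Sum>k'\<in>{k'\<in>{1..r}. c k' = c k}. w k')"
    by (intro sum_mono2) auto
  then show ?thesis using \<open>k \<notin> _\<close> by (simp add: block_offset_def block_total_def add.commute)
qed

lemma block_offset_add_le:
  assumes "1 \<le> k" "k < k'" "c k = c k'"
  shows "block_offset c w k + w k \<le> block_offset c w k'"
proof -
  have "insert k {k''\<in>{1..<k}. c k'' = c k} \<subseteq> {k''\<in>{1..<k'}. c k'' = c k'}" using assms by auto
  moreover have "k \<notin> {k''\<in>{1..<k}. c k'' = c k}" by simp
  ultimately have "(\<Sum>k''\<in>insert k {k''\<in>{1..<k}. c k'' = c k}. w k'') \<le>
      (\<Sum>k''\<in>{k''\<in>{1..<k'}. c k'' = c k'}. w k'')"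
    by (intro sum_mono2) auto
  then show ?thesis using \<open>k \<notin> _\<close> by (simp add: block_offset_def add.commute)
qed

lemma block_offset_cover:
  assumes "1 \<le> j" "j \<le> block_total r c w x"
  shows "\<exists>k\<in>{1..r}. c k = x \<and> block_offset c w k < j \<and> j \<le> block_offset c w k + w k"
  using assms(2)
proof (induction r)
  case 0 then show ?case using assms(1) by (simp add: block_total_def)
next
  case (Suc r)
  have split: "{k'\<in>{1..Suc r}. c k' = x} =
      {k'\<in>{1..r}. c k' = x} \<union> (if c (Suc r) = x then {Suc r} else {})"
    by (auto simp: le_Suc_eq)
  have tS: "block_total (Suc r) c w x =
      block_total r c w x + (if c (Suc r) = x then w (Suc r) else 0)"
    unfolding block_total_def split by (auto simp: sum.union_disjoint)
  show ?case
  proof (cases "j \<le> block_total r c w x")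
    case True then show ?thesis using Suc.IH by force
  next
    case False
    then have cx: "c (Suc r) = x" using Suc.prems tS by (auto split: if_splits)
    have "{k'\<in>{1..<Suc r}. c k' = c (Suc r)} = {k'\<in>{1..r}. c k' = x}" using cx by auto
    then have "block_offset c w (Suc r) = block_total r c w x"
      by (simp add: block_offset_def block_total_def)
    then show ?thesis using False Suc.prems tS cx by (intro bexI[of _ "Suc r"]) auto
  qed
qed

lemma restrict_columns:
  assumes P: "lattice_path P" and hd: "snd (hd P) = 1" and lst: "snd (last P) = B"
    and c0: "0 \<le> c0" "c0 + N \<le> B" "1 \<le> N"
  defines "R \<equiv> map (\<lambda>x. (fst x, snd x - c0)) (filter (\<lambda>x. c0 < snd x \<and> snd x \<le> c0 + N) P)"
  shows "lattice_path R" "snd (hd R) = 1" "snd (last R) = N"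
    "\<And>x. x \<in> set R \<longleftrightarrow> (fst x, c0 + snd x) \<in> set P \<and> 1 \<le> snd x \<and> snd x \<le> N"
proof -
  define f where "f x \<longleftrightarrow> c0 < snd x \<and> snd x \<le> c0 + N" for x :: pt
  define F where "F = filter f P"
  have conv: "f w" if "z1 \<in> set P" "z2 \<in> set P" "w \<in> set P" "f z1" "f z2" "level z1 \<le> level w"
    "level w \<le> level z2" for z1 z2 w
    using lattice_path_mono[OF P that(1) that(3) that(6)]
      lattice_path_mono[OF P that(3) that(2) that(7)] that(4,5) by (auto simp: f_def)
  have "\<exists>w\<in>set P. snd w = c0 + 1 \<and> level (hd P) \<le> level w"
    using column_after[OF P lattice_path_hd_in[OF P], of "c0 + 1"] hd lst c0 by simp
  then obtain w1 where w1: "w1 \<in> set P" "snd w1 = c0 + 1" by blast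
  have "f w1" using w1 c0 by (simp add: f_def)
  then have ex: "\<exists>z\<in>set P. f z" using w1(1) by blast
  have F: "lattice_path F" "F \<noteq> []" using lattice_path_filter[OF P conv ex] ex
    by (simp_all add: F_def filter_empty_conv)
  have Fm: "z \<in> set F \<longleftrightarrow> z \<in> set P \<and> f z" for z by (simp add: F_def)
  have "\<exists>w\<in>set P. snd w = c0 + N \<and> level (hd P) \<le> level w"
    using column_after[OF P lattice_path_hd_in[OF P], of "c0 + N"] hd lst c0 by simp
  then obtain w2 where w2: "w2 \<in> set P" "snd w2 = c0 + N" by blast
  have w1F: "w1 \<in> set F" and w2F: "w2 \<in> set F" using w1 w2 c0 Fm by (auto simp: f_def)
  have hF: "snd (hd F) = c0 + 1"
  proof -
    have "f (hd F)" using lattice_path_hd_in[OF F(1)] Fm by blast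
    moreover have "snd (hd F) \<le> snd w1" using
      lattice_path_mono[OF F(1) lattice_path_hd_in[OF F(1)] w1F level_hd_le[OF F(1) w1F]] by simp
    ultimately show ?thesis using w1 by (simp add: f_def)
  qed
  have lF: "snd (last F) = c0 + N"
  proof -
    have "f (last F)" using lattice_path_last_in[OF F(1)] Fm by blast
    moreover have "snd w2 \<le> snd (last F)"
      using lattice_path_mono[OF F(1) w2F lattice_path_last_in[OF F(1)] level_le_last[OF F(1) w2F]]
        by simp
    ultimately show ?thesis using w2 by (simp add: f_def)
  qed
  have fe: "f = (\<lambda>x. c0 < snd x \<and> snd x \<le> c0 + N)" by (rule ext) (simp add: f_def)
  have RF: "R = map (\<lambda>x. (fst x, snd x - c0)) F" by (simp add: R_def F_def fe)
  show "lattice_path R" unfolding RF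
    by (rule lattice_path_map[OF F(1)]) (simp_all add: east_def north_def)
  show "snd (hd R) = 1" using hF F(2) by (simp add: RF hd_map)
  show "snd (last R) = N" using lF F(2) by (simp add: RF last_map)
  fix x
  show "x \<in> set R \<longleftrightarrow> (fst x, c0 + snd x) \<in> set P \<and> 1 \<le> snd x \<and> snd x \<le> N"
  proof
    assume "x \<in> set R"
    then obtain y where "y \<in> set F" "x = (fst y, snd y - c0)" by (auto simp: RF)
    then show "(fst x, c0 + snd x) \<in> set P \<and> 1 \<le> snd x \<and> snd x \<le> N" using Fm by (auto simp: f_def)
  next
    assume a: "(fst x, c0 + snd x) \<in> set P \<and> 1 \<le> snd x \<and> snd x \<le> N"
    then have "(fst x, c0 + snd x) \<in> set F" using Fm by (auto simp: f_def)
    moreover have "x = (fst (fst x, c0 + snd x), snd (fst x, c0 + snd x) - c0)" by simp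
    ultimately show "x \<in> set R" unfolding RF by (metis (no_types, lifting) image_eqI set_map)
  qed
qed

lemma restrict_rows:
  assumes P: "lattice_path P" and hd: "fst (hd P) = A" and lst: "fst (last P) = 1"
    and r0: "0 \<le> r0" "r0 + M \<le> A" "1 \<le> M"
  defines "R \<equiv> map (\<lambda>x. (fst x - r0, snd x)) (filter (\<lambda>x. r0 < fst x \<and> fst x \<le> r0 + M) P)"
  shows "lattice_path R" "fst (hd R) = M" "fst (last R) = 1"
    "\<And>x. x \<in> set R \<longleftrightarrow> (r0 + fst x, snd x) \<in> set P \<and> 1 \<le> fst x \<and> fst x \<le> M"
proof -
  define f where "f x \<longleftrightarrow> r0 < fst x \<and> fst x \<le> r0 + M" for x :: pt
  define F where "F = filter f P"
  have conv: "f w" if "z1 \<in> set P" "z2 \<in> set P" "w \<in> set P" "f z1" "f z2" "level z1 \<le> level w"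
    "level w \<le> level z2" for z1 z2 w
    using lattice_path_mono[OF P that(1) that(3) that(6)]
      lattice_path_mono[OF P that(3) that(2) that(7)] that(4,5) by (auto simp: f_def)
  have "\<exists>w\<in>set P. fst w = r0 + M \<and> level (hd P) \<le> level w"
    using row_after[OF P lattice_path_hd_in[OF P], of "r0 + M"] hd lst r0 by simp
  then obtain w1 where w1: "w1 \<in> set P" "fst w1 = r0 + M" by blast
  have "f w1" using w1 r0 by (simp add: f_def)
  then have ex: "\<exists>z\<in>set P. f z" using w1(1) by blast
  have F: "lattice_path F" "F \<noteq> []" using lattice_path_filter[OF P conv ex] ex
    by (simp_all add: F_def filter_empty_conv)
  have Fm: "z \<in> set F \<longleftrightarrow> z \<in> set P \<and> f z" for z by (simp add: F_def)
  have "\<exists>w\<in>set P. fst w = r0 + 1 \<and> level (hd P) \<le> level w"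
    using row_after[OF P lattice_path_hd_in[OF P], of "r0 + 1"] hd lst r0 by simp
  then obtain w2 where w2: "w2 \<in> set P" "fst w2 = r0 + 1" by blast
  have w1F: "w1 \<in> set F" and w2F: "w2 \<in> set F" using w1 w2 r0 Fm by (auto simp: f_def)
  have hF: "fst (hd F) = r0 + M"
  proof -
    have "f (hd F)" using lattice_path_hd_in[OF F(1)] Fm by blast
    moreover have "fst w1 \<le> fst (hd F)" using
      lattice_path_mono[OF F(1) lattice_path_hd_in[OF F(1)] w1F level_hd_le[OF F(1) w1F]] by simp
    ultimately show ?thesis using w1 by (simp add: f_def)
  qed
  have lF: "fst (last F) = r0 + 1"
  proof -
    have "f (last F)" using lattice_path_last_in[OF F(1)] Fm by blast
    moreover have "fst (last F) \<le> fst w2"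
      using lattice_path_mono[OF F(1) w2F lattice_path_last_in[OF F(1)] level_le_last[OF F(1) w2F]]
        by simp
    ultimately show ?thesis using w2 by (simp add: f_def)
  qed
  have fe: "f = (\<lambda>x. r0 < fst x \<and> fst x \<le> r0 + M)" by (rule ext) (simp add: f_def)
  have RF: "R = map (\<lambda>x. (fst x - r0, snd x)) F" by (simp add: R_def F_def fe)
  show "lattice_path R" unfolding RF
    by (rule lattice_path_map[OF F(1)]) (simp_all add: east_def north_def)
  show "fst (hd R) = M" using hF F(2) by (simp add: RF hd_map)
  show "fst (last R) = 1" using lF F(2) by (simp add: RF last_map)
  fix x
  show "x \<in> set R \<longleftrightarrow> (r0 + fst x, snd x) \<in> set P \<and> 1 \<le> fst x \<and> fst x \<le> M"
  proof
    assume "x \<in> set R"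
    then obtain y where "y \<in> set F" "x = (fst y - r0, snd y)" by (auto simp: RF)
    then show "(r0 + fst x, snd x) \<in> set P \<and> 1 \<le> fst x \<and> fst x \<le> M" using Fm by (auto simp: f_def)
  next
    assume a: "(r0 + fst x, snd x) \<in> set P \<and> 1 \<le> fst x \<and> fst x \<le> M"
    then have "(r0 + fst x, snd x) \<in> set F" using Fm by (auto simp: f_def)
    moreover have "x = (fst (r0 + fst x, snd x) - r0, snd (r0 + fst x, snd x))" by simp
    ultimately show "x \<in> set R" unfolding RF by (metis (no_types, lifting) image_eqI set_map)
  qed
qed

lemma sorted_wrt_concat_map_map:
  assumes "sorted_wrt (<) ks" "\<And>k. sorted_wrt (<) (qs k)"
    and R: "\<And>k q k' q'. k \<in> set ks \<Longrightarrow> k' \<in> set ks \<Longrightarrow> q \<in> set (qs k) \<Longrightarrow> q' \<in> set (qs k') \<Longrightarrow>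
              k < k' \<or> (k = k' \<and> q < q') \<Longrightarrow> Rel (Y k q) (Y k' q')"
  shows "sorted_wrt Rel (concat (map (\<lambda>k. map (Y k) (qs k)) ks))"
  using assms(1) R
proof (induction ks)
  case Nil then show ?case by simp
next
  case (Cons k ks)
  have s1: "sorted_wrt Rel (map (Y k) (qs k))"
    unfolding sorted_wrt_map
    using sorted_wrt_mono_rel[OF _ assms(2)[of k], of "\<lambda>q q'. Rel (Y k q) (Y k q')"]
      Cons.prems(2)[of k k] by auto
  have s2: "sorted_wrt Rel (concat (map (\<lambda>k. map (Y k) (qs k)) ks))"
    using Cons.IH Cons.prems by simp
  have s3: "\<forall>x\<in>set (map (Y k) (qs k)). \<forall>y\<in>set (concat (map (\<lambda>k. map (Y k) (qs k)) ks)). Rel x y"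
    using Cons.prems by auto
  show ?case using s1 s2 s3 by (simp add: sorted_wrt_append)
qed

lemma map_inverse_filter_map_filter:
  assumes "\<And>z. g (f z) = z"
  shows "map g (filter P (map f (filter Q L))) = filter (\<lambda>z. Q z \<and> P (f z)) L"
proof -
  have "map g (filter P (map f (filter Q L))) = map g (map f (filter (P \<circ> f) (filter Q L)))"
    by (simp add: filter_map)
  also have "\<dots> = filter (P \<circ> f) (filter Q L)" using assms by (induct L) auto
  also have "\<dots> = filter (\<lambda>z. Q z \<and> P (f z)) L" by (simp add: conj_commute)
  finally show ?thesis .
qed

lemma arrows_into_sorted: "sorted_wrt (<) (arrows_into r tgt \<alpha>)"
  unfolding arrows_into_def by (rule sorted_wrt_filter) (rule sorted_wrt_upt)
lemma arrows_from_sorted: "sorted_wrt (<) (arrows_from r src \<beta>)"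
  unfolding arrows_from_def by (rule sorted_wrt_filter) (rule sorted_wrt_upt)
lemma arrows_into_mem: "k \<in> set (arrows_into r tgt \<alpha>) \<longleftrightarrow> k \<in> {1..r} \<and> tgt k = \<alpha>"
  by (auto simp: arrows_into_def)
lemma arrows_from_mem: "k \<in> set (arrows_from r src \<beta>) \<longleftrightarrow> k \<in> {1..r} \<and> src k = \<beta>"
  by (auto simp: arrows_from_def)

section \<open>Road maps\<close>

locale road_map_setting =
  fixes Vs Vt :: "'v set" and r :: nat and src tgt :: "nat \<Rightarrow> 'v"
    and m u :: "'v \<Rightarrow> nat" and H V :: "'v \<Rightarrow> nat \<Rightarrow> pt list"
  assumes arrows: "\<forall>k\<in>{1..r}. src k \<in> Vs \<and> tgt k \<in> Vt"
    and sizeT: "\<forall>\<alpha>\<in>Vt. 0 < u \<alpha> \<and> u \<alpha> \<le> aT m \<alpha>"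
    and sizeS: "\<forall>\<beta>\<in>Vs. 0 < u \<beta> \<and> u \<beta> \<le> bS m \<beta>"
    and rm: "road_map Vs Vt r src tgt m u H V"
begin

abbreviation col_off :: "nat \<Rightarrow> int" where "col_off k \<equiv> colOff src tgt m k"
abbreviation row_off :: "nat \<Rightarrow> int" where "row_off k \<equiv> rowOff src tgt m k"
abbreviation emb_t :: "nat \<Rightarrow> pt \<Rightarrow> pt" where "emb_t k \<equiv> embT src tgt m k"
abbreviation emb_s :: "nat \<Rightarrow> pt \<Rightarrow> pt" where "emb_s k \<equiv> embS src tgt m k"

definition H_page :: "nat \<Rightarrow> nat \<Rightarrow> pt list" where
  "H_page k p = restrT src tgt m k (H (tgt k) p)"

definition V_page :: "nat \<Rightarrow> nat \<Rightarrow> pt list" where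
  "V_page k q = restrS src tgt m k (V (src k) q)"

definition rows :: "nat \<Rightarrow> int" where "rows k = int (m (tgt k))"
definition cols :: "nat \<Rightarrow> int" where "cols k = int (m (src k))"

lemma col_off_eq: "col_off k = int (block_offset tgt (\<lambda>k. m (src k)) k)"
  by (simp add: colOff_def block_offset_def)
lemma row_off_eq: "row_off k = int (block_offset src (\<lambda>k. m (tgt k)) k)"
  by (simp add: rowOff_def block_offset_def)
lemma bT_eq_total: "bT r src tgt m \<alpha> = block_total r tgt (\<lambda>k. m (src k)) \<alpha>"
  by (simp add: bT_def block_total_def)
lemma aS_eq_total: "aS r src tgt m \<beta> = block_total r src (\<lambda>k. m (tgt k)) \<beta>"
  by (simp add: aS_def block_total_def)

lemma horizontal_road:
  assumes "\<alpha> \<in> Vt" "p \<in> {1..u \<alpha>}"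
  shows "lattice_path (H \<alpha> p)" "in_grid (aT m \<alpha>) (bT r src tgt m \<alpha>) (H \<alpha> p)"
    "hd (H \<alpha> p) = (int (aT m \<alpha>) - int (u \<alpha>) + int p, 1)"
    "last (H \<alpha> p) = (int p, int (bT r src tgt m \<alpha>))"
  using rm assms unfolding road_map_def by blast+

lemma horizontal_roads_disjoint:
  assumes "\<alpha> \<in> Vt" "p \<in> {1..u \<alpha>}" "p' \<in> {1..u \<alpha>}" "z \<in> set (H \<alpha> p)" "z \<in> set (H \<alpha> p')"
  shows "p = p'"
  using rm assms unfolding road_map_def by blast

lemma vertical_road:
  assumes "\<beta> \<in> Vs" "q \<in> {1..u \<beta>}"
  shows "lattice_path (V \<beta> q)" "in_grid (aS r src tgt m \<beta>) (bS m \<beta>) (V \<beta> q)"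
    "last (V \<beta> q) = (1, int (bS m \<beta>) - int (u \<beta>) + int q)"
    "hd (V \<beta> q) = (int (aS r src tgt m \<beta>), int q)"
  using rm assms unfolding road_map_def by blast+

lemma vertical_roads_disjoint:
  assumes "\<beta> \<in> Vs" "q \<in> {1..u \<beta>}" "q' \<in> {1..u \<beta>}" "z \<in> set (V \<beta> q)" "z \<in> set (V \<beta> q')"
  shows "q = q'"
  using rm assms unfolding road_map_def by blast

lemma arrow_ends: "k \<in> {1..r} \<Longrightarrow> src k \<in> Vs \<and> tgt k \<in> Vt" using arrows by blast

lemma page_dims_pos:
  assumes "k \<in> {1..r}"
  shows "1 \<le> rows k" "1 \<le> cols k"
proof -
  have "0 < u (tgt k)" "u (tgt k) \<le> aT m (tgt k)" using sizeT arrow_ends[OF assms] by auto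
  then show "1 \<le> rows k" by (simp add: rows_def aT_def)
  have "0 < u (src k)" "u (src k) \<le> bS m (src k)" using sizeS arrow_ends[OF assms] by auto
  then show "1 \<le> cols k" by (simp add: cols_def bS_def)
qed

lemma col_off_bounds:
  assumes "k \<in> {1..r}"
  shows "0 \<le> col_off k" "col_off k + cols k \<le> int (bT r src tgt m (tgt k))"
proof -
  show "0 \<le> col_off k" by (simp add: col_off_eq)
  have "block_offset tgt (\<lambda>k. m (src k)) k + m (src k) \<le> block_total r tgt (\<lambda>k. m (src k)) (tgt k)"
    using block_offset_add_le_total[of k r tgt "\<lambda>k. m (src k)"] assms by simp
  then show "col_off k + cols k \<le> int (bT r src tgt m (tgt k))"
    by (simp add: col_off_eq cols_def bT_eq_total)
qed

lemma row_off_bounds: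
  assumes "k \<in> {1..r}"
  shows "0 \<le> row_off k" "row_off k + rows k \<le> int (aS r src tgt m (src k))"
proof -
  show "0 \<le> row_off k" by (simp add: row_off_eq)
  have "block_offset src (\<lambda>k. m (tgt k)) k + m (tgt k) \<le> block_total r src (\<lambda>k. m (tgt k)) (src k)"
    using block_offset_add_le_total[of k r src "\<lambda>k. m (tgt k)"] assms by simp
  then show "row_off k + rows k \<le> int (aS r src tgt m (src k))"
    by (simp add: row_off_eq rows_def aS_eq_total)
qed

lemma page_of_column_unique:
  assumes "k \<in> {1..r}" "k' \<in> {1..r}" "tgt k = tgt k'" "col_off k < j" "j \<le> col_off k + cols k"
    "col_off k' < j" "j \<le> col_off k' + cols k'"
  shows "k = k'"
proof (rule ccontr)
  assume "k \<noteq> k'"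
  then consider "k < k'" | "k' < k" by linarith
  then show False
  proof cases
    case 1
    have "block_offset tgt (\<lambda>k. m (src k)) k + m (src k) \<le> block_offset tgt (\<lambda>k. m (src k)) k'"
      using block_offset_add_le[of k k' tgt] 1 assms by simp
    then show False using assms by (simp add: col_off_eq cols_def)
  next
    case 2
    have "block_offset tgt (\<lambda>k. m (src k)) k' + m (src k') \<le> block_offset tgt (\<lambda>k. m (src k)) k"
      using block_offset_add_le[of k' k tgt] 2 assms by simp
    then show False using assms by (simp add: col_off_eq cols_def)
  qed
qed

lemma page_of_row_unique:
  assumes "k \<in> {1..r}" "k' \<in> {1..r}" "src k = src k'" "row_off k < j" "j \<le> row_off k + rows k"
    "row_off k' < j" "j \<le> row_off k' + rows k'"
  shows "k = k'"
proof (rule ccontr)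
  assume "k \<noteq> k'"
  then consider "k < k'" | "k' < k" by linarith
  then show False
  proof cases
    case 1
    have "block_offset src (\<lambda>k. m (tgt k)) k + m (tgt k) \<le> block_offset src (\<lambda>k. m (tgt k)) k'"
      using block_offset_add_le[of k k' src] 1 assms by simp
    then show False using assms by (simp add: row_off_eq rows_def)
  next
    case 2
    have "block_offset src (\<lambda>k. m (tgt k)) k' + m (tgt k') \<le> block_offset src (\<lambda>k. m (tgt k)) k"
      using block_offset_add_le[of k' k src] 2 assms by simp
    then show False using assms by (simp add: row_off_eq rows_def)
  qed
qed

lemma page_of_column_exists:
  assumes "\<alpha> \<in> Vt" "1 \<le> j" "j \<le> int (bT r src tgt m \<alpha>)"
  shows "\<exists>k\<in>{1..r}. tgt k = \<alpha> \<and> col_off k < j \<and> j \<le> col_off k + cols k"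
proof -
  have "1 \<le> nat j" "nat j \<le> block_total r tgt (\<lambda>k. m (src k)) \<alpha>" using assms
    by (simp_all add: bT_eq_total)
  from block_offset_cover[OF this] obtain k where "k \<in> {1..r}" "tgt k = \<alpha>"
    "block_offset tgt (\<lambda>k. m (src k)) k < nat j"
    "nat j \<le> block_offset tgt (\<lambda>k. m (src k)) k + m (src k)" by blast
  then show ?thesis using assms(2) by (intro bexI[of _ k]) (auto simp: col_off_eq cols_def)
qed

lemma page_of_row_exists:
  assumes "\<beta> \<in> Vs" "1 \<le> i" "i \<le> int (aS r src tgt m \<beta>)"
  shows "\<exists>k\<in>{1..r}. src k = \<beta> \<and> row_off k < i \<and> i \<le> row_off k + rows k"
proof -
  have "1 \<le> nat i" "nat i \<le> block_total r src (\<lambda>k. m (tgt k)) \<beta>" using assms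
    by (simp_all add: aS_eq_total)
  from block_offset_cover[OF this] obtain k where "k \<in> {1..r}" "src k = \<beta>"
    "block_offset src (\<lambda>k. m (tgt k)) k < nat i"
    "nat i \<le> block_offset src (\<lambda>k. m (tgt k)) k + m (tgt k)" by blast
  then show ?thesis using assms(2) by (intro bexI[of _ k]) (auto simp: row_off_eq rows_def)
qed

lemma H_page_spec:
  assumes k: "k \<in> {1..r}" and p: "p \<in> {1..u (tgt k)}"
  shows "lattice_path (H_page k p)" "snd (hd (H_page k p)) = 1" "snd (last (H_page k p)) = cols k"
    "\<And>x. x \<in> set (H_page k p) \<longleftrightarrow> emb_t k x \<in> set (H (tgt k) p) \<and> 1 \<le> snd x \<and> snd x \<le> cols k"
proof -
  have a: "tgt k \<in> Vt" using arrow_ends[OF k] by simp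
  note H = horizontal_road[OF a p]
  have H_page_eq: "H_page k p = map (\<lambda>x. (fst x, snd x - col_off k)) (filter (\<lambda>x. col_off k < snd x \<and>
      snd x \<le> col_off k + cols k) (H (tgt k) p))"
    by (simp add: H_page_def restrT_def cols_def)
  note R = restrict_columns[OF H(1) _ _ col_off_bounds[OF k] page_dims_pos(2)[OF k], folded H_page_eq]
  have hh: "snd (hd (H (tgt k) p)) = 1" "snd (last (H (tgt k) p)) = int (bT r src tgt m (tgt k))"
    using H(3,4) by simp_all
  show "lattice_path (H_page k p)" "snd (hd (H_page k p)) = 1" "snd (last (H_page k p)) = cols k"
    using R[OF hh] by simp_all
  fix x show "x \<in> set (H_page k p) \<longleftrightarrow> emb_t k x \<in> set (H (tgt k) p) \<and> 1 \<le> snd x \<and> snd x \<le> cols k"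
    using R(4)[OF hh, of x] by (simp add: embT_def)
qed

lemma V_page_spec:
  assumes k: "k \<in> {1..r}" and q: "q \<in> {1..u (src k)}"
  shows "lattice_path (V_page k q)" "fst (hd (V_page k q)) = rows k" "fst (last (V_page k q)) = 1"
    "\<And>x. x \<in> set (V_page k q) \<longleftrightarrow> emb_s k x \<in> set (V (src k) q) \<and> 1 \<le> fst x \<and> fst x \<le> rows k"
proof -
  have b: "src k \<in> Vs" using arrow_ends[OF k] by simp
  note VV = vertical_road[OF b q]
  have V_page_eq: "V_page k q = map (\<lambda>x. (fst x - row_off k, snd x)) (filter (\<lambda>x. row_off k < fst x \<and>
      fst x \<le> row_off k + rows k) (V (src k) q))"
    by (simp add: V_page_def restrS_def rows_def)
  note R = restrict_rows[OF VV(1) _ _ row_off_bounds[OF k] page_dims_pos(1)[OF k], folded V_page_eq]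
  have hh: "fst (hd (V (src k) q)) = int (aS r src tgt m (src k))" "fst (last (V (src k) q)) = 1"
    using VV(3,4) by simp_all
  show "lattice_path (V_page k q)" "fst (hd (V_page k q)) = rows k" "fst (last (V_page k q)) = 1"
    using R[OF hh] by simp_all
  fix x show "x \<in> set (V_page k q) \<longleftrightarrow> emb_s k x \<in> set (V (src k) q) \<and> 1 \<le> fst x \<and> fst x \<le> rows k"
    using R(4)[OF hh, of x] by (simp add: embS_def)
qed

lemma emb_t_neighbours:
  "emb_t k (east z) = east (emb_t k z)" "emb_t k (north z) = north (emb_t k z)"
  "emb_t k (west z) = west (emb_t k z)" "emb_t k (south z) = south (emb_t k z)"
  by (simp_all add: embT_def east_def north_def west_def south_def)

lemma emb_s_neighbours:
  "emb_s k (east z) = east (emb_s k z)" "emb_s k (north z) = north (emb_s k z)"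
  "emb_s k (west z) = west (emb_s k z)" "emb_s k (south z) = south (emb_s k z)"
  by (simp_all add: embS_def east_def north_def west_def south_def)

lemma emb_t_eq_iff: "emb_t k x = emb_t k y \<longleftrightarrow> x = y" by (auto simp: embT_def prod_eq_iff)
lemma emb_s_eq_iff: "emb_s k x = emb_s k y \<longleftrightarrow> x = y" by (auto simp: embS_def prod_eq_iff)

lemma H_page_in_page:
  assumes "k \<in> {1..r}" "p \<in> {1..u (tgt k)}" "z \<in> set (H_page k p)"
  shows "1 \<le> fst z \<and> fst z \<le> rows k \<and> 1 \<le> snd z \<and> snd z \<le> cols k"
proof -
  have "emb_t k z \<in> set (H (tgt k) p)" "1 \<le> snd z" "snd z \<le> cols k"
    using H_page_spec(4)[OF assms(1,2)] assms(3) by auto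
  moreover have "tgt k \<in> Vt" using arrow_ends[OF assms(1)] by simp
  ultimately show ?thesis using horizontal_road(2)[OF _ assms(2)]
    by (auto simp: in_grid_def embT_def rows_def aT_def)
qed

lemma V_page_in_page:
  assumes "k \<in> {1..r}" "q \<in> {1..u (src k)}" "z \<in> set (V_page k q)"
  shows "1 \<le> fst z \<and> fst z \<le> rows k \<and> 1 \<le> snd z \<and> snd z \<le> cols k"
proof -
  have "emb_s k z \<in> set (V (src k) q)" "1 \<le> fst z" "fst z \<le> rows k"
    using V_page_spec(4)[OF assms(1,2)] assms(3) by auto
  moreover have "src k \<in> Vs" using arrow_ends[OF assms(1)] by simp
  ultimately show ?thesis using vertical_road(2)[OF _ assms(2)]
    by (auto simp: in_grid_def embS_def cols_def bS_def)
qed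

lemma H_page_corner_on_V_page:
  assumes st: "straight_road_map Vs Vt r src tgt m u H V" and k: "k \<in> {1..r}"
    and p: "p \<in> {1..u (tgt k)}" and z: "z \<in> set (H_page k p)"
    and c: "west z \<in> set (H_page k p) \<and> north z \<in> set (H_page k p) \<or> south z \<in> set (H_page k p) \<and>
        east z \<in> set (H_page k p)"
  shows "\<exists>q\<in>{1..u (src k)}. z \<in> set (V_page k q)"
proof -
  have a: "tgt k \<in> Vt" using arrow_ends[OF k] by simp
  note mem = H_page_spec(4)[OF k p]
  have Hl: "lattice_path (H (tgt k) p)" using horizontal_road(1)[OF a p] .
  have ez: "emb_t k z \<in> set (H (tgt k) p)" using mem z by blast
  have "emb_t k z \<in> corners (H (tgt k) p)"
    using c
  proof
    assume "west z \<in> set (H_page k p) \<and> north z \<in> set (H_page k p)"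
    then have "west (emb_t k z) \<in> set (H (tgt k) p)" "north (emb_t k z) \<in> set (H (tgt k) p)"
      using mem emb_t_neighbours by metis+
    from corner_west_north[OF Hl ez this] show ?thesis .
  next
    assume "south z \<in> set (H_page k p) \<and> east z \<in> set (H_page k p)"
    then have "south (emb_t k z) \<in> set (H (tgt k) p)" "east (emb_t k z) \<in> set (H (tgt k) p)"
      using mem emb_t_neighbours by metis+
    from corner_south_east[OF Hl ez this] show ?thesis .
  qed
  with st a p obtain k' x where k': "k' \<in> {1..r}" "tgt k' = tgt k"
    "1 \<le> fst x" "fst x \<le> int (m (tgt k'))" "1 \<le> snd x" "snd x \<le> int (m (src k'))"
    "emb_t k z = emb_t k' x" "\<exists>q\<in>{1..u (src k')}. emb_s k' x \<in> set (V (src k') q)"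
    unfolding straight_road_map_def by blast
  have zr: "1 \<le> snd z" "snd z \<le> cols k" using mem z by auto
  have "col_off k + snd z = col_off k' + snd x" using k'(7) by (simp add: embT_def)
  then have "k = k'"
    using page_of_column_unique[OF k k'(1) k'(2)[symmetric], of "col_off k + snd z"] zr k'(5,6)
    by (simp add: cols_def)
  with k'(7) have "x = z" by (simp add: emb_t_eq_iff)
  with k'(8) \<open>k = k'\<close> obtain q where q: "q \<in> {1..u (src k)}" "emb_s k z \<in> set (V (src k) q)"
    by blast
  have "1 \<le> fst z" "fst z \<le> rows k" using H_page_in_page[OF k p z] by auto
  with q V_page_spec(4)[OF k q(1)] show ?thesis by blast
qed
lemma V_page_corner_on_H_page:
  assumes st: "straight_road_map Vs Vt r src tgt m u H V" and k: "k \<in> {1..r}"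
    and q: "q \<in> {1..u (src k)}" and z: "z \<in> set (V_page k q)"
    and c: "west z \<in> set (V_page k q) \<and> north z \<in> set (V_page k q) \<or> south z \<in> set (V_page k q) \<and>
        east z \<in> set (V_page k q)"
  shows "\<exists>p\<in>{1..u (tgt k)}. z \<in> set (H_page k p)"
proof -
  have b: "src k \<in> Vs" using arrow_ends[OF k] by simp
  note mem = V_page_spec(4)[OF k q]
  have Vl: "lattice_path (V (src k) q)" using vertical_road(1)[OF b q] .
  have ez: "emb_s k z \<in> set (V (src k) q)" using mem z by blast
  have "emb_s k z \<in> corners (V (src k) q)"
    using c
  proof
    assume "west z \<in> set (V_page k q) \<and> north z \<in> set (V_page k q)"
    then have "west (emb_s k z) \<in> set (V (src k) q)" "north (emb_s k z) \<in> set (V (src k) q)"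
      using mem emb_s_neighbours by metis+
    from corner_west_north[OF Vl ez this] show ?thesis .
  next
    assume "south z \<in> set (V_page k q) \<and> east z \<in> set (V_page k q)"
    then have "south (emb_s k z) \<in> set (V (src k) q)" "east (emb_s k z) \<in> set (V (src k) q)"
      using mem emb_s_neighbours by metis+
    from corner_south_east[OF Vl ez this] show ?thesis .
  qed
  with st b q obtain k' x where k': "k' \<in> {1..r}" "src k' = src k"
    "1 \<le> fst x" "fst x \<le> int (m (tgt k'))" "1 \<le> snd x" "snd x \<le> int (m (src k'))"
    "emb_s k z = emb_s k' x" "\<exists>p\<in>{1..u (tgt k')}. emb_t k' x \<in> set (H (tgt k') p)"
    unfolding straight_road_map_def by blast
  have zr: "1 \<le> fst z" "fst z \<le> rows k" using mem z by auto
  have "row_off k + fst z = row_off k' + fst x" using k'(7) by (simp add: embS_def)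
  then have "k = k'" using page_of_row_unique[OF k k'(1) k'(2)[symmetric], of "row_off k + fst z"]
    zr k'(3,4)
    by (simp add: rows_def)
  with k'(7) have "x = z" by (simp add: emb_s_eq_iff)
  with k'(8) \<open>k = k'\<close> obtain p where p: "p \<in> {1..u (tgt k)}" "emb_t k z \<in> set (H (tgt k) p)"
    by blast
  have "1 \<le> snd z" "snd z \<le> cols k" using V_page_in_page[OF k q z] by auto
  with p H_page_spec(4)[OF k p(1)] show ?thesis by blast
qed
lemma straight_page_at:
  assumes st: "straight_road_map Vs Vt r src tgt m u H V" and k: "k \<in> {1..r}"
  shows "straight_page (rows k) (cols k) {1..u (tgt k)} {1..u (src k)} (H_page k) (V_page k)"
proof
  have a: "tgt k \<in> Vt" and b: "src k \<in> Vs" using arrow_ends[OF k] by auto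
  show "lattice_path (H_page k p)" if "p \<in> {1..u (tgt k)}" for p using H_page_spec[OF k that]
    by blast
  show "lattice_path (V_page k q)" if "q \<in> {1..u (src k)}" for q using V_page_spec[OF k that]
    by blast
  show "1 \<le> fst z \<and> fst z \<le> rows k \<and> 1 \<le> snd z \<and> snd z \<le> cols k"
    if "p \<in> {1..u (tgt k)}" "z \<in> set (H_page k p)" for p z
    using H_page_in_page[OF k that] .
  show "1 \<le> fst z \<and> fst z \<le> rows k \<and> 1 \<le> snd z \<and> snd z \<le> cols k"
    if "q \<in> {1..u (src k)}" "z \<in> set (V_page k q)" for q z
    using V_page_in_page[OF k that] .
  show "snd (hd (H_page k p)) = 1" "snd (last (H_page k p)) = cols k" if "p \<in> {1..u (tgt k)}" for p
    using H_page_spec[OF k that] by blast+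
  show "fst (hd (V_page k q)) = rows k" "fst (last (V_page k q)) = 1" if "q \<in> {1..u (src k)}" for q
    using V_page_spec[OF k that] by blast+
  show "p = p'" if "p \<in> {1..u (tgt k)}" "p' \<in> {1..u (tgt k)}" "z \<in> set (H_page k p)"
    "z \<in> set (H_page k p')" for p p' z
    using horizontal_roads_disjoint[OF a that(1,2)] H_page_spec(4)[OF k that(1)]
      H_page_spec(4)[OF k that(2)] that(3,4) by blast
  show "q = q'" if "q \<in> {1..u (src k)}" "q' \<in> {1..u (src k)}" "z \<in> set (V_page k q)"
    "z \<in> set (V_page k q')" for q q' z
    using vertical_roads_disjoint[OF b that(1,2)] V_page_spec(4)[OF k that(1)]
      V_page_spec(4)[OF k that(2)] that(3,4) by blast
  show "{1..u (src k)} \<noteq> {}" using sizeS b by force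
  show "\<exists>q\<in>{1..u (src k)}. z \<in> set (V_page k q)"
    if "p \<in> {1..u (tgt k)}" "z \<in> set (H_page k p)"
      "west z \<in> set (H_page k p) \<and> north z \<in> set (H_page k p) \<or> south z \<in> set (H_page k p) \<and>
          east z \<in> set (H_page k p)"
    for p z
    by (rule H_page_corner_on_V_page[OF st k that])
  show "\<exists>p\<in>{1..u (tgt k)}. z \<in> set (H_page k p)"
    if "q \<in> {1..u (src k)}" "z \<in> set (V_page k q)"
      "west z \<in> set (V_page k q) \<and> north z \<in> set (V_page k q) \<or> south z \<in> set (V_page k q) \<and>
          east z \<in> set (V_page k q)"
    for q z
    by (rule V_page_corner_on_H_page[OF st k that])
qed

lemma H_order:
  assumes a: "\<alpha> \<in> Vt" and p: "p \<in> {1..u \<alpha>}" "p' \<in> {1..u \<alpha>}" "p < p'"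
  shows "\<forall>z\<in>set (H \<alpha> p). \<forall>z'\<in>set (H \<alpha> p'). snd z = snd z' \<longrightarrow> fst z < fst z'"
proof (rule disjoint_paths_column_order[OF horizontal_road(1)[OF a p(1)]
    horizontal_road(1)[OF a p(2)]])
  show "snd (hd (H \<alpha> p)) = 1" using horizontal_road(3)[OF a p(1)] by simp
  show "snd (hd (H \<alpha> p')) = 1" using horizontal_road(3)[OF a p(2)] by simp
  show "snd (last (H \<alpha> p)) = int (bT r src tgt m \<alpha>)" using horizontal_road(4)[OF a p(1)] by simp
  show "\<forall>z\<in>set (H \<alpha> p'). 1 \<le> snd z \<and> snd z \<le> int (bT r src tgt m \<alpha>)"
    using horizontal_road(2)[OF a p(2)] by (auto simp: in_grid_def)
  show "fst (hd (H \<alpha> p)) < fst (hd (H \<alpha> p'))"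
    using horizontal_road(3)[OF a p(1)] horizontal_road(3)[OF a p(2)] p(3) by simp
  show "set (H \<alpha> p) \<inter> set (H \<alpha> p') = {}" using horizontal_roads_disjoint[OF a p(1,2)] p(3) by auto
qed

lemma V_order:
  assumes b: "\<beta> \<in> Vs" and q: "q \<in> {1..u \<beta>}" "q' \<in> {1..u \<beta>}" "q < q'"
  shows "\<forall>z\<in>set (V \<beta> q). \<forall>z'\<in>set (V \<beta> q'). fst z = fst z' \<longrightarrow> snd z < snd z'"
proof -
  define A where "A = int (aS r src tgt m \<beta>)"
  define B where "B = int (bS m \<beta>)"
  have l1: "lattice_path (V \<beta> q)" and l2: "lattice_path (V \<beta> q')" using vertical_road(1)[OF b] q
    by auto
  have T: "\<forall>y\<in>set (map (antitranspose A B) (V \<beta> q')). \<forall>y'\<in>set (map (antitranspose A B) (V \<beta> q)).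
      snd y = snd y' \<longrightarrow> fst y < fst y'"
  proof (rule disjoint_paths_column_order[OF lattice_path_antitranspose[OF l2]
      lattice_path_antitranspose[OF l1]])
    show "snd (hd (map (antitranspose A B) (V \<beta> q'))) = 1"
      using vertical_road(4)[OF b q(2)] lattice_path_nonempty[OF l2]
      by (simp add: hd_map antitranspose_def A_def)
    show "snd (hd (map (antitranspose A B) (V \<beta> q))) = 1"
      using vertical_road(4)[OF b q(1)] lattice_path_nonempty[OF l1]
      by (simp add: hd_map antitranspose_def A_def)
    show "snd (last (map (antitranspose A B) (V \<beta> q'))) = A"
      using vertical_road(3)[OF b q(2)] lattice_path_nonempty[OF l2]
      by (simp add: last_map antitranspose_def)
    show "\<forall>z\<in>set (map (antitranspose A B) (V \<beta> q)). 1 \<le> snd z \<and> snd z \<le> A"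
      using vertical_road(2)[OF b q(1)]
      by (auto simp: in_grid_def antitranspose_def A_def)
    show "fst (hd (map (antitranspose A B) (V \<beta> q'))) < fst (hd (map (antitranspose A B) (V \<beta> q)))"
      using vertical_road(4)[OF b q(1)] vertical_road(4)[OF b q(2)] lattice_path_nonempty[OF l1]
        lattice_path_nonempty[OF l2] q(3)
      by (simp add: hd_map antitranspose_def)
    show "set (map (antitranspose A B) (V \<beta> q')) \<inter> set (map (antitranspose A B) (V \<beta> q)) = {}"
      using vertical_roads_disjoint[OF b q(1,2)] q(3) by (auto simp: antitranspose_eq_iff)
  qed
  show ?thesis
  proof (intro ballI impI)
    fix z z' assume z: "z \<in> set (V \<beta> q)" and z': "z' \<in> set (V \<beta> q')" and e: "fst z = fst z'"
    have "antitranspose A B z' \<in> set (map (antitranspose A B) (V \<beta> q'))"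
      "antitranspose A B z \<in> set (map (antitranspose A B) (V \<beta> q))"
      using z z' by simp_all
    from T[rule_format, OF this] e show "snd z < snd z'" by (simp add: antitranspose_def)
  qed
qed

lemma V_page_order:
  assumes k: "k \<in> {1..r}" and q: "q \<in> {1..u (src k)}" "q' \<in> {1..u (src k)}" "q < q'"
  shows "\<forall>x\<in>set (V_page k q). \<forall>x'\<in>set (V_page k q'). fst x = fst x' \<longrightarrow> snd x < snd x'"
proof (intro ballI impI)
  fix x x' assume x: "x \<in> set (V_page k q)" and x': "x' \<in> set (V_page k q')" and e: "fst x = fst x'"
  have "emb_s k x \<in> set (V (src k) q)" "emb_s k x' \<in> set (V (src k) q')"
    using V_page_spec(4)[OF k q(1)] V_page_spec(4)[OF k q(2)] x x' by auto
  from V_order[OF _ q, rule_format, OF _ this] arrow_ends[OF k] e show "snd x < snd x'"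
    by (simp add: embS_def)
qed

lemma H_page_order:
  assumes k: "k \<in> {1..r}" and p: "p \<in> {1..u (tgt k)}" "p' \<in> {1..u (tgt k)}" "p < p'"
  shows "\<forall>x\<in>set (H_page k p'). \<forall>x'\<in>set (H_page k p). snd x = snd x' \<longrightarrow> fst x' < fst x"
proof (intro ballI impI)
  fix x x' assume x: "x \<in> set (H_page k p')" and x': "x' \<in> set (H_page k p)" and e: "snd x = snd x'"
  have "emb_t k x' \<in> set (H (tgt k) p)" "emb_t k x \<in> set (H (tgt k) p')"
    using H_page_spec(4)[OF k p(1)] H_page_spec(4)[OF k p(2)] x x' by auto
  from H_order[OF _ p, rule_format, OF _ this] arrow_ends[OF k] e show "fst x' < fst x"
    by (simp add: embT_def)
qed


theorem connected_inter_if_straight: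
  assumes st: "straight_road_map Vs Vt r src tgt m u H V" and k: "k \<in> {1..r}"
    and p: "p \<in> {1..u (tgt k)}" and q: "q \<in> {1..u (src k)}"
  shows "connected_inter src tgt m H V k p q"
proof -
  interpret pg: straight_page "rows k" "cols k" "{1..u (tgt k)}" "{1..u (src k)}" "H_page k"
    "V_page k"
    by (rule straight_page_at[OF st k])
  have sH: "segH src tgt m H V k p q = filter (\<lambda>x. x \<in> set (V_page k q)) (H_page k p)"
    and sV: "segV src tgt m H V k p q = filter (\<lambda>x. x \<in> set (H_page k p)) (V_page k q)"
    by (simp_all add: segH_def segV_def H_page_def V_page_def)
  have meet: "\<exists>z\<in>set (H_page k p). z \<in> set (V_page k q)" "\<exists>z\<in>set (V_page k q). z \<in> set (H_page k p)"
    using pg.h_meets_v[OF p q] by auto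
  have "lattice_path (segH src tgt m H V k p q)" "sublist (segH src tgt m H V k p q) (H_page k p)"
    unfolding sH by (rule lattice_path_filter[OF H_page_spec(1)[OF k p] _ meet(1)];
        blast intro: pg.h_between_in_v[OF p q])+
  moreover have "sublist (segV src tgt m H V k p q) (V_page k q)"
    unfolding sV by (rule lattice_path_filter[OF V_page_spec(1)[OF k q] _ meet(2)];
        blast intro: pg.v_between_in_h[OF p q])
  moreover have "segH src tgt m H V k p q \<noteq> []" using meet(1) by (simp add: sH filter_empty_conv)
  ultimately show ?thesis by (simp add: connected_inter_def sublist_def H_page_def V_page_def)
qed

definition unemb_t :: "nat \<Rightarrow> pt \<Rightarrow> pt" where "unemb_t k z = (fst z, snd z - col_off k)"

lemma emb_t_unemb_t [simp]: "emb_t k (unemb_t k z) = z" by (simp add: unemb_t_def embT_def)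
lemma unemb_t_emb_t [simp]: "unemb_t k (emb_t k z) = z" by (simp add: unemb_t_def embT_def)
lemma level_unemb_t: "level (unemb_t k z) = level z - col_off k"
  by (simp add: unemb_t_def level_def)
lemma unemb_t_north: "unemb_t k (north z) = north (unemb_t k z)"
  by (simp add: unemb_t_def north_def)

lemma H_page_mem_unemb_t:
  assumes k: "k \<in> {1..r}" and p: "p \<in> {1..u (tgt k)}" and z: "z \<in> set (H (tgt k) p)"
    and c: "col_off k < snd z" "snd z \<le> col_off k + cols k"
  shows "unemb_t k z \<in> set (H_page k p)"
  using H_page_spec(4)[OF k p, of "unemb_t k z"] z c by (simp add: unemb_t_def embT_def)

text \<open>The piece P^k_pq \<leadsto> Q^k_pq of (b), regarded in A_tgt(k), as a filter of H^tgt(k)_p.\<close>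

definition H_piece :: "nat \<Rightarrow> nat \<Rightarrow> nat \<Rightarrow> pt list" where
  "H_piece k p q = filter (\<lambda>z. col_off k < snd z \<and> snd z \<le> col_off k + cols k \<and>
      unemb_t k z \<in> set (V_page k q))
     (H (tgt k) p)"

lemma pieces_H_eq:
  "pieces_H r src tgt m u H V \<alpha> p =
     concat (map (\<lambda>k. map (H_piece k p) [1..<Suc (u (src k))]) (arrows_into r tgt \<alpha>))"
proof -
  have "map (emb_t k) (segH src tgt m H V k p q) = H_piece k p q" for k q
  proof -
    have "segH src tgt m H V k p q = filter (\<lambda>x. x \<in> set (V_page k q))
        (map (unemb_t k) (filter (\<lambda>x. col_off k < snd x \<and>
          snd x \<le> col_off k + cols k) (H (tgt k) p)))"
      by (simp add: segH_def H_page_def V_page_def restrT_def cols_def unemb_t_def[abs_def])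
    then show ?thesis by (simp add: map_inverse_filter_map_filter H_piece_def)
  qed
  then show ?thesis by (simp add: pieces_H_def)
qed

lemma H_piece_sublist:
  assumes st: "straight_road_map Vs Vt r src tgt m u H V" and k: "k \<in> {1..r}"
    and p: "p \<in> {1..u (tgt k)}" and q: "q \<in> {1..u (src k)}"
  shows "sublist (H_piece k p q) (H (tgt k) p)" "H_piece k p q \<noteq> []"
proof -
  interpret pg: straight_page "rows k" "cols k" "{1..u (tgt k)}" "{1..u (src k)}" "H_page k"
    "V_page k"
    by (rule straight_page_at[OF st k])
  define f where "f z \<longleftrightarrow> col_off k < snd z \<and> snd z \<le> col_off k + cols k \<and>
      unemb_t k z \<in> set (V_page k q)" for z
  have L: "lattice_path (H (tgt k) p)" using horizontal_road(1)[OF _ p] arrow_ends[OF k] by simp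
  have memh: "unemb_t k z \<in> set (H_page k p)" if "z \<in> set (H (tgt k) p)" "f z" for z
    using H_page_mem_unemb_t[OF k p that(1)] that(2) by (simp add: f_def)
  have conv: "f w" if "z1 \<in> set (H (tgt k) p)" "z2 \<in> set (H (tgt k) p)" "w \<in> set (H (tgt k) p)"
    "f z1" "f z2" "level z1 \<le> level w" "level w \<le> level z2" for z1 z2 w
  proof -
    have cw: "col_off k < snd w" "snd w \<le> col_off k + cols k"
      using lattice_path_mono[OF L that(1,3,6)] lattice_path_mono[OF L that(3,2,7)] that(4,5)
      by (auto simp: f_def)
    have "unemb_t k w \<in> set (H_page k p)" using H_page_mem_unemb_t[OF k p that(3) cw] .
    with pg.h_between_in_v[OF p q memh[OF that(1,4)] _ memh[OF that(2,5)] _ _, of "unemb_t k w"]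
      that(4-7) cw show ?thesis by (simp add: f_def level_unemb_t)
  qed
  obtain x where x: "x \<in> set (H_page k p)" "x \<in> set (V_page k q)" using pg.h_meets_v[OF p q]
    by blast
  then have "emb_t k x \<in> set (H (tgt k) p)" "1 \<le> snd x" "snd x \<le> cols k"
    using H_page_spec(4)[OF k p] by auto
  moreover have "f (emb_t k x)"
    unfolding f_def unemb_t_emb_t using x(2) calculation(2,3) by (simp add: embT_def)
  ultimately have ex: "\<exists>z\<in>set (H (tgt k) p). f z" by blast
  show "sublist (H_piece k p q) (H (tgt k) p)"
    unfolding H_piece_def f_def[symmetric] by (rule lattice_path_filter(2)[OF L conv ex])
  show "H_piece k p q \<noteq> []" using ex by (simp add: H_piece_def f_def[symmetric] filter_empty_conv)
qed

lemma H_pieces_ordered: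
  assumes st: "straight_road_map Vs Vt r src tgt m u H V"
    and k: "k \<in> {1..r}" "k' \<in> {1..r}" "tgt k' = tgt k" and p: "p \<in> {1..u (tgt k)}"
    and q: "q \<in> {1..u (src k)}" "q' \<in> {1..u (src k')}" and lt: "k < k' \<or> (k = k' \<and> q < q')"
    and z: "z \<in> set (H_piece k p q)" and z': "z' \<in> set (H_piece k' p q')"
  shows "level z \<le> level z'"
  using lt
proof
  assume kk: "k < k'"
  have L: "lattice_path (H (tgt k) p)" using horizontal_road(1)[OF _ p] arrow_ends[OF k(1)] by simp
  have "block_offset tgt (\<lambda>k. m (src k)) k + m (src k) \<le> block_offset tgt (\<lambda>k. m (src k)) k'"
    using block_offset_add_le[of k k' tgt] kk k by simp
  then have "col_off k + cols k \<le> col_off k'" by (simp add: col_off_eq cols_def)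
  then have "snd z < snd z'" using z z' by (simp add: H_piece_def)
  moreover have "z \<in> set (H (tgt k) p)" "z' \<in> set (H (tgt k) p)" using z z' k(3)
    by (simp_all add: H_piece_def)
  ultimately show ?thesis using lattice_path_mono[OF L, of z' z] by fastforce
next
  assume kk: "k = k' \<and> q < q'"
  interpret pg: straight_page "rows k" "cols k" "{1..u (tgt k)}" "{1..u (src k)}" "H_page k"
    "V_page k"
    by (rule straight_page_at[OF st k(1)])
  have qq: "q' \<in> {1..u (src k)}" "q < q'" using q kk by auto
  have "unemb_t k z \<in> set (H_page k p)" "unemb_t k z' \<in> set (H_page k p)"
    using H_page_mem_unemb_t[OF k(1) p] z z' kk by (auto simp: H_piece_def)
  moreover have "unemb_t k z \<in> set (V_page k q)" "unemb_t k z' \<in> set (V_page k q')"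
    using z z' kk by (auto simp: H_piece_def)
  ultimately have "level (unemb_t k z) < level (unemb_t k z')"
    using pg.h_meets_west_v_first[OF p q(1) qq(1) V_page_order[OF k(1) q(1) qq]] by blast
  then show ?thesis by (simp add: level_unemb_t)
qed

lemma H_vertical_edge_in_piece:
  assumes st: "straight_road_map Vs Vt r src tgt m u H V" and a: "\<alpha> \<in> Vt" and p: "p \<in> {1..u \<alpha>}"
    and z: "z \<in> set (H \<alpha> p)" "north z \<in> set (H \<alpha> p)"
  shows "\<exists>k\<in>{1..r}. tgt k = \<alpha> \<and> (\<exists>q\<in>{1..u (src k)}. z \<in> set (H_piece k p q) \<and>
      north z \<in> set (H_piece k p q))"
proof -
  have "1 \<le> snd z" "snd z \<le> int (bT r src tgt m \<alpha>)"
    using horizontal_road(2)[OF a p] z(1) by (auto simp: in_grid_def)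
  from page_of_column_exists[OF a this] obtain k where
    k: "k \<in> {1..r}" "tgt k = \<alpha>" "col_off k < snd z" "snd z \<le> col_off k + cols k" by blast
  interpret pg: straight_page "rows k" "cols k" "{1..u (tgt k)}" "{1..u (src k)}" "H_page k"
    "V_page k"
    by (rule straight_page_at[OF st k(1)])
  have pk: "p \<in> {1..u (tgt k)}" using p k(2) by simp
  have "unemb_t k z \<in> set (H_page k p)" using H_page_mem_unemb_t[OF k(1) pk] z(1) k by simp
  moreover have "unemb_t k (north z) \<in> set (H_page k p)"
    using H_page_mem_unemb_t[OF k(1) pk, of "north z"] z(2) k by (simp add: north_def)
  ultimately have "unemb_t k z \<in> set (H_page k p)" "north (unemb_t k z) \<in> set (H_page k p)"
    by (simp_all add: unemb_t_north)
  from pg.vertical_edge_of_h_on_v[OF pk this] obtain q where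
    q: "q \<in> {1..u (src k)}" "unemb_t k z \<in> set (V_page k q)"
      "north (unemb_t k z) \<in> set (V_page k q)"
    by blast
  then have "z \<in> set (H_piece k p q) \<and> north z \<in> set (H_piece k p q)"
    using z k by (simp add: H_piece_def north_def unemb_t_def)
  with k q show ?thesis by blast
qed

theorem H_joins_pieces_if_straight:
  assumes st: "straight_road_map Vs Vt r src tgt m u H V" and a: "\<alpha> \<in> Vt" and p: "p \<in> {1..u \<alpha>}"
  shows "hjoin [(int (aT m \<alpha>) - int (u \<alpha>) + int p, 1)]
               (pieces_H r src tgt m u H V \<alpha> p @ [[(int p, int (bT r src tgt m \<alpha>))]])
         = Some (H \<alpha> p)"
proof -
  let ?Ys = "concat (map (\<lambda>k. map (H_piece k p) [1..<Suc (u (src k))]) (arrows_into r tgt \<alpha>))"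
  have "hjoin [hd (H \<alpha> p)] (?Ys @ [[last (H \<alpha> p)]]) = Some (H \<alpha> p)"
  proof (rule hjoin_reassembles[OF horizontal_road(1)[OF a p]])
    show "\<forall>Y\<in>set ?Ys. sublist Y (H \<alpha> p) \<and> Y \<noteq> []"
      using H_piece_sublist[OF st] p by (auto simp: arrows_into_mem)
    show "sorted_wrt (\<lambda>Y Y'. \<forall>z\<in>set Y. \<forall>z'\<in>set Y'. level z \<le> level z') ?Ys"
    proof (rule sorted_wrt_concat_map_map[OF arrows_into_sorted sorted_wrt_upt], intro ballI)
      fix k q k' q' z z'
      assume k: "k \<in> set (arrows_into r tgt \<alpha>)" "k' \<in> set (arrows_into r tgt \<alpha>)"
        and q: "q \<in> set [1..<Suc (u (src k))]" "q' \<in> set [1..<Suc (u (src k'))]"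
        and lt: "k < k' \<or> k = k' \<and> q < q'" and z: "z \<in> set (H_piece k p q)"
          "z' \<in> set (H_piece k' p q')"
      from k q p have "k \<in> {1..r}" "k' \<in> {1..r}" "tgt k' = tgt k" "p \<in> {1..u (tgt k)}"
        "q \<in> {1..u (src k)}" "q' \<in> {1..u (src k')}"
        by (auto simp: arrows_into_mem)
      from H_pieces_ordered[OF st this lt z] show "level z \<le> level z'" .
    qed
    show "\<exists>Y\<in>set ?Ys. z \<in> set Y \<and> north z \<in> set Y"
      if "z \<in> set (H \<alpha> p)" "north z \<in> set (H \<alpha> p)" for z
      using H_vertical_edge_in_piece[OF st a p that] by (force simp: arrows_into_mem)
  qed
  then show ?thesis using horizontal_road(3,4)[OF a p] by (simp add: pieces_H_eq)
qed

definition unemb_s :: "nat \<Rightarrow> pt \<Rightarrow> pt" where "unemb_s k z = (fst z - row_off k, snd z)"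

lemma emb_s_unemb_s [simp]: "emb_s k (unemb_s k z) = z" by (simp add: unemb_s_def embS_def)
lemma unemb_s_emb_s [simp]: "unemb_s k (emb_s k z) = z" by (simp add: unemb_s_def embS_def)
lemma level_unemb_s: "level (unemb_s k z) = level z + row_off k"
  by (simp add: unemb_s_def level_def)
lemma unemb_s_east: "unemb_s k (east z) = east (unemb_s k z)" by (simp add: unemb_s_def east_def)

lemma V_page_mem_unemb_s:
  assumes k: "k \<in> {1..r}" and q: "q \<in> {1..u (src k)}" and z: "z \<in> set (V (src k) q)"
    and c: "row_off k < fst z" "fst z \<le> row_off k + rows k"
  shows "unemb_s k z \<in> set (V_page k q)"
  using V_page_spec(4)[OF k q, of "unemb_s k z"] z c by (simp add: unemb_s_def embS_def)

text \<open>The piece of (c) traversed from P^k_pq to Q^k_pq, regarded in A_src(k), as a filter of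
V^src(k)_q; the pieces of (c) are their reversals.\<close>

definition V_piece :: "nat \<Rightarrow> nat \<Rightarrow> nat \<Rightarrow> pt list" where
  "V_piece k p q = filter (\<lambda>z. row_off k < fst z \<and> fst z \<le> row_off k + rows k \<and>
      unemb_s k z \<in> set (H_page k p))
     (V (src k) q)"

lemma pieces_V_eq:
  "pieces_V r src tgt m u H V \<beta> q =
     concat (map (\<lambda>k. map (\<lambda>p. rev (V_piece k p q)) [1..<Suc (u (tgt k))]) (arrows_from r src \<beta>))"
proof -
  have "map (emb_s k) (segV src tgt m H V k p q) = V_piece k p q" for k p
  proof -
    have "segV src tgt m H V k p q = filter (\<lambda>x. x \<in> set (H_page k p))
        (map (unemb_s k) (filter (\<lambda>x. row_off k < fst x \<and>
          fst x \<le> row_off k + rows k) (V (src k) q)))"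
      by (simp add: segV_def H_page_def V_page_def restrS_def rows_def unemb_s_def[abs_def])
    then show ?thesis by (simp add: map_inverse_filter_map_filter V_piece_def)
  qed
  then show ?thesis by (simp add: pieces_V_def)
qed

lemma V_piece_sublist:
  assumes st: "straight_road_map Vs Vt r src tgt m u H V" and k: "k \<in> {1..r}"
    and p: "p \<in> {1..u (tgt k)}" and q: "q \<in> {1..u (src k)}"
  shows "sublist (V_piece k p q) (V (src k) q)" "V_piece k p q \<noteq> []"
proof -
  interpret pg: straight_page "rows k" "cols k" "{1..u (tgt k)}" "{1..u (src k)}" "H_page k"
    "V_page k"
    by (rule straight_page_at[OF st k])
  define f where "f z \<longleftrightarrow> row_off k < fst z \<and> fst z \<le> row_off k + rows k \<and>
      unemb_s k z \<in> set (H_page k p)" for z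
  have L: "lattice_path (V (src k) q)" using vertical_road(1)[OF _ q] arrow_ends[OF k] by simp
  have memv: "unemb_s k z \<in> set (V_page k q)" if "z \<in> set (V (src k) q)" "f z" for z
    using V_page_mem_unemb_s[OF k q that(1)] that(2) by (simp add: f_def)
  have conv: "f w" if "z1 \<in> set (V (src k) q)" "z2 \<in> set (V (src k) q)" "w \<in> set (V (src k) q)"
    "f z1" "f z2" "level z1 \<le> level w" "level w \<le> level z2" for z1 z2 w
  proof -
    have cw: "row_off k < fst w" "fst w \<le> row_off k + rows k"
      using lattice_path_mono[OF L that(1,3,6)] lattice_path_mono[OF L that(3,2,7)] that(4,5)
      by (auto simp: f_def)
    have "unemb_s k w \<in> set (V_page k q)" using V_page_mem_unemb_s[OF k q that(3) cw] .
    with pg.v_between_in_h[OF p q _ memv[OF that(1,4)] _ memv[OF that(2,5)], of "unemb_s k w"]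
      that(4-7) cw show ?thesis by (simp add: f_def level_unemb_s)
  qed
  obtain x where x: "x \<in> set (H_page k p)" "x \<in> set (V_page k q)" using pg.h_meets_v[OF p q]
    by blast
  then have "emb_s k x \<in> set (V (src k) q)" "1 \<le> fst x" "fst x \<le> rows k"
    using V_page_spec(4)[OF k q] by auto
  moreover have "f (emb_s k x)"
    unfolding f_def unemb_s_emb_s using x(1) calculation(2,3) by (simp add: embS_def)
  ultimately have ex: "\<exists>z\<in>set (V (src k) q). f z" by blast
  show "sublist (V_piece k p q) (V (src k) q)"
    unfolding V_piece_def f_def[symmetric] by (rule lattice_path_filter(2)[OF L conv ex])
  show "V_piece k p q \<noteq> []" using ex by (simp add: V_piece_def f_def[symmetric] filter_empty_conv)
qed

lemma V_pieces_ordered: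
  assumes st: "straight_road_map Vs Vt r src tgt m u H V"
    and k: "k \<in> {1..r}" "k' \<in> {1..r}" "src k' = src k" and q: "q \<in> {1..u (src k)}"
    and p: "p \<in> {1..u (tgt k)}" "p' \<in> {1..u (tgt k')}" and lt: "k < k' \<or> (k = k' \<and> p < p')"
    and z: "z \<in> set (V_piece k p q)" and z': "z' \<in> set (V_piece k' p' q)"
  shows "level z' \<le> level z"
  using lt
proof
  assume kk: "k < k'"
  have L: "lattice_path (V (src k) q)" using vertical_road(1)[OF _ q] arrow_ends[OF k(1)] by simp
  have "block_offset src (\<lambda>k. m (tgt k)) k + m (tgt k) \<le> block_offset src (\<lambda>k. m (tgt k)) k'"
    using block_offset_add_le[of k k' src] kk k by simp
  then have "row_off k + rows k \<le> row_off k'" by (simp add: row_off_eq rows_def)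
  then have "fst z < fst z'" using z z' by (simp add: V_piece_def)
  moreover have "z \<in> set (V (src k) q)" "z' \<in> set (V (src k) q)" using z z' k(3)
    by (simp_all add: V_piece_def)
  ultimately show ?thesis using lattice_path_mono[OF L, of z z'] by fastforce
next
  assume kk: "k = k' \<and> p < p'"
  interpret pg: straight_page "rows k" "cols k" "{1..u (tgt k)}" "{1..u (src k)}" "H_page k"
    "V_page k"
    by (rule straight_page_at[OF st k(1)])
  have pp: "p' \<in> {1..u (tgt k)}" "p < p'" using p kk by auto
  have "unemb_s k z \<in> set (V_page k q)" "unemb_s k z' \<in> set (V_page k q)"
    using V_page_mem_unemb_s[OF k(1) q] z z' kk by (auto simp: V_piece_def)
  moreover have "unemb_s k z \<in> set (H_page k p)" "unemb_s k z' \<in> set (H_page k p')"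
    using z z' kk by (auto simp: V_piece_def)
  ultimately have "level (unemb_s k z') < level (unemb_s k z)"
    using pg.v_meets_south_h_first[OF _ pp(1) p(1) q H_page_order[OF k(1) p(1) pp]] p(1) by blast
  then show ?thesis by (simp add: level_unemb_s)
qed

lemma V_horizontal_edge_in_piece:
  assumes st: "straight_road_map Vs Vt r src tgt m u H V" and b: "\<beta> \<in> Vs" and q: "q \<in> {1..u \<beta>}"
    and z: "z \<in> set (V \<beta> q)" "east z \<in> set (V \<beta> q)"
  shows "\<exists>k\<in>{1..r}. src k = \<beta> \<and> (\<exists>p\<in>{1..u (tgt k)}. z \<in> set (V_piece k p q) \<and>
      east z \<in> set (V_piece k p q))"
proof -
  have "1 \<le> fst z" "fst z \<le> int (aS r src tgt m \<beta>)"
    using vertical_road(2)[OF b q] z(1) by (auto simp: in_grid_def)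
  from page_of_row_exists[OF b this] obtain k where
    k: "k \<in> {1..r}" "src k = \<beta>" "row_off k < fst z" "fst z \<le> row_off k + rows k" by blast
  interpret pg: straight_page "rows k" "cols k" "{1..u (tgt k)}" "{1..u (src k)}" "H_page k"
    "V_page k"
    by (rule straight_page_at[OF st k(1)])
  have qk: "q \<in> {1..u (src k)}" using q k(2) by simp
  have "{1..u (tgt k)} \<noteq> {}" using sizeT arrow_ends[OF k(1)] by force
  have "unemb_s k z \<in> set (V_page k q)" using V_page_mem_unemb_s[OF k(1) qk] z(1) k by simp
  moreover have "unemb_s k (east z) \<in> set (V_page k q)"
    using V_page_mem_unemb_s[OF k(1) qk, of "east z"] z(2) k by (simp add: east_def)
  ultimately have "unemb_s k z \<in> set (V_page k q)" "east (unemb_s k z) \<in> set (V_page k q)"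
    by (simp_all add: unemb_s_east)
  from pg.horizontal_edge_of_v_on_h[OF \<open>{1..u (tgt k)} \<noteq> {}\<close> qk this] obtain p where
    p: "p \<in> {1..u (tgt k)}" "unemb_s k z \<in> set (H_page k p)" "east (unemb_s k z) \<in> set (H_page k p)"
    by blast
  then have "z \<in> set (V_piece k p q) \<and> east z \<in> set (V_piece k p q)"
    using z k by (simp add: V_piece_def east_def unemb_s_def)
  with k p show ?thesis by blast
qed

text \<open>Joining southwards is joining eastwards after exchanging rows and columns; the swap
turns V^beta_q, read from its north end, into a lattice path whose vertical edges are the
horizontal edges of V^beta_q.\<close>

theorem V_joins_pieces_if_straight:
  assumes st: "straight_road_map Vs Vt r src tgt m u H V" and b: "\<beta> \<in> Vs" and q: "q \<in> {1..u \<beta>}"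
  shows "vjoin [(1, int (bS m \<beta>) - int (u \<beta>) + int q)]
               (pieces_V r src tgt m u H V \<beta> q @ [[(int (aS r src tgt m \<beta>), int q)]])
         = Some (rev (V \<beta> q))"
proof -
  define L where "L = map prod.swap (rev (V \<beta> q))"
  let ?piece = "\<lambda>k p. map prod.swap (rev (V_piece k p q))"
  let ?Ys = "concat (map (\<lambda>k. map (?piece k) [1..<Suc (u (tgt k))]) (arrows_from r src \<beta>))"
  have VL: "lattice_path (V \<beta> q)" using vertical_road(1)[OF b q] .
  have inL: "y \<in> set L \<longleftrightarrow> prod.swap y \<in> set (V \<beta> q)" for y
    unfolding L_def by (metis set_rev set_map image_iff swap_swap)
  have "hjoin [hd L] (?Ys @ [[last L]]) = Some L"
  proof (rule hjoin_reassembles)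
    show "lattice_path L" unfolding L_def by (rule lattice_path_swap_rev[OF VL])
    show "\<forall>Y\<in>set ?Ys. sublist Y L \<and> Y \<noteq> []"
      using V_piece_sublist[OF st] q
      by (auto simp: arrows_from_mem L_def intro!: map_mono_sublist)
    show "sorted_wrt (\<lambda>Y Y'. \<forall>z\<in>set Y. \<forall>z'\<in>set Y'. level z \<le> level z') ?Ys"
    proof (rule sorted_wrt_concat_map_map[OF arrows_from_sorted sorted_wrt_upt], intro ballI)
      fix k p k' p' y y'
      assume k: "k \<in> set (arrows_from r src \<beta>)" "k' \<in> set (arrows_from r src \<beta>)"
        and p: "p \<in> set [1..<Suc (u (tgt k))]" "p' \<in> set [1..<Suc (u (tgt k'))]"
        and lt: "k < k' \<or> k = k' \<and> p < p'" and y: "y \<in> set (?piece k p)" "y' \<in> set (?piece k' p')"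
      from k p q have "k \<in> {1..r}" "k' \<in> {1..r}" "src k' = src k" "q \<in> {1..u (src k)}"
        "p \<in> {1..u (tgt k)}" "p' \<in> {1..u (tgt k')}"
        by (auto simp: arrows_from_mem)
      moreover have "prod.swap y \<in> set (V_piece k p q)" "prod.swap y' \<in> set (V_piece k' p' q)"
        using y by auto
      ultimately have "level (prod.swap y') \<le> level (prod.swap y)"
        using V_pieces_ordered[OF st _ _ _ _ _ _ lt] by blast
      then show "level y \<le> level y'" by (simp add: level_swap)
    qed
    show "\<exists>Y\<in>set ?Ys. y \<in> set Y \<and> north y \<in> set Y" if "y \<in> set L" "north y \<in> set L" for y
    proof -
      define z where "z = prod.swap (north y)"
      have "prod.swap y = east z" by (simp add: z_def east_def north_def prod.swap_def)
      with that have "z \<in> set (V \<beta> q)" "east z \<in> set (V \<beta> q)" by (simp_all add: inL z_def)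
      from V_horizontal_edge_in_piece[OF st b q this] obtain k p where
        "k \<in> {1..r}" "src k = \<beta>" "p \<in> {1..u (tgt k)}" "z \<in> set (V_piece k p q)"
        "east z \<in> set (V_piece k p q)"
        by blast
      moreover have "y = prod.swap (east z)" using \<open>prod.swap y = east z\<close> by (metis swap_swap)
      moreover have "north y = prod.swap z" by (simp add: z_def)
      ultimately show ?thesis by (force simp: arrows_from_mem)
    qed
  qed
  moreover have "hd L = prod.swap (1, int (bS m \<beta>) - int (u \<beta>) + int q)"
    "last L = prod.swap (int (aS r src tgt m \<beta>), int q)"
    using vertical_road(3,4)[OF b q] lattice_path_nonempty[OF VL]
    by (simp_all add: L_def hd_map last_map hd_rev last_rev)
  ultimately show ?thesis
    by (simp add: vjoin_swap pieces_V_eq map_concat comp_def L_def)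
qed

lemma pieces_H_on_V:
  assumes a: "\<alpha> \<in> Vt" and p: "p \<in> {1..u \<alpha>}"
    and c: "c \<in> \<Union> (set ` set (pieces_H r src tgt m u H V \<alpha> p))"
  shows "\<exists>k\<in>{1..r}. \<exists>x. tgt k = \<alpha> \<and>
          1 \<le> fst x \<and> fst x \<le> int (m (tgt k)) \<and> 1 \<le> snd x \<and> snd x \<le> int (m (src k)) \<and>
          c = embT src tgt m k x \<and>
          (\<exists>q\<in>{1..u (src k)}. embS src tgt m k x \<in> set (V (src k) q))"
proof -
  from c obtain k q where kq: "k \<in> set (arrows_into r tgt \<alpha>)" "q \<in> set [1..<Suc (u (src k))]"
    "c \<in> emb_t k ` set (segH src tgt m H V k p q)"
    unfolding pieces_H_def by auto
  then obtain x where x: "x \<in> set (segH src tgt m H V k p q)" "c = emb_t k x" by blast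
  have k: "k \<in> {1..r}" "tgt k = \<alpha>" and q: "q \<in> {1..u (src k)}"
    using kq(1,2) by (auto simp: arrows_into_mem)
  have pk: "p \<in> {1..u (tgt k)}" using p k by simp
  have "x \<in> set (H_page k p)" "x \<in> set (V_page k q)" using x(1)
    by (auto simp: segH_def H_page_def V_page_def)
  then have "1 \<le> snd x" "snd x \<le> cols k" "emb_s k x \<in> set (V (src k) q)" "1 \<le> fst x"
    "fst x \<le> rows k"
    using H_page_spec(4)[OF k(1) pk] V_page_spec(4)[OF k(1) q] by auto
  with k q x(2) show ?thesis unfolding rows_def cols_def by (intro bexI[of _ k] exI[of _ x]) auto
qed

lemma pieces_V_on_H:
  assumes b: "\<beta> \<in> Vs" and q: "q \<in> {1..u \<beta>}"
    and c: "c \<in> \<Union> (set ` set (pieces_V r src tgt m u H V \<beta> q))"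
  shows "\<exists>k\<in>{1..r}. \<exists>x. src k = \<beta> \<and>
          1 \<le> fst x \<and> fst x \<le> int (m (tgt k)) \<and> 1 \<le> snd x \<and> snd x \<le> int (m (src k)) \<and>
          c = embS src tgt m k x \<and>
          (\<exists>p\<in>{1..u (tgt k)}. embT src tgt m k x \<in> set (H (tgt k) p))"
proof -
  from c obtain k p where kp: "k \<in> set (arrows_from r src \<beta>)" "p \<in> set [1..<Suc (u (tgt k))]"
    "c \<in> emb_s k ` set (segV src tgt m H V k p q)"
    unfolding pieces_V_def by auto
  then obtain x where x: "x \<in> set (segV src tgt m H V k p q)" "c = emb_s k x" by blast
  have k: "k \<in> {1..r}" "src k = \<beta>" and p: "p \<in> {1..u (tgt k)}"
    using kp(1,2) by (auto simp: arrows_from_mem)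
  have qk: "q \<in> {1..u (src k)}" using q k by simp
  have "x \<in> set (H_page k p)" "x \<in> set (V_page k q)" using x(1)
    by (auto simp: segV_def H_page_def V_page_def)
  then have "1 \<le> snd x" "snd x \<le> cols k" "emb_t k x \<in> set (H (tgt k) p)" "1 \<le> fst x"
    "fst x \<le> rows k"
    using H_page_spec(4)[OF k(1) p] V_page_spec(4)[OF k(1) qk] by auto
  with k p x(2) show ?thesis unfolding rows_def cols_def by (intro bexI[of _ k] exI[of _ x]) auto
qed

theorem straight_if_joins:
  assumes joinH: "\<forall>\<alpha>\<in>Vt. \<forall>p\<in>{1..u \<alpha>}.
         hjoin [(int (aT m \<alpha>) - int (u \<alpha>) + int p, 1)]
               (pieces_H r src tgt m u H V \<alpha> p @ [[(int p, int (bT r src tgt m \<alpha>))]])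
         = Some (H \<alpha> p)"
    and joinV: "\<forall>\<beta>\<in>Vs. \<forall>q\<in>{1..u \<beta>}.
         vjoin [(1, int (bS m \<beta>) - int (u \<beta>) + int q)]
               (pieces_V r src tgt m u H V \<beta> q @ [[(int (aS r src tgt m \<beta>), int q)]])
         = Some (rev (V \<beta> q))"
  shows "straight_road_map Vs Vt r src tgt m u H V"
  unfolding straight_road_map_def
proof (intro conjI ballI)
  fix \<alpha> p c assume a: "\<alpha> \<in> Vt" and p: "p \<in> {1..u \<alpha>}" and "c \<in> corners (H \<alpha> p)"
  moreover have "hjoin [(int (aT m \<alpha>) - int (u \<alpha>) + int p, 1)]
      (pieces_H r src tgt m u H V \<alpha> p @ [[(int p, int (bT r src tgt m \<alpha>))]]) = Some (H \<alpha> p)"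
    using joinH a p by blast
  ultimately have "c \<in> \<Union> (set ` set (pieces_H r src tgt m u H V \<alpha> p))"
    using corners_hjoin by blast
  then show "\<exists>k\<in>{1..r}. \<exists>x. tgt k = \<alpha> \<and>
          1 \<le> fst x \<and> fst x \<le> int (m (tgt k)) \<and> 1 \<le> snd x \<and> snd x \<le> int (m (src k)) \<and>
          c = embT src tgt m k x \<and>
          (\<exists>q\<in>{1..u (src k)}. embS src tgt m k x \<in> set (V (src k) q))"
    by (rule pieces_H_on_V[OF a p])
next
  fix \<beta> q c assume b: "\<beta> \<in> Vs" and q: "q \<in> {1..u \<beta>}" and "c \<in> corners (V \<beta> q)"
  moreover have "vjoin [(1, int (bS m \<beta>) - int (u \<beta>) + int q)]
      (pieces_V r src tgt m u H V \<beta> q @ [[(int (aS r src tgt m \<beta>), int q)]]) = Some (rev (V \<beta> q))"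
    using joinV b q by blast
  ultimately have "c \<in> \<Union> (set ` set (pieces_V r src tgt m u H V \<beta> q))"
    using corners_vjoin[OF _ vertical_road(1)[OF b q]] by blast
  then show "\<exists>k\<in>{1..r}. \<exists>x. src k = \<beta> \<and>
          1 \<le> fst x \<and> fst x \<le> int (m (tgt k)) \<and> 1 \<le> snd x \<and> snd x \<le> int (m (src k)) \<and>
          c = embS src tgt m k x \<and>
          (\<exists>p\<in>{1..u (tgt k)}. embT src tgt m k x \<in> set (H (tgt k) p))"
    by (rule pieces_V_on_H[OF b q])
qed

end

theorem lemma2p2:
  fixes Vs Vt :: "'v set" and r :: nat and src tgt :: "nat \<Rightarrow> 'v"
    and m u :: "'v \<Rightarrow> nat" and H V :: "'v \<Rightarrow> nat \<Rightarrow> pt list"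
  assumes bip: "Vs \<inter> Vt = {}"
    and arrows: "\<forall>k\<in>{1..r}. src k \<in> Vs \<and> tgt k \<in> Vt"
    and stdT: "\<forall>\<alpha>\<in>Vt. 0 < u \<alpha> \<and> u \<alpha> \<le> min (aT m \<alpha>) (bT r src tgt m \<alpha>) \<and> u \<alpha> \<le> vT r src tgt u \<alpha>"
    and stdS: "\<forall>\<beta>\<in>Vs. 0 < u \<beta> \<and> u \<beta> \<le> min (aS r src tgt m \<beta>) (bS m \<beta>) \<and> u \<beta> \<le> vS r src tgt u \<beta>"
    and rm: "road_map Vs Vt r src tgt m u H V"
  shows "straight_road_map Vs Vt r src tgt m u H V \<longleftrightarrow>
     ((\<forall>k\<in>{1..r}. \<forall>p\<in>{1..u (tgt k)}. \<forall>q\<in>{1..u (src k)}. connected_inter src tgt m H V k p q) \<and>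
      (\<forall>\<alpha>\<in>Vt. \<forall>p\<in>{1..u \<alpha>}.
         hjoin [(int (aT m \<alpha>) - int (u \<alpha>) + int p, 1)]
               (pieces_H r src tgt m u H V \<alpha> p @ [[(int p, int (bT r src tgt m \<alpha>))]])
         = Some (H \<alpha> p)) \<and>
      (\<forall>\<beta>\<in>Vs. \<forall>q\<in>{1..u \<beta>}.
         vjoin [(1, int (bS m \<beta>) - int (u \<beta>) + int q)]
               (pieces_V r src tgt m u H V \<beta> q @ [[(int (aS r src tgt m \<beta>), int q)]])
         = Some (rev (V \<beta> q))))"
proof -
  interpret road_map_setting Vs Vt r src tgt m u H V
    using arrows stdT stdS rm by unfold_locales auto
  show ?thesis (is "?straight \<longleftrightarrow> ?a \<and> ?b \<and> ?c")
  proof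
    assume st: ?straight
    show "?a \<and> ?b \<and> ?c"
      using connected_inter_if_straight[OF st] H_joins_pieces_if_straight[OF st]
        V_joins_pieces_if_straight[OF st] by blast
  next
    assume "?a \<and> ?b \<and> ?c"
    then show ?straight using straight_if_joins by blast
  qed
qed

end
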